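(* Let $(T,\mathbf r)$ be the ranked fission tree of $Q$ and $\mathbf U$ the kernel flag of $Q$ (defined below). Then (i) $\operatorname{Stab}_{W_{\mathfrak g}}(\mathbf U)\cong\widetilde{\mathrm{Aut}}(T,\mathbf r)$, where for any ranked tree the group $\widetilde{\mathrm{Aut}}$ is defined recursively by $\widetilde{\mathrm{Aut}}(\text{single node of rank } r)=\mathrm S_r$ and $$\widetilde{\mathrm{Aut}}(T,\mathbf r)=\prod_{t\in\widetilde{\mathcal T}}\mathrm S_{n(t)}\wr\widetilde{\mathrm{Aut}}(t,\mathbf r|_t);$$ (ii) the automorphism group satisfies $\mathrm{Aut}(T,\mathbf r)\cong\prod_{t\in\widetilde{\mathcal T}}\mathrm S_{n(t)}\wr\mathrm{Aut}(t,\mathbf r|_t)$, and the automorphism group of a single-node ranked tree is trivial (so $\mathrm{Aut}(T,\mathbf r)$ is obtained by the same recursion as $\widetilde{\mathrm{Aut}}$ with trivial groups at the leaves).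
   Context: Let $n\ge2$, $\mathfrak g=\mathfrak{sl}_n(\mathbb C)$, $\mathfrak t=\{x\in\mathbb C^n:\sum x_a=0\}$, $W_{\mathfrak g}=\mathrm S_n$ permuting coordinates. Fix $p\ge1$, $A_1,\dots,A_p\in\mathfrak t$. For $l\in\{1,\dots,p+1\}$ let $P_l$ be the partition of $\underline n=\{1,\dots,n\}$ in which $a,b$ lie in the same part iff $(A_j)_a=(A_j)_b$ for all $j$ with $l\le j\le p$ (so $P_{p+1}=\{\underline n\}$). Let $U_l=\{x\in\mathfrak t: x_a=x_b$ whenever $a,b$ are in the same part of $P_l\}$ and $\operatorname{Stab}_{W_{\mathfrak g}}(\mathbf U)=\{w\in\mathrm S_n: w(U_l)\subseteq U_l\ \forall l\in\{1,\dots,p\}\}$. Ranked fission tree $(T,\mathbf r)$: nodes are pairs $(l,L)$ with $L$ a part of $P_l$, $1\le l\le p+1$; the root is $(p+1,\underline n)$; the parent of $(l,L)$, $l\le p$, is $(l+1,L')$ with $L'\supseteq L$ the part of $P_{l+1}$; the rank is $\mathbf r(l,L)=|L|$; leaves are the nodes at level 1. In general a ranked tree is a rooted tree with a positive-integer rank on nodes; an isomorphism of ranked trees is a bijection of node sets sending root to root, commuting with the parent maps and preserving ranks; $\mathrm{Aut}(T,\mathbf r)$ is the group of self-isomorphisms. The maximal proper subtrees of $T$ are the subtrees $t$ consisting of a child of the root and all its descendants, with restricted rank $\mathbf r|_t$; $\widetilde{\mathcal T}$ is a set of representatives of their isomorphism classes and $n(t)$ is the number of maximal proper subtrees isomorphic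 to $t$. For a group $P$ and $m\ge0$, $\mathrm S_m\wr P=\mathrm S_m\ltimes P^m$ with $\sigma\cdot(x_1,\dots,x_m)=(x_{\sigma^{-1}(1)},\dots,x_{\sigma^{-1}(m)})$. *)

theory Defs
  imports Complex_Main "HOL-Algebra.Sym_Groups"
begin

definition symg :: "nat \<Rightarrow> (nat \<Rightarrow> nat) monoid" where
  "symg r = \<lparr>carrier = {s. s permutes {..<r}}, mult = (\<circ>), one = id\<rparr>"

text \<open>Wreath product S_m wr P = S_m semidirect P^m, elements (s, [x_0,...,x_(m-1)]),
  with s.(x_0,...,x_(m-1)) = (x_(s^-1 0), ..., x_(s^-1 (m-1))) and
  (s,x)(t,y) = (s t, x (s.y)).\<close>
definition wreath :: "nat \<Rightarrow> ('a, 'b) monoid_scheme \<Rightarrow> ((nat \<Rightarrow> nat) \<times> 'a list) monoid" where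
  "wreath m P = \<lparr>carrier = {(s, xs). s permutes {..<m} \<and> length xs = m \<and> set xs \<subseteq> carrier P},
     mult = (\<lambda>(s, xs) (t, ys). (s \<circ> t, map (\<lambda>i. mult P (xs ! i) (ys ! (inv_into UNIV s i))) [0..<m])),
     one = (id, replicate m (one P))\<rparr>"

definition dprod :: "('a, 'b) monoid_scheme list \<Rightarrow> 'a list monoid" where
  "dprod Gs = \<lparr>carrier = {xs. length xs = length Gs \<and> (\<forall>i<length Gs. xs ! i \<in> carrier (Gs ! i))},
     mult = (\<lambda>xs ys. map (\<lambda>i. mult (Gs ! i) (xs ! i) (ys ! i)) [0..<length Gs]),
     one = map (\<lambda>G. one G) Gs\<rparr>"

text \<open>Transport of a group structure along an (injective) map; used only to put
  all groups occurring in the recursive definition of tilde-Aut on one element type.\<close>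
definition transport :: "('a \<Rightarrow> 'c) \<Rightarrow> ('a, 'b) monoid_scheme \<Rightarrow> 'c monoid" where
  "transport f G = \<lparr>carrier = f ` carrier G,
     mult = (\<lambda>x y. f (mult G (inv_into (carrier G) f x) (inv_into (carrier G) f y))),
     one = f (one G)\<rparr>"

datatype gel = GPerm "nat \<Rightarrow> nat" | GWr "nat \<Rightarrow> nat" "gel list" | GProd "gel list"

definition gsym :: "nat \<Rightarrow> gel monoid" where
  "gsym r = transport GPerm (symg r)"

definition gwreath :: "nat \<Rightarrow> gel monoid \<Rightarrow> gel monoid" where
  "gwreath m P = transport (\<lambda>(s, xs). GWr s xs) (wreath m P)"

definition gprod :: "gel monoid list \<Rightarrow> gel monoid" where
  "gprod Gs = transport GProd (dprod Gs)"

record 'v rtree =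
  rt_nodes :: "'v set"
  rt_root :: 'v
  rt_par :: "'v \<Rightarrow> 'v"
  rt_rank :: "'v \<Rightarrow> nat"

definition rt_iso :: "'v rtree \<Rightarrow> 'w rtree \<Rightarrow> ('v \<Rightarrow> 'w) \<Rightarrow> bool" where
  "rt_iso T1 T2 f \<longleftrightarrow> bij_betw f (rt_nodes T1) (rt_nodes T2) \<and> f (rt_root T1) = rt_root T2 \<and>
     (\<forall>v\<in>rt_nodes T1 - {rt_root T1}. f (rt_par T1 v) = rt_par T2 (f v)) \<and>
     (\<forall>v\<in>rt_nodes T1. rt_rank T2 (f v) = rt_rank T1 v)"

definition rt_isomorphic :: "'v rtree \<Rightarrow> 'w rtree \<Rightarrow> bool" where
  "rt_isomorphic T1 T2 \<longleftrightarrow> (\<exists>f. rt_iso T1 T2 f)"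

definition rt_aut :: "'v rtree \<Rightarrow> ('v \<Rightarrow> 'v) monoid" where
  "rt_aut T = \<lparr>carrier = {f. rt_iso T T f \<and> (\<forall>x. x \<notin> rt_nodes T \<longrightarrow> f x = x)},
     mult = (\<circ>), one = id\<rparr>"

definition rt_children :: "'v rtree \<Rightarrow> 'v set" where
  "rt_children T = {c \<in> rt_nodes T. c \<noteq> rt_root T \<and> rt_par T c = rt_root T}"

definition rt_subtree :: "'v rtree \<Rightarrow> 'v \<Rightarrow> 'v rtree" where
  "rt_subtree T c = \<lparr>rt_nodes = {v \<in> rt_nodes T. \<exists>k. (rt_par T ^^ k) v = c},
     rt_root = c, rt_par = rt_par T, rt_rank = rt_rank T\<rparr>"

definition rt_reps :: "'v rtree \<Rightarrow> 'v list \<Rightarrow> bool" where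
  "rt_reps T cs \<longleftrightarrow> set cs \<subseteq> rt_children T \<and>
     (\<forall>c\<in>rt_children T. \<exists>d\<in>set cs. rt_isomorphic (rt_subtree T c) (rt_subtree T d)) \<and>
     (\<forall>i<length cs. \<forall>j<length cs. i \<noteq> j \<longrightarrow>
        \<not> rt_isomorphic (rt_subtree T (cs ! i)) (rt_subtree T (cs ! j)))"

definition rt_some_reps :: "'v rtree \<Rightarrow> 'v list" where
  "rt_some_reps T = (SOME cs. rt_reps T cs)"

definition rt_mult :: "'v rtree \<Rightarrow> 'v \<Rightarrow> nat" where
  "rt_mult T c = card {d \<in> rt_children T. rt_isomorphic (rt_subtree T d) (rt_subtree T c)}"

fun atilde_aux :: "nat \<Rightarrow> 'v rtree \<Rightarrow> gel monoid" where
  "atilde_aux 0 T = gsym (rt_rank T (rt_root T))"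
| "atilde_aux (Suc k) T =
     (if rt_nodes T = {rt_root T} then gsym (rt_rank T (rt_root T))
      else gprod (map (\<lambda>c. gwreath (rt_mult T c) (atilde_aux k (rt_subtree T c)))
                      (rt_some_reps T)))"

definition atilde :: "'v rtree \<Rightarrow> gel monoid" where
  "atilde T = atilde_aux (card (rt_nodes T)) T"

text \<open>A j a is the a-th coordinate of A_j (1 \<le> j \<le> p, 1 \<le> a \<le> n).
  Vectors of C^n are functions nat \<Rightarrow> complex vanishing off {1..n}.\<close>
definition cartan_t :: "nat \<Rightarrow> (nat \<Rightarrow> complex) set" where
  "cartan_t n = {x. (\<forall>a. a \<notin> {1..n} \<longrightarrow> x a = 0) \<and> (\<Sum>a=1..n. x a) = 0}"

definition same_part :: "nat \<Rightarrow> (nat \<Rightarrow> nat \<Rightarrow> complex) \<Rightarrow> nat \<Rightarrow> nat \<Rightarrow> nat \<Rightarrow> bool" where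
  "same_part p A l a b \<longleftrightarrow> (\<forall>j. l \<le> j \<and> j \<le> p \<longrightarrow> A j a = A j b)"

definition parts :: "nat \<Rightarrow> nat \<Rightarrow> (nat \<Rightarrow> nat \<Rightarrow> complex) \<Rightarrow> nat \<Rightarrow> nat set set" where
  "parts n p A l = (\<lambda>a. {b \<in> {1..n}. same_part p A l a b}) ` {1..n}"

definition Ukf :: "nat \<Rightarrow> nat \<Rightarrow> (nat \<Rightarrow> nat \<Rightarrow> complex) \<Rightarrow> nat \<Rightarrow> (nat \<Rightarrow> complex) set" where
  "Ukf n p A l = {x \<in> cartan_t n. \<forall>a\<in>{1..n}. \<forall>b\<in>{1..n}. same_part p A l a b \<longrightarrow> x a = x b}"

definition perm_act :: "(nat \<Rightarrow> nat) \<Rightarrow> (nat \<Rightarrow> complex) \<Rightarrow> (nat \<Rightarrow> complex)" where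
  "perm_act w x = (\<lambda>a. x (inv_into UNIV w a))"

definition stab_group :: "nat \<Rightarrow> nat \<Rightarrow> (nat \<Rightarrow> nat \<Rightarrow> complex) \<Rightarrow> (nat \<Rightarrow> nat) monoid" where
  "stab_group n p A = \<lparr>carrier = {w. w permutes {1..n} \<and>
        (\<forall>l\<in>{1..p}. perm_act w ` Ukf n p A l \<subseteq> Ukf n p A l)},
     mult = (\<circ>), one = id\<rparr>"

definition fission_tree :: "nat \<Rightarrow> nat \<Rightarrow> (nat \<Rightarrow> nat \<Rightarrow> complex) \<Rightarrow> (nat \<times> nat set) rtree" where
  "fission_tree n p A = \<lparr>rt_nodes = {(l, L). l \<in> {1..p+1} \<and> L \<in> parts n p A l},
     rt_root = (p + 1, {1..n}),
     rt_par = (\<lambda>(l, L). (l + 1, THE L'. L' \<in> parts n p A (l + 1) \<and> L \<subseteq> L')),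
     rt_rank = (\<lambda>(l, L). card L)\<rparr>"

end

theory Submission
  imports Defs
begin

text \<open>
  Both parts rest on one mechanism. Suppose a set is cut into disjoint blocks and, for any two
  blocks, a set of admissible bijections between them is given, closed under identities,
  composition and inverses. The permutations that carry every block admissibly onto some block
  form a group isomorphic to a product, over the isomorphism classes of blocks, of wreath
  products of \<open>S\<^sub>k\<close> with the group of admissible self-maps of a representative block,
  \<open>k\<close> being the size of the class. Taking the subtrees below the children of the root as blocks and the tree
  isomorphisms as admissible maps gives (ii).

  For (i), a permutation stabilises the kernel flag iff it preserves every partition \<open>P\<^sub>l\<close>:
  vectors constant on the parts of \<open>P\<^sub>l\<close> separate any two parts. The subtree below a part at
  level \<open>m\<close> is isomorphic to the subtree below another part iff some bijection between the two
  parts preserves all partitions (induction on \<open>m\<close>). Hence the permutations of a part that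
  preserve all partitions decompose by the same mechanism, with the parts one level down as
  blocks, and induction on the level produces the recursion defining \<open>atilde\<close>, with
  symmetric groups at the leaves.
\<close>

(* Simplifying under the library's congruence rule for restrict_id loops on the nested
   restrictions used below. *)
declare restrict_id_cong [cong del]

lemma is_isoI_pointwise:
  assumes "\<And>x. x \<in> carrier G \<Longrightarrow> h x \<in> carrier H"
    and "\<And>x y. x \<in> carrier G \<Longrightarrow> y \<in> carrier G \<Longrightarrow> h (x \<otimes>\<^bsub>G\<^esub> y) = h x \<otimes>\<^bsub>H\<^esub> h y"
    and "inj_on h (carrier G)" and "carrier H \<subseteq> h ` carrier G"
  shows "G \<cong> H"
proof (rule is_isoI[OF isoI])
  show "h \<in> hom G H" using assms(1,2) by (rule homI)
  show "bij_betw h (carrier G) (carrier H)" using assms unfolding bij_betw_def by blast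
qed

lemma restrict_id_comp:
  assumes "\<And>x. x \<in> X \<Longrightarrow> f x \<in> Y"
  shows "restrict_id (restrict_id g Y \<circ> restrict_id f X) X = restrict_id (g \<circ> f) X"
proof
  fix x show "restrict_id (restrict_id g Y \<circ> restrict_id f X) X x = restrict_id (g \<circ> f) X x"
    using assms by (cases "x \<in> X") simp_all
qed

definition ext_bij :: "'a set \<Rightarrow> 'a set \<Rightarrow> ('a \<Rightarrow> 'a) set" where
  "ext_bij X Y = {f. bij_betw f X Y \<and> (\<forall>x. x \<notin> X \<longrightarrow> f x = x)}"

lemma ext_bijD:
  assumes "f \<in> ext_bij X Y"
  shows "bij_betw f X Y" "inj_on f X" "f ` X = Y" "\<And>x. x \<in> X \<Longrightarrow> f x \<in> Y"
    "\<And>x. x \<notin> X \<Longrightarrow> f x = x"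
  using assms unfolding ext_bij_def bij_betw_def by auto

lemma restrict_id_ext_bij: "bij_betw f X Y \<Longrightarrow> restrict_id f X \<in> ext_bij X Y"
  unfolding ext_bij_def using bij_betw_cong[of X "restrict_id f X" f] by simp

lemma id_ext_bij: "id \<in> ext_bij X X"
  by (simp add: ext_bij_def)

lemma ext_bij_comp: "f \<in> ext_bij X Y \<Longrightarrow> g \<in> ext_bij Y Z \<Longrightarrow> restrict_id (g \<circ> f) X \<in> ext_bij X Z"
  by (rule restrict_id_ext_bij[OF bij_betw_trans[OF ext_bijD(1) ext_bijD(1)]])

lemma ext_bij_inv: "f \<in> ext_bij X Y \<Longrightarrow> restrict_id (inv_into X f) Y \<in> ext_bij Y X"
  by (rule restrict_id_ext_bij[OF bij_betw_inv_into[OF ext_bijD(1)]])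

lemma ext_bij_self: "ext_bij X X = {f. f permutes X}"
  unfolding ext_bij_def by (auto intro: permutes_imp_bij bij_imp_permutes dest: permutes_not_in)

section \<open>Block systems\<close>

locale block_system =
  fixes C :: "'c set" and S :: "'c \<Rightarrow> 'a set" and Iso :: "'c \<Rightarrow> 'c \<Rightarrow> ('a \<Rightarrow> 'a) set"
  assumes finite_blocks: "finite C"
    and block_nonempty: "c \<in> C \<Longrightarrow> S c \<noteq> {}"
    and blocks_disjoint: "c \<in> C \<Longrightarrow> d \<in> C \<Longrightarrow> c \<noteq> d \<Longrightarrow> S c \<inter> S d = {}"
    and Iso_ext_bij: "c \<in> C \<Longrightarrow> d \<in> C \<Longrightarrow> f \<in> Iso c d \<Longrightarrow> f \<in> ext_bij (S c) (S d)"
    and id_Iso: "c \<in> C \<Longrightarrow> id \<in> Iso c c"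
    and Iso_comp: "c \<in> C \<Longrightarrow> d \<in> C \<Longrightarrow> e \<in> C \<Longrightarrow> f \<in> Iso c d \<Longrightarrow> g \<in> Iso d e \<Longrightarrow>
      restrict_id (g \<circ> f) (S c) \<in> Iso c e"
    and Iso_inv: "c \<in> C \<Longrightarrow> d \<in> C \<Longrightarrow> f \<in> Iso c d \<Longrightarrow>
      restrict_id (inv_into (S c) f) (S d) \<in> Iso d c"
begin

definition block_group :: "(('c \<Rightarrow> 'c) \<times> ('c \<Rightarrow> 'a \<Rightarrow> 'a)) monoid" where
  "block_group = \<lparr>carrier = {(\<pi>, \<phi>). \<pi> permutes C \<and> (\<forall>c\<in>C. \<phi> c \<in> Iso c (\<pi> c)) \<and>
                                   (\<forall>c. c \<notin> C \<longrightarrow> \<phi> c = undefined)},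
     mult = (\<lambda>(\<pi>, \<phi>) (\<pi>', \<phi>'). (\<pi> \<circ> \<pi>',
               \<lambda>c. if c \<in> C then restrict_id (\<phi> (\<pi>' c) \<circ> \<phi>' c) (S c) else undefined)),
     one = (id, \<lambda>c. if c \<in> C then id else undefined)\<rparr>"

lemma block_groupD:
  assumes "(\<pi>, \<phi>) \<in> carrier block_group"
  shows "\<pi> permutes C" "\<And>c. c \<in> C \<Longrightarrow> \<phi> c \<in> Iso c (\<pi> c)" "\<And>c. c \<notin> C \<Longrightarrow> \<phi> c = undefined"
  using assms unfolding block_group_def by auto

lemma mult_block_group: "(\<pi>, \<phi>) \<otimes>\<^bsub>block_group\<^esub> (\<pi>', \<phi>') =
    (\<pi> \<circ> \<pi>', \<lambda>c. if c \<in> C then restrict_id (\<phi> (\<pi>' c) \<circ> \<phi>' c) (S c) else undefined)"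
  unfolding block_group_def by simp

lemma Iso_nonempty_sym: "c \<in> C \<Longrightarrow> d \<in> C \<Longrightarrow> Iso c d \<noteq> {} \<Longrightarrow> Iso d c \<noteq> {}"
  using Iso_inv by blast

lemma Iso_nonempty_trans:
  "c \<in> C \<Longrightarrow> d \<in> C \<Longrightarrow> e \<in> C \<Longrightarrow> Iso c d \<noteq> {} \<Longrightarrow> Iso d e \<noteq> {} \<Longrightarrow> Iso c e \<noteq> {}"
  using Iso_comp by blast

lemma Iso_target_unique:
  assumes "c \<in> C" "d \<in> C" "d' \<in> C" "f \<in> Iso c d" "f \<in> Iso c d'"
  shows "d = d'"
proof -
  have "S d = f ` S c" "S d' = f ` S c" using assms Iso_ext_bij ext_bijD(3) by blast+
  then show ?thesis using block_nonempty[OF assms(2)] blocks_disjoint[OF assms(2,3)] by auto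
qed

definition lifts :: "('a \<Rightarrow> 'a) \<Rightarrow> ('c \<Rightarrow> 'c) \<Rightarrow> bool" where
  "lifts w \<pi> \<longleftrightarrow> \<pi> permutes C \<and> (\<forall>c\<in>C. restrict_id w (S c) \<in> Iso c (\<pi> c))"

definition block_perms :: "('a \<Rightarrow> 'a) set" where
  "block_perms = {w. (\<forall>x. x \<notin> \<Union>(S ` C) \<longrightarrow> w x = x) \<and> (\<exists>\<pi>. lifts w \<pi>)}"

lemma lifts_ext_bij:
  assumes "lifts w \<pi>" "c \<in> C"
  shows "\<pi> c \<in> C" "restrict_id w (S c) \<in> ext_bij (S c) (S (\<pi> c))"
proof -
  have perm: "\<pi> permutes C" and iso: "restrict_id w (S c) \<in> Iso c (\<pi> c)"
    using assms unfolding lifts_def by auto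
  show "\<pi> c \<in> C" using permutes_in_image[OF perm] assms(2) by simp
  then show "restrict_id w (S c) \<in> ext_bij (S c) (S (\<pi> c))" using Iso_ext_bij[OF assms(2) _ iso] by simp
qed

lemma lifts_maps_block:
  assumes "lifts w \<pi>" "c \<in> C" "x \<in> S c"
  shows "w x \<in> S (\<pi> c)"
  using ext_bijD(4)[OF lifts_ext_bij(2)[OF assms(1,2)] assms(3)] assms(3) by simp

lemma lifts_unique:
  assumes "lifts w \<pi>" "lifts w \<pi>'"
  shows "\<pi> = \<pi>'"
proof
  fix c
  show "\<pi> c = \<pi>' c"
  proof (cases "c \<in> C")
    case True
    have "restrict_id w (S c) \<in> Iso c (\<pi> c)" "restrict_id w (S c) \<in> Iso c (\<pi>' c)"
      using assms True unfolding lifts_def by auto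
    then show ?thesis
      using Iso_target_unique True lifts_ext_bij(1)[OF assms(1) True] lifts_ext_bij(1)[OF assms(2) True]
      by blast
  next
    case False
    then show ?thesis using assms permutes_not_in unfolding lifts_def by metis
  qed
qed

lemma lifts_bij:
  assumes "lifts w \<pi>"
  shows "bij_betw w (\<Union>(S ` C)) (\<Union>(S ` C))"
proof -
  have perm: "\<pi> permutes C" using assms unfolding lifts_def by blast
  note piece = lifts_ext_bij[OF assms]
  have "inj_on w (\<Union>(S ` C))"
  proof (rule inj_onI)
    fix x y assume "x \<in> \<Union>(S ` C)" "y \<in> \<Union>(S ` C)" and eq: "w x = w y"
    then obtain c d where c: "c \<in> C" "x \<in> S c" and d: "d \<in> C" "y \<in> S d" by blast
    have "w x \<in> S (\<pi> c) \<inter> S (\<pi> d)"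
      using lifts_maps_block[OF assms c] lifts_maps_block[OF assms d] eq by simp
    then have "\<pi> c = \<pi> d" using blocks_disjoint[OF piece(1)[OF c(1)] piece(1)[OF d(1)]] by blast
    then have cd: "c = d" using permutes_inj[OF perm] by (meson injD)
    then have "restrict_id w (S c) x = restrict_id w (S c) y" using c d eq by simp
    then show "x = y" using inj_onD[OF ext_bijD(2)[OF piece(2)[OF c(1)]]] c(2) d(2) cd by blast
  qed
  moreover have "w ` S c = S (\<pi> c)" if "c \<in> C" for c
  proof -
    have "w ` S c = restrict_id w (S c) ` S c" by (simp cong: image_cong)
    then show ?thesis using ext_bijD(3)[OF piece(2)[OF that]] by simp
  qed
  then have "w ` \<Union>(S ` C) = \<Union>(S ` \<pi> ` C)" by (simp add: image_UN)
  then have "w ` \<Union>(S ` C) = \<Union>(S ` C)" using permutes_image[OF perm] by simp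
  ultimately show ?thesis unfolding bij_betw_def by blast
qed

lemma block_perms_permutes:
  assumes "w \<in> block_perms"
  shows "w permutes \<Union>(S ` C)"
proof -
  obtain \<pi> where l: "lifts w \<pi>" and out: "\<And>x. x \<notin> \<Union>(S ` C) \<Longrightarrow> w x = x"
    using assms unfolding block_perms_def by blast
  show ?thesis using bij_imp_permutes[OF lifts_bij[OF l] out] .
qed

lemma restrict_id_comp_lifts:
  assumes "lifts w' \<pi>'" "c \<in> C"
  shows "restrict_id (w \<circ> w') (S c) = restrict_id (restrict_id w (S (\<pi>' c)) \<circ> restrict_id w' (S c)) (S c)"
  using restrict_id_comp[of "S c" w' "S (\<pi>' c)" w] lifts_maps_block[OF assms] by simp

lemma lifts_comp:
  assumes l: "lifts w \<pi>" and l': "lifts w' \<pi>'"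
  shows "lifts (w \<circ> w') (\<pi> \<circ> \<pi>')"
  unfolding lifts_def
proof (intro conjI ballI)
  show "\<pi> \<circ> \<pi>' permutes C" using l l' permutes_compose unfolding lifts_def by blast
  fix c assume c: "c \<in> C"
  have c': "\<pi>' c \<in> C" using lifts_ext_bij(1)[OF l' c] .
  have "restrict_id w' (S c) \<in> Iso c (\<pi>' c)" "restrict_id w (S (\<pi>' c)) \<in> Iso (\<pi>' c) (\<pi> (\<pi>' c))"
    using l l' c c' unfolding lifts_def by auto
  from Iso_comp[OF c c' lifts_ext_bij(1)[OF l c'] this]
  show "restrict_id (w \<circ> w') (S c) \<in> Iso c ((\<pi> \<circ> \<pi>') c)"
    unfolding restrict_id_comp_lifts[OF l' c] by simp
qed

definition to_block_group :: "('a \<Rightarrow> 'a) \<Rightarrow> ('c \<Rightarrow> 'c) \<times> ('c \<Rightarrow> 'a \<Rightarrow> 'a)" where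
  "to_block_group w = (THE \<pi>. lifts w \<pi>, \<lambda>c. if c \<in> C then restrict_id w (S c) else undefined)"

lemma to_block_group_eq:
  "lifts w \<pi> \<Longrightarrow> to_block_group w = (\<pi>, \<lambda>c. if c \<in> C then restrict_id w (S c) else undefined)"
proof -
  assume l: "lifts w \<pi>"
  have "(THE \<pi>. lifts w \<pi>) = \<pi>" using l lifts_unique by (intro the_equality) blast+
  then show ?thesis unfolding to_block_group_def by simp
qed

lemma to_block_group_surj:
  assumes g: "(\<pi>, \<phi>) \<in> carrier block_group"
  shows "(\<pi>, \<phi>) \<in> to_block_group ` block_perms"
proof -
  note gD = block_groupD[OF g]
  define w where "w x = (if \<exists>c\<in>C. x \<in> S c then \<phi> (THE c. c \<in> C \<and> x \<in> S c) x else x)" for x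
  have restr: "restrict_id w (S c) = \<phi> c" if c: "c \<in> C" for c
  proof
    fix x
    have bij: "\<phi> c \<in> ext_bij (S c) (S (\<pi> c))"
      using Iso_ext_bij[OF c _ gD(2)[OF c]] permutes_in_image[OF gD(1)] c by blast
    show "restrict_id w (S c) x = \<phi> c x"
    proof (cases "x \<in> S c")
      case True
      have "(THE c. c \<in> C \<and> x \<in> S c) = c"
        using True c blocks_disjoint by (intro the_equality) blast+
      then show ?thesis using True c unfolding w_def by auto
    next
      case False
      then show ?thesis using ext_bijD(5)[OF bij False] by simp
    qed
  qed
  have lifts: "lifts w \<pi>" unfolding lifts_def using gD(1,2) restr by simp
  have "w x = x" if "x \<notin> \<Union>(S ` C)" for x using that unfolding w_def by auto
  then have "w \<in> block_perms" unfolding block_perms_def using lifts by blast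
  moreover have "(\<lambda>c. if c \<in> C then restrict_id w (S c) else undefined) = \<phi>"
  proof
    fix c show "(if c \<in> C then restrict_id w (S c) else undefined) = \<phi> c"
      by (cases "c \<in> C") (simp_all add: restr gD(3))
  qed
  then have "to_block_group w = (\<pi>, \<phi>)" unfolding to_block_group_eq[OF lifts] by simp
  ultimately show ?thesis by (metis image_eqI)
qed

definition block_perm_group :: "('a \<Rightarrow> 'a) monoid" where
  "block_perm_group = \<lparr>carrier = block_perms, mult = (\<circ>), one = id\<rparr>"

theorem block_perm_group_iso: "block_perm_group \<cong> block_group"
proof (rule is_isoI_pointwise[where h = to_block_group])
  fix w assume "w \<in> carrier block_perm_group"
  then obtain \<pi> where l: "lifts w \<pi>" unfolding block_perm_group_def block_perms_def by auto
  show "to_block_group w \<in> carrier block_group"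
    unfolding to_block_group_eq[OF l] block_group_def using l unfolding lifts_def by simp
next
  fix w w' assume "w \<in> carrier block_perm_group" "w' \<in> carrier block_perm_group"
  then obtain \<pi> \<pi>' where l: "lifts w \<pi>" "lifts w' \<pi>'"
    unfolding block_perm_group_def block_perms_def by auto
  have "(\<lambda>c. if c \<in> C then restrict_id (w \<circ> w') (S c) else undefined) =
      (\<lambda>c. if c \<in> C then restrict_id ((if \<pi>' c \<in> C then restrict_id w (S (\<pi>' c)) else undefined) \<circ>
                                              (if c \<in> C then restrict_id w' (S c) else undefined)) (S c)
            else undefined)"
  proof
    fix c show "(if c \<in> C then restrict_id (w \<circ> w') (S c) else undefined) =
      (if c \<in> C then restrict_id ((if \<pi>' c \<in> C then restrict_id w (S (\<pi>' c)) else undefined) \<circ>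
                                         (if c \<in> C then restrict_id w' (S c) else undefined)) (S c)
       else undefined)"
      using restrict_id_comp_lifts[OF l(2)] lifts_ext_bij(1)[OF l(2)] by (cases "c \<in> C") simp_all
  qed
  then show "to_block_group (w \<otimes>\<^bsub>block_perm_group\<^esub> w') =
      to_block_group w \<otimes>\<^bsub>block_group\<^esub> to_block_group w'"
    unfolding block_perm_group_def monoid.simps to_block_group_eq[OF lifts_comp[OF l]]
      to_block_group_eq[OF l(1)] to_block_group_eq[OF l(2)] mult_block_group by simp
next
  show "inj_on to_block_group (carrier block_perm_group)"
  proof (rule inj_onI, rule ext)
    fix w w' x assume w: "w \<in> carrier block_perm_group" "w' \<in> carrier block_perm_group"
      and eq: "to_block_group w = to_block_group w'"
    show "w x = w' x"
    proof (cases "\<exists>c\<in>C. x \<in> S c")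
      case True
      then obtain c where c: "c \<in> C" "x \<in> S c" by blast
      then have "restrict_id w (S c) = restrict_id w' (S c)"
        using eq unfolding to_block_group_def by (metis (mono_tags) prod.inject)
      then show ?thesis using c(2) by (metis restrict_id_simps(1))
    next
      case False
      then show ?thesis using w unfolding block_perm_group_def block_perms_def by auto
    qed
  qed
next
  show "carrier block_group \<subseteq> to_block_group ` carrier block_perm_group"
    using to_block_group_surj unfolding block_perm_group_def by auto
qed

end

section \<open>Wreath decomposition of block groups\<close>

locale block_system_reps = block_system C S Iso
  for C :: "'c set" and S :: "'c \<Rightarrow> 'a set" and Iso :: "'c \<Rightarrow> 'c \<Rightarrow> ('a \<Rightarrow> 'a) set" +
  fixes cs :: "'c list" and ncopies :: "'c \<Rightarrow> nat" and H :: "'c \<Rightarrow> ('a \<Rightarrow> 'a) monoid"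
  assumes reps_subset: "set cs \<subseteq> C"
    and reps_cover: "c \<in> C \<Longrightarrow> \<exists>d\<in>set cs. Iso c d \<noteq> {}"
    and reps_distinct: "i < length cs \<Longrightarrow> j < length cs \<Longrightarrow> i \<noteq> j \<Longrightarrow> Iso (cs ! i) (cs ! j) = {}"
    and ncopies_eq: "c \<in> set cs \<Longrightarrow> ncopies c = card {d \<in> C. Iso d c \<noteq> {}}"
    and carrier_H: "c \<in> set cs \<Longrightarrow> carrier (H c) = Iso c c"
    and mult_H: "c \<in> set cs \<Longrightarrow> x \<in> Iso c c \<Longrightarrow> y \<in> Iso c c \<Longrightarrow>
      x \<otimes>\<^bsub>H c\<^esub> y = restrict_id (x \<circ> y) (S c)"
begin

lemma rep_in: "k < length cs \<Longrightarrow> cs ! k \<in> C"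
  using reps_subset nth_mem by blast

definition rep_idx :: "'c \<Rightarrow> nat" where
  "rep_idx d = (THE k. k < length cs \<and> Iso (cs ! k) d \<noteq> {})"

lemma rep_idx_unique:
  assumes "d \<in> C" "k < length cs" "Iso (cs ! k) d \<noteq> {}" "j < length cs" "Iso (cs ! j) d \<noteq> {}"
  shows "j = k"
proof (rule ccontr)
  assume "j \<noteq> k"
  have "Iso (cs ! j) (cs ! k) \<noteq> {}"
    using Iso_nonempty_trans[OF rep_in[OF assms(4)] assms(1) rep_in[OF assms(2)] assms(5)
        Iso_nonempty_sym[OF rep_in[OF assms(2)] assms(1) assms(3)]] .
  then show False using reps_distinct[OF assms(4,2) \<open>j \<noteq> k\<close>] by simp
qed

lemma rep_idx:
  assumes "d \<in> C"
  shows "rep_idx d < length cs" "Iso (cs ! rep_idx d) d \<noteq> {}"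
proof -
  obtain e where e: "e \<in> set cs" "Iso d e \<noteq> {}" using reps_cover[OF assms] by blast
  then obtain k where k: "k < length cs" "cs ! k = e" by (metis in_set_conv_nth)
  have k': "Iso (cs ! k) d \<noteq> {}" using Iso_nonempty_sym[OF assms rep_in[OF k(1)]] e(2) k(2) by simp
  have "rep_idx d = k" unfolding rep_idx_def
    using k(1) k' rep_idx_unique[OF assms k(1) k'] by (intro the_equality) blast+
  then show "rep_idx d < length cs" "Iso (cs ! rep_idx d) d \<noteq> {}" using k(1) k' by simp_all
qed

lemma rep_idx_eq: "d \<in> C \<Longrightarrow> k < length cs \<Longrightarrow> Iso (cs ! k) d \<noteq> {} \<Longrightarrow> rep_idx d = k"
  using rep_idx rep_idx_unique by blast

lemma rep_idx_Iso:
  assumes "d \<in> C" "e \<in> C" "Iso d e \<noteq> {}"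
  shows "rep_idx e = rep_idx d"
proof -
  note r = rep_idx[OF assms(1)]
  show ?thesis
    using rep_idx_eq[OF assms(2) r(1) Iso_nonempty_trans[OF rep_in[OF r(1)] assms(1,2) r(2) assms(3)]] .
qed

definition iso_class :: "nat \<Rightarrow> 'c set" where
  "iso_class k = {d \<in> C. rep_idx d = k}"

lemma card_iso_class:
  assumes k: "k < length cs"
  shows "card (iso_class k) = ncopies (cs ! k)"
proof -
  have "rep_idx d = k \<longleftrightarrow> Iso d (cs ! k) \<noteq> {}" if "d \<in> C" for d
    using rep_idx[OF that] rep_idx_eq[OF that k] Iso_nonempty_sym[OF that rep_in[OF k]]
      Iso_nonempty_sym[OF rep_in[OF k] that] by blast
  then have "iso_class k = {d \<in> C. Iso d (cs ! k) \<noteq> {}}" unfolding iso_class_def by blast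
  then show ?thesis using ncopies_eq[OF nth_mem[OF k]] by simp
qed

definition class_enum :: "nat \<Rightarrow> nat \<Rightarrow> 'c" where
  "class_enum k = (SOME e. bij_betw e {..<card (iso_class k)} (iso_class k))"

definition class_pos :: "nat \<Rightarrow> 'c \<Rightarrow> nat" where
  "class_pos k = inv_into {..<card (iso_class k)} (class_enum k)"

lemma class_enum_bij: "bij_betw (class_enum k) {..<card (iso_class k)} (iso_class k)"
proof -
  have "finite (iso_class k)" using finite_blocks unfolding iso_class_def by simp
  then have "\<exists>e. bij_betw e {..<card (iso_class k)} (iso_class k)"
    using ex_bij_betw_nat_finite lessThan_atLeast0 by metis
  then show ?thesis unfolding class_enum_def by (rule someI_ex)
qed

lemma class_pos_bij: "bij_betw (class_pos k) (iso_class k) {..<card (iso_class k)}"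
  unfolding class_pos_def by (rule bij_betw_inv_into[OF class_enum_bij])

lemma class_enum_pos: "d \<in> iso_class k \<Longrightarrow> class_enum k (class_pos k d) = d"
  unfolding class_pos_def by (rule bij_betw_inv_into_right[OF class_enum_bij])

lemma class_pos_enum: "i < card (iso_class k) \<Longrightarrow> class_pos k (class_enum k i) = i"
  unfolding class_pos_def using bij_betw_inv_into_left[OF class_enum_bij] by simp

lemma class_enum_in: "i < card (iso_class k) \<Longrightarrow> class_enum k i \<in> iso_class k"
  using bij_betwE[OF class_enum_bij] by simp

lemma class_pos_less: "d \<in> iso_class k \<Longrightarrow> class_pos k d < card (iso_class k)"
  using bij_betwE[OF class_pos_bij] by simp

definition from_rep :: "'c \<Rightarrow> 'a \<Rightarrow> 'a" where
  "from_rep d = (SOME f. f \<in> Iso (cs ! rep_idx d) d)"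

lemma from_rep_Iso: "d \<in> C \<Longrightarrow> from_rep d \<in> Iso (cs ! rep_idx d) d"
  unfolding from_rep_def using rep_idx(2) by (simp add: some_in_eq)

text \<open>With a fixed isomorphism from the representative of its class to every block, the admissible
  maps from a block \<open>d\<close> to a block \<open>\<pi> d\<close> of the same class correspond to the automorphisms of
  the representative.\<close>

definition local_part :: "('c \<Rightarrow> 'c) \<Rightarrow> ('c \<Rightarrow> 'a \<Rightarrow> 'a) \<Rightarrow> 'c \<Rightarrow> 'a \<Rightarrow> 'a" where
  "local_part \<pi> \<phi> d =
     restrict_id (inv_into (S (cs ! rep_idx d)) (from_rep (\<pi> d)) \<circ> \<phi> d \<circ> from_rep d) (S (cs ! rep_idx d))"

definition block_map :: "('c \<Rightarrow> 'c) \<Rightarrow> 'c \<Rightarrow> ('a \<Rightarrow> 'a) \<Rightarrow> 'a \<Rightarrow> 'a" where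
  "block_map \<pi> d x = restrict_id (from_rep (\<pi> d) \<circ> x \<circ> inv_into (S (cs ! rep_idx d)) (from_rep d)) (S d)"

context
  fixes \<pi> :: "'c \<Rightarrow> 'c" and d :: 'c
  assumes d: "d \<in> C" and \<pi>d: "\<pi> d \<in> C" and same_class: "rep_idx (\<pi> d) = rep_idx d"
begin

private lemma from_rep_bij:
  "from_rep d \<in> ext_bij (S (cs ! rep_idx d)) (S d)" "from_rep (\<pi> d) \<in> ext_bij (S (cs ! rep_idx d)) (S (\<pi> d))"
  using Iso_ext_bij[OF rep_in[OF rep_idx(1)[OF d]] d from_rep_Iso[OF d]]
    Iso_ext_bij[OF rep_in[OF rep_idx(1)[OF d]] \<pi>d] from_rep_Iso[OF \<pi>d] same_class by simp_all

lemma local_part_Iso: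
  assumes "f \<in> Iso d (\<pi> d)"
  shows "local_part \<pi> (\<lambda>_. f) d \<in> Iso (cs ! rep_idx d) (cs ! rep_idx d)"
proof -
  have rC: "cs ! rep_idx d \<in> C" using rep_in[OF rep_idx(1)[OF d]] .
  have "restrict_id (f \<circ> from_rep d) (S (cs ! rep_idx d)) \<in> Iso (cs ! rep_idx d) (\<pi> d)"
    using Iso_comp[OF rC d \<pi>d from_rep_Iso[OF d] assms] .
  moreover have "restrict_id (inv_into (S (cs ! rep_idx d)) (from_rep (\<pi> d))) (S (\<pi> d)) \<in> Iso (\<pi> d) (cs ! rep_idx d)"
    using Iso_inv[OF rC \<pi>d] from_rep_Iso[OF \<pi>d] same_class by simp
  ultimately have "restrict_id (restrict_id (inv_into (S (cs ! rep_idx d)) (from_rep (\<pi> d))) (S (\<pi> d)) \<circ>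
      restrict_id (f \<circ> from_rep d) (S (cs ! rep_idx d))) (S (cs ! rep_idx d)) \<in> Iso (cs ! rep_idx d) (cs ! rep_idx d)"
    using Iso_comp[OF rC \<pi>d rC] by blast
  moreover have "f (from_rep d x) \<in> S (\<pi> d)" if "x \<in> S (cs ! rep_idx d)" for x
    using ext_bijD(4)[OF Iso_ext_bij[OF d \<pi>d assms]] ext_bijD(4)[OF from_rep_bij(1) that] by blast
  ultimately show ?thesis
    unfolding local_part_def using restrict_id_comp[of "S (cs ! rep_idx d)" "f \<circ> from_rep d" "S (\<pi> d)"]
    by (simp add: comp_assoc)
qed

lemma block_map_Iso:
  assumes "x \<in> Iso (cs ! rep_idx d) (cs ! rep_idx d)"
  shows "block_map \<pi> d x \<in> Iso d (\<pi> d)"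
proof -
  have rC: "cs ! rep_idx d \<in> C" using rep_in[OF rep_idx(1)[OF d]] .
  have "restrict_id (inv_into (S (cs ! rep_idx d)) (from_rep d)) (S d) \<in> Iso d (cs ! rep_idx d)"
    using Iso_inv[OF rC d from_rep_Iso[OF d]] .
  from Iso_comp[OF d rC rC this assms]
  have "restrict_id (x \<circ> restrict_id (inv_into (S (cs ! rep_idx d)) (from_rep d)) (S d)) (S d) \<in> Iso d (cs ! rep_idx d)" .
  from Iso_comp[OF d rC \<pi>d this] from_rep_Iso[OF \<pi>d] same_class
  have "restrict_id (from_rep (\<pi> d) \<circ> restrict_id (x \<circ> restrict_id (inv_into (S (cs ! rep_idx d)) (from_rep d)) (S d)) (S d)) (S d)
     \<in> Iso d (\<pi> d)" by simp
  moreover have "restrict_id (from_rep (\<pi> d) \<circ> restrict_id (x \<circ> restrict_id (inv_into (S (cs ! rep_idx d)) (from_rep d)) (S d)) (S d)) (S d)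
      = block_map \<pi> d x"
    unfolding block_map_def by (auto simp: restrict_id_def)
  ultimately show ?thesis by simp
qed

lemma block_map_local_part:
  assumes "f \<in> Iso d (\<pi> d)"
  shows "block_map \<pi> d (local_part \<pi> (\<lambda>_. f) d) = f"
proof
  fix y
  have f: "f \<in> ext_bij (S d) (S (\<pi> d))" using Iso_ext_bij[OF d \<pi>d assms] .
  show "block_map \<pi> d (local_part \<pi> (\<lambda>_. f) d) y = f y"
  proof (cases "y \<in> S d")
    case True
    have x: "inv_into (S (cs ! rep_idx d)) (from_rep d) y \<in> S (cs ! rep_idx d)" "from_rep d (inv_into (S (cs ! rep_idx d)) (from_rep d) y) = y"
      using bij_betw_inv_into_right[OF ext_bijD(1)[OF from_rep_bij(1)] True]
        bij_betwE[OF bij_betw_inv_into[OF ext_bijD(1)[OF from_rep_bij(1)]]] True by auto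
    have "from_rep (\<pi> d) (inv_into (S (cs ! rep_idx d)) (from_rep (\<pi> d)) (f y)) = f y"
      using bij_betw_inv_into_right[OF ext_bijD(1)[OF from_rep_bij(2)] ext_bijD(4)[OF f True]] .
    then show ?thesis unfolding block_map_def local_part_def using True x by simp
  next
    case False
    then show ?thesis unfolding block_map_def using ext_bijD(5)[OF f False] by simp
  qed
qed

lemma local_part_block_map:
  assumes "x \<in> Iso (cs ! rep_idx d) (cs ! rep_idx d)"
  shows "local_part \<pi> (\<lambda>_. block_map \<pi> d x) d = x"
proof
  fix z
  have x: "x \<in> ext_bij (S (cs ! rep_idx d)) (S (cs ! rep_idx d))" using Iso_ext_bij[OF _ _ assms] rep_in[OF rep_idx(1)[OF d]] by blast
  show "local_part \<pi> (\<lambda>_. block_map \<pi> d x) d z = x z"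
  proof (cases "z \<in> S (cs ! rep_idx d)")
    case True
    have "from_rep d z \<in> S d" using ext_bijD(4)[OF from_rep_bij(1) True] .
    moreover have "inv_into (S (cs ! rep_idx d)) (from_rep d) (from_rep d z) = z"
      using bij_betw_inv_into_left[OF ext_bijD(1)[OF from_rep_bij(1)] True] .
    moreover have "inv_into (S (cs ! rep_idx d)) (from_rep (\<pi> d)) (from_rep (\<pi> d) (x z)) = x z"
      using bij_betw_inv_into_left[OF ext_bijD(1)[OF from_rep_bij(2)] ext_bijD(4)[OF x True]] .
    ultimately show ?thesis unfolding block_map_def local_part_def using True by simp
  next
    case False
    then show ?thesis unfolding local_part_def using ext_bijD(5)[OF x False] by simp
  qed
qed

end

definition class_perm :: "('c \<Rightarrow> 'c) \<Rightarrow> nat \<Rightarrow> nat \<Rightarrow> nat" where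
  "class_perm \<pi> k = restrict_id (class_pos k \<circ> \<pi> \<circ> class_enum k) {..<card (iso_class k)}"

text \<open>The \<open>i\<close>-th wreath coordinate of class \<open>k\<close> is the local part of the block map
  arriving at the \<open>i\<close>-th block of the class.\<close>

definition wreath_coords :: "('c \<Rightarrow> 'c) \<times> ('c \<Rightarrow> 'a \<Rightarrow> 'a) \<Rightarrow> ((nat \<Rightarrow> nat) \<times> ('a \<Rightarrow> 'a) list) list" where
  "wreath_coords = (\<lambda>(\<pi>, \<phi>). map (\<lambda>k. (class_perm \<pi> k,
      map (\<lambda>i. local_part \<pi> \<phi> (inv_into UNIV \<pi> (class_enum k i))) [0..<card (iso_class k)]))
    [0..<length cs])"

lemma wreath_coords_nth:
  "k < length cs \<Longrightarrow> wreath_coords (\<pi>, \<phi>) ! k = (class_perm \<pi> k,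
     map (\<lambda>i. local_part \<pi> \<phi> (inv_into UNIV \<pi> (class_enum k i))) [0..<card (iso_class k)])"
  unfolding wreath_coords_def by simp

lemma local_part_cong: "\<phi> d = \<psi> d \<Longrightarrow> local_part \<pi> \<phi> d = local_part \<pi> \<psi> d"
  unfolding local_part_def by simp

context
  fixes \<pi> \<phi>
  assumes g: "(\<pi>, \<phi>) \<in> carrier block_group"
begin

private lemma perm: "\<pi> permutes C"
  using block_groupD(1)[OF g] .

lemma block_group_perm_in: "d \<in> C \<Longrightarrow> \<pi> d \<in> C" "d \<in> C \<Longrightarrow> inv_into UNIV \<pi> d \<in> C"
  using permutes_in_image[OF perm] permutes_in_image[OF permutes_inv[OF perm]] by auto

lemma rep_idx_block_group_perm:
  assumes "d \<in> C" shows "rep_idx (\<pi> d) = rep_idx d"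
  using rep_idx_Iso[OF assms block_group_perm_in(1)[OF assms]] block_groupD(2)[OF g assms] by blast

lemma rep_idx_block_group_perm_inv:
  assumes "d \<in> C" shows "rep_idx (inv_into UNIV \<pi> d) = rep_idx d"
  using rep_idx_block_group_perm[OF block_group_perm_in(2)[OF assms]] permutes_inverses(1)[OF perm] by simp

lemma local_part_block_group:
  assumes "d \<in> C"
  shows "local_part \<pi> \<phi> d \<in> Iso (cs ! rep_idx d) (cs ! rep_idx d)"
  using local_part_Iso[of d \<pi> "\<phi> d", OF assms block_group_perm_in(1)[OF assms]
      rep_idx_block_group_perm[OF assms] block_groupD(2)[OF g assms]]
    local_part_cong[of \<phi> d "\<lambda>_. \<phi> d"] by simp

lemma block_group_perm_iso_class:
  assumes "k < length cs"
  shows "bij_betw \<pi> (iso_class k) (iso_class k)"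
proof -
  have "\<pi> ` iso_class k = iso_class k"
  proof (intro equalityI subsetI)
    fix d assume "d \<in> \<pi> ` iso_class k"
    then show "d \<in> iso_class k"
      unfolding iso_class_def using block_group_perm_in(1) rep_idx_block_group_perm by auto
  next
    fix d assume d: "d \<in> iso_class k"
    then have "inv_into UNIV \<pi> d \<in> iso_class k"
      unfolding iso_class_def using block_group_perm_in(2) rep_idx_block_group_perm_inv by auto
    then show "d \<in> \<pi> ` iso_class k" using permutes_inverses(1)[OF perm] by (metis image_eqI)
  qed
  then show ?thesis using permutes_inj[OF perm] unfolding bij_betw_def by (meson inj_on_subset subset_UNIV)
qed

lemma class_perm_permutes:
  assumes "k < length cs"
  shows "class_perm \<pi> k permutes {..<card (iso_class k)}"
proof -
  have "bij_betw (class_pos k \<circ> \<pi> \<circ> class_enum k) {..<card (iso_class k)} {..<card (iso_class k)}"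
    using bij_betw_trans[OF bij_betw_trans[OF class_enum_bij block_group_perm_iso_class[OF assms]] class_pos_bij]
    by (simp add: comp_assoc)
  then show ?thesis unfolding class_perm_def using restrict_id_ext_bij ext_bij_self by blast
qed

lemma class_perm_inv:
  assumes k: "k < length cs" and i: "i < card (iso_class k)"
  shows "inv_into UNIV (class_perm \<pi> k) i = class_pos k (inv_into UNIV \<pi> (class_enum k i))"
proof -
  have "inv_into UNIV \<pi> (class_enum k i) \<in> iso_class k"
    using class_enum_in[OF i] block_group_perm_in(2) rep_idx_block_group_perm_inv unfolding iso_class_def by auto
  then have "class_perm \<pi> k (class_pos k (inv_into UNIV \<pi> (class_enum k i))) = i"
    unfolding class_perm_def
    using class_pos_less class_enum_pos permutes_inverses(1)[OF perm] class_pos_enum[OF i] by simp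
  then show ?thesis using permutes_inv_eq[OF class_perm_permutes[OF k]] by blast
qed

lemma wreath_coords_carrier:
  "wreath_coords (\<pi>, \<phi>) \<in> carrier (dprod (map (\<lambda>c. wreath (ncopies c) (H c)) cs))"
proof -
  have "wreath_coords (\<pi>, \<phi>) ! k \<in> carrier (wreath (ncopies (cs ! k)) (H (cs ! k)))"
    if k: "k < length cs" for k
  proof -
    have "inv_into UNIV \<pi> (class_enum k i) \<in> C \<and> rep_idx (inv_into UNIV \<pi> (class_enum k i)) = k"
      if "i < card (iso_class k)" for i
      using class_enum_in[OF that] block_group_perm_in(2) rep_idx_block_group_perm_inv
      unfolding iso_class_def by auto
    then have "local_part \<pi> \<phi> (inv_into UNIV \<pi> (class_enum k i)) \<in> Iso (cs ! k) (cs ! k)"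
      if "i < card (iso_class k)" for i
      using local_part_block_group that by metis
    then show ?thesis
      unfolding wreath_coords_nth[OF k] wreath_def card_iso_class[OF k, symmetric]
      using class_perm_permutes[OF k] carrier_H[OF nth_mem[OF k]] by auto
  qed
  then show ?thesis unfolding dprod_def wreath_coords_def by simp
qed

end

lemma local_part_mult:
  assumes g: "(\<pi>, \<phi>) \<in> carrier block_group" and h: "(\<pi>', \<phi>') \<in> carrier block_group" and d: "d \<in> C"
  shows "local_part (\<pi> \<circ> \<pi>') (\<lambda>c. restrict_id (\<phi> (\<pi>' c) \<circ> \<phi>' c) (S c)) d =
    restrict_id (local_part \<pi> \<phi> (\<pi>' d) \<circ> local_part \<pi>' \<phi>' d) (S (cs ! rep_idx d))"
proof
  fix x
  define r where "r = cs ! rep_idx d"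
  have d': "\<pi>' d \<in> C" using block_group_perm_in(1)[OF h d] .
  have r': "cs ! rep_idx (\<pi>' d) = r" "cs ! rep_idx (\<pi> (\<pi>' d)) = r"
    unfolding r_def using rep_idx_block_group_perm[OF h d] rep_idx_block_group_perm[OF g d'] by simp_all
  have from_d: "from_rep d \<in> ext_bij (S r) (S d)"
    unfolding r_def using Iso_ext_bij[OF rep_in[OF rep_idx(1)[OF d]] d from_rep_Iso[OF d]] .
  have from_d': "from_rep (\<pi>' d) \<in> ext_bij (S r) (S (\<pi>' d))"
    using Iso_ext_bij[OF rep_in[OF rep_idx(1)[OF d']] d' from_rep_Iso[OF d']] r'(1) by simp
  have \<phi>': "\<phi>' d \<in> ext_bij (S d) (S (\<pi>' d))" using Iso_ext_bij[OF d d' block_groupD(2)[OF h d]] .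
  show "local_part (\<pi> \<circ> \<pi>') (\<lambda>c. restrict_id (\<phi> (\<pi>' c) \<circ> \<phi>' c) (S c)) d x =
    restrict_id (local_part \<pi> \<phi> (\<pi>' d) \<circ> local_part \<pi>' \<phi>' d) (S (cs ! rep_idx d)) x"
  proof (cases "x \<in> S r")
    case True
    have y: "\<phi>' d (from_rep d x) \<in> S (\<pi>' d)" using ext_bijD(4)[OF \<phi>' ext_bijD(4)[OF from_d True]] .
    define z where "z = inv_into (S r) (from_rep (\<pi>' d)) (\<phi>' d (from_rep d x))"
    have z: "z \<in> S r" "from_rep (\<pi>' d) z = \<phi>' d (from_rep d x)"
      unfolding z_def using bij_betwE[OF bij_betw_inv_into[OF ext_bijD(1)[OF from_d']]] y
        bij_betw_inv_into_right[OF ext_bijD(1)[OF from_d'] y] by auto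
    have "local_part \<pi>' \<phi>' d x = z" unfolding local_part_def z_def r_def[symmetric] using True by simp
    then show ?thesis
      unfolding local_part_def r'(1,2) r_def[symmetric] using True z ext_bijD(4)[OF from_d True] by simp
  next
    case False
    then show ?thesis unfolding local_part_def r_def[symmetric] by simp
  qed
qed

lemma class_perm_comp:
  assumes g: "(\<pi>, \<phi>) \<in> carrier block_group" and h: "(\<pi>', \<phi>') \<in> carrier block_group"
    and k: "k < length cs"
  shows "class_perm (\<pi> \<circ> \<pi>') k = class_perm \<pi> k \<circ> class_perm \<pi>' k"
proof
  fix i
  show "class_perm (\<pi> \<circ> \<pi>') k i = (class_perm \<pi> k \<circ> class_perm \<pi>' k) i"
  proof (cases "i < card (iso_class k)")
    case True
    have "\<pi>' (class_enum k i) \<in> iso_class k"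
      using bij_betwE[OF block_group_perm_iso_class[OF h k]] class_enum_in[OF True] by blast
    then show ?thesis unfolding class_perm_def using True class_pos_less class_enum_pos by simp
  next
    case False
    then show ?thesis unfolding class_perm_def by simp
  qed
qed

lemma wreath_coords_mult:
  assumes g: "g \<in> carrier block_group" and h: "h \<in> carrier block_group"
  shows "wreath_coords (g \<otimes>\<^bsub>block_group\<^esub> h) =
    wreath_coords g \<otimes>\<^bsub>dprod (map (\<lambda>c. wreath (ncopies c) (H c)) cs)\<^esub> wreath_coords h"
proof -
  obtain \<pi> \<phi> \<pi>' \<phi>' where gh: "g = (\<pi>, \<phi>)" "h = (\<pi>', \<phi>')" by fastforce
  note g = g[unfolded gh(1)] and h = h[unfolded gh(2)]
  define \<Phi> where "\<Phi> c = (if c \<in> C then restrict_id (\<phi> (\<pi>' c) \<circ> \<phi>' c) (S c) else undefined)" for c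
  have invc: "inv_into UNIV (\<pi> \<circ> \<pi>') = inv_into UNIV \<pi>' \<circ> inv_into UNIV \<pi>"
    using o_inv_distrib permutes_bij[OF block_groupD(1)[OF g]] permutes_bij[OF block_groupD(1)[OF h]] by blast
  have "wreath_coords (\<pi> \<circ> \<pi>', \<Phi>) ! k =
      wreath_coords (\<pi>, \<phi>) ! k \<otimes>\<^bsub>wreath (ncopies (cs ! k)) (H (cs ! k))\<^esub> wreath_coords (\<pi>', \<phi>') ! k"
    if k: "k < length cs" for k
  proof -
    have entry: "local_part (\<pi> \<circ> \<pi>') \<Phi> (inv_into UNIV (\<pi> \<circ> \<pi>') (class_enum k i)) =
        local_part \<pi> \<phi> (inv_into UNIV \<pi> (class_enum k i)) \<otimes>\<^bsub>H (cs ! k)\<^esub>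
        local_part \<pi>' \<phi>' (inv_into UNIV \<pi>' (class_enum k (inv_into UNIV (class_perm \<pi> k) i)))"
      if i: "i < card (iso_class k)" for i
    proof -
      define d1 where "d1 = inv_into UNIV \<pi> (class_enum k i)"
      define d where "d = inv_into UNIV \<pi>' d1"
      have d1: "d1 \<in> iso_class k" and d: "d \<in> C" "rep_idx d = k"
        using class_enum_in[OF i] block_group_perm_in(2)[OF g] block_group_perm_in(2)[OF h]
          rep_idx_block_group_perm_inv[OF g] rep_idx_block_group_perm_inv[OF h]
        unfolding d1_def d_def iso_class_def by auto
      have \<pi>'d: "\<pi>' d = d1" unfolding d_def using permutes_inverses(1)[OF block_groupD(1)[OF h]] by simp
      have d1C: "d1 \<in> C" "rep_idx d1 = k" using d1 unfolding iso_class_def by auto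
      have "local_part (\<pi> \<circ> \<pi>') \<Phi> d =
          local_part (\<pi> \<circ> \<pi>') (\<lambda>c. restrict_id (\<phi> (\<pi>' c) \<circ> \<phi>' c) (S c)) d"
        by (rule local_part_cong) (simp add: \<Phi>_def d(1))
      also have "\<dots> = restrict_id (local_part \<pi> \<phi> d1 \<circ> local_part \<pi>' \<phi>' d) (S (cs ! k))"
        using local_part_mult[OF g h d(1)] \<pi>'d d(2) by simp
      also have "\<dots> = local_part \<pi> \<phi> d1 \<otimes>\<^bsub>H (cs ! k)\<^esub> local_part \<pi>' \<phi>' d"
        using mult_H[OF nth_mem[OF k]] local_part_block_group[OF g d1C(1)] local_part_block_group[OF h d(1)]
        unfolding d1C(2) d(2) by simp
      finally have "local_part (\<pi> \<circ> \<pi>') \<Phi> d = local_part \<pi> \<phi> d1 \<otimes>\<^bsub>H (cs ! k)\<^esub> local_part \<pi>' \<phi>' d" .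
      then show ?thesis
        using class_perm_inv[OF g k i] class_enum_pos[OF d1] invc unfolding d_def d1_def by simp
    qed
    have "inv_into UNIV (class_perm \<pi> k) i < card (iso_class k)" if "i < card (iso_class k)" for i
      using permutes_in_image[OF permutes_inv[OF class_perm_permutes[OF g k]]] that by simp
    then show ?thesis
      unfolding wreath_coords_nth[OF k] wreath_def card_iso_class[OF k, symmetric]
      using class_perm_comp[OF g h k] entry by simp
  qed
  then show ?thesis
    unfolding gh mult_block_group \<Phi>_def[symmetric] by (simp add: dprod_def wreath_coords_def)
qed

lemma block_group_in_iso_class:
  assumes g: "(\<pi>, \<phi>) \<in> carrier block_group" and d: "d \<in> C"
  shows "d \<in> iso_class (rep_idx d)" "\<pi> d \<in> iso_class (rep_idx d)"
  using d block_group_perm_in(1)[OF g d] rep_idx_block_group_perm[OF g d] unfolding iso_class_def by auto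

lemma wreath_coords_determine_perm:
  assumes g: "(\<pi>, \<phi>) \<in> carrier block_group" and h: "(\<pi>', \<phi>') \<in> carrier block_group"
    and eq: "wreath_coords (\<pi>, \<phi>) = wreath_coords (\<pi>', \<phi>')"
  shows "\<pi> = \<pi>'"
proof
  fix d show "\<pi> d = \<pi>' d"
  proof (cases "d \<in> C")
    case True
    define k where "k = rep_idx d"
    have k: "k < length cs" unfolding k_def using rep_idx(1)[OF True] .
    note cls = block_group_in_iso_class[OF g True, folded k_def] block_group_in_iso_class(2)[OF h True, folded k_def]
    have "class_perm \<pi> k (class_pos k d) = class_perm \<pi>' k (class_pos k d)"
      using arg_cong[OF eq, of "\<lambda>xs. fst (xs ! k)"] unfolding wreath_coords_nth[OF k] by simp
    then have "class_pos k (\<pi> d) = class_pos k (\<pi>' d)"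
      unfolding class_perm_def using cls(1) class_pos_less class_enum_pos by simp
    then show ?thesis using cls(2,3) class_enum_pos by metis
  next
    case False
    then show ?thesis using permutes_not_in block_groupD(1)[OF g] block_groupD(1)[OF h] by metis
  qed
qed

lemma wreath_coords_determine_map:
  assumes g: "(\<pi>, \<phi>) \<in> carrier block_group" and h: "(\<pi>, \<phi>') \<in> carrier block_group"
    and eq: "wreath_coords (\<pi>, \<phi>) = wreath_coords (\<pi>, \<phi>')"
  shows "\<phi> = \<phi>'"
proof
  fix d show "\<phi> d = \<phi>' d"
  proof (cases "d \<in> C")
    case True
    define k where "k = rep_idx d"
    have k: "k < length cs" unfolding k_def using rep_idx(1)[OF True] .
    have \<pi>d: "\<pi> d \<in> iso_class k" using block_group_in_iso_class(2)[OF g True] unfolding k_def .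
    define i where "i = class_pos k (\<pi> d)"
    have i: "i < card (iso_class k)" unfolding i_def using class_pos_less[OF \<pi>d] .
    have d: "inv_into UNIV \<pi> (class_enum k i) = d"
      unfolding i_def using class_enum_pos[OF \<pi>d] permutes_inverses(2)[OF block_groupD(1)[OF g]] by simp
    have "\<forall>i<card (iso_class k). local_part \<pi> \<phi> (inv_into UNIV \<pi> (class_enum k i)) =
        local_part \<pi> \<phi>' (inv_into UNIV \<pi> (class_enum k i))"
      using arg_cong[OF eq, of "\<lambda>xs. snd (xs ! k)"] unfolding wreath_coords_nth[OF k] by simp
    then have "local_part \<pi> \<phi> d = local_part \<pi> \<phi>' d" using i d by metis
    then show ?thesis
      using block_map_local_part[of d \<pi>, OF True block_group_perm_in(1)[OF g True]
          rep_idx_block_group_perm[OF g True]] block_groupD(2)[OF g True] block_groupD(2)[OF h True]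
        local_part_cong[of \<phi> d "\<lambda>_. \<phi> d" \<pi>] local_part_cong[of \<phi>' d "\<lambda>_. \<phi>' d" \<pi>]
      by metis
  next
    case False
    then show ?thesis using block_groupD(3)[OF g] block_groupD(3)[OF h] by simp
  qed
qed

lemma wreath_coords_inj: "inj_on wreath_coords (carrier block_group)"
proof (rule inj_onI)
  fix g h assume g: "g \<in> carrier block_group" and h: "h \<in> carrier block_group"
    and eq: "wreath_coords g = wreath_coords h"
  obtain \<pi> \<phi> \<pi>' \<phi>' where gh: "g = (\<pi>, \<phi>)" "h = (\<pi>', \<phi>')" by fastforce
  have "\<pi> = \<pi>'" using wreath_coords_determine_perm g h eq unfolding gh by blast
  moreover from this have "\<phi> = \<phi>'" using wreath_coords_determine_map g h eq unfolding gh by blast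
  ultimately show "g = h" unfolding gh by simp
qed

definition coords_perm :: "((nat \<Rightarrow> nat) \<times> ('a \<Rightarrow> 'a) list) list \<Rightarrow> 'c \<Rightarrow> 'c" where
  "coords_perm ys d = (if d \<in> C then class_enum (rep_idx d) (fst (ys ! rep_idx d) (class_pos (rep_idx d) d)) else d)"

definition coords_map :: "((nat \<Rightarrow> nat) \<times> ('a \<Rightarrow> 'a) list) list \<Rightarrow> 'c \<Rightarrow> 'a \<Rightarrow> 'a" where
  "coords_map ys d = (if d \<in> C then block_map (coords_perm ys) d
     (snd (ys ! rep_idx d) ! class_pos (rep_idx d) (coords_perm ys d)) else undefined)"

context
  fixes ys
  assumes ys: "ys \<in> carrier (dprod (map (\<lambda>c. wreath (ncopies c) (H c)) cs))"
begin

private lemma ys_nth: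
  assumes k: "k < length cs"
  shows "fst (ys ! k) permutes {..<card (iso_class k)}" "length (snd (ys ! k)) = card (iso_class k)"
    "set (snd (ys ! k)) \<subseteq> Iso (cs ! k) (cs ! k)"
proof -
  have "ys ! k \<in> carrier (wreath (ncopies (cs ! k)) (H (cs ! k)))" using ys k unfolding dprod_def by simp
  then show "fst (ys ! k) permutes {..<card (iso_class k)}" "length (snd (ys ! k)) = card (iso_class k)"
    "set (snd (ys ! k)) \<subseteq> Iso (cs ! k) (cs ! k)"
    unfolding wreath_def card_iso_class[OF k] using carrier_H[OF nth_mem[OF k]] by auto
qed

lemma coords_perm_class:
  assumes "d \<in> C"
  shows "coords_perm ys d \<in> iso_class (rep_idx d)"
    "class_pos (rep_idx d) (coords_perm ys d) = fst (ys ! rep_idx d) (class_pos (rep_idx d) d)"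
proof -
  define k where "k = rep_idx d"
  have "fst (ys ! k) (class_pos k d) < card (iso_class k)"
    using permutes_in_image[OF ys_nth(1)] rep_idx(1)[OF assms] class_pos_less assms
    unfolding k_def iso_class_def by simp
  then show "coords_perm ys d \<in> iso_class (rep_idx d)"
    "class_pos (rep_idx d) (coords_perm ys d) = fst (ys ! rep_idx d) (class_pos (rep_idx d) d)"
    unfolding coords_perm_def k_def[symmetric] using assms class_enum_in class_pos_enum by simp_all
qed

lemma coords_perm_permutes: "coords_perm ys permutes C"
proof -
  have into: "coords_perm ys d \<in> C" "rep_idx (coords_perm ys d) = rep_idx d" if "d \<in> C" for d
    using coords_perm_class(1)[OF that] unfolding iso_class_def by auto
  have "inj_on (coords_perm ys) C"
  proof (rule inj_onI)
    fix d e assume d: "d \<in> C" and e: "e \<in> C" and eq: "coords_perm ys d = coords_perm ys e"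
    define k where "k = rep_idx d"
    have ke: "rep_idx e = k" using into(2)[OF d] into(2)[OF e] eq unfolding k_def by simp
    have "fst (ys ! k) (class_pos k d) = fst (ys ! k) (class_pos k e)"
      using coords_perm_class(2)[OF d] coords_perm_class(2)[OF e] eq ke unfolding k_def by simp
    then have "class_pos k d = class_pos k e"
      using permutes_inj[OF ys_nth(1)[OF rep_idx(1)[OF d]]] unfolding k_def by (meson injD)
    moreover have "d \<in> iso_class k" "e \<in> iso_class k" using d e ke unfolding k_def iso_class_def by simp_all
    ultimately show "d = e" using class_enum_pos by metis
  qed
  moreover have "coords_perm ys ` C \<subseteq> C" using into(1) by blast
  ultimately have "bij_betw (coords_perm ys) C C"
    unfolding bij_betw_def using endo_inj_surj[OF finite_blocks] by simp
  then show ?thesis by (rule bij_imp_permutes) (simp add: coords_perm_def)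
qed

lemma coords_map_Iso:
  assumes d: "d \<in> C"
  shows "coords_map ys d \<in> Iso d (coords_perm ys d)"
proof -
  define k where "k = rep_idx d"
  have k: "k < length cs" unfolding k_def using rep_idx(1)[OF d] .
  have \<pi>d: "coords_perm ys d \<in> C" "rep_idx (coords_perm ys d) = rep_idx d"
    using coords_perm_class(1)[OF d] unfolding iso_class_def by auto
  have "class_pos k (coords_perm ys d) < length (snd (ys ! k))"
    using class_pos_less coords_perm_class(1)[OF d] ys_nth(2)[OF k] unfolding k_def by simp
  then have "snd (ys ! k) ! class_pos k (coords_perm ys d) \<in> Iso (cs ! k) (cs ! k)"
    using ys_nth(3)[OF k] nth_mem by blast
  then show ?thesis
    unfolding coords_map_def k_def using block_map_Iso[of d "coords_perm ys", OF d \<pi>d] d by simp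
qed

lemma coords_in_block_group: "(coords_perm ys, coords_map ys) \<in> carrier block_group"
  unfolding block_group_def using coords_perm_permutes coords_map_Iso by (simp add: coords_map_def)

lemma wreath_coords_coords: "wreath_coords (coords_perm ys, coords_map ys) = ys"
proof (rule nth_equalityI)
  have "length ys = length cs" using ys unfolding dprod_def by simp
  then show "length (wreath_coords (coords_perm ys, coords_map ys)) = length ys"
    unfolding wreath_coords_def by simp
  fix k assume "k < length (wreath_coords (coords_perm ys, coords_map ys))"
  then have k: "k < length cs" unfolding wreath_coords_def by simp
  note g = coords_in_block_group
  have "class_perm (coords_perm ys) k = fst (ys ! k)"
  proof
    fix i show "class_perm (coords_perm ys) k i = fst (ys ! k) i"
    proof (cases "i < card (iso_class k)")
      case True
      have c: "class_enum k i \<in> C" and ck: "rep_idx (class_enum k i) = k"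
        using class_enum_in[OF True] unfolding iso_class_def by auto
      show ?thesis
        unfolding class_perm_def using coords_perm_class(2)[OF c, unfolded ck] True class_pos_enum[OF True]
        by simp
    next
      case False
      then show ?thesis unfolding class_perm_def using permutes_not_in[OF ys_nth(1)[OF k]] by simp
    qed
  qed
  moreover have "local_part (coords_perm ys) (coords_map ys)
      (inv_into UNIV (coords_perm ys) (class_enum k i)) = snd (ys ! k) ! i"
    if i: "i < card (iso_class k)" for i
  proof -
    define d where "d = inv_into UNIV (coords_perm ys) (class_enum k i)"
    have \<pi>d: "coords_perm ys d = class_enum k i"
      unfolding d_def using permutes_inverses(1)[OF coords_perm_permutes] by simp
    have d: "d \<in> C" "rep_idx d = k"
      using class_enum_in[OF i] block_group_perm_in(2)[OF g] rep_idx_block_group_perm_inv[OF g]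
      unfolding d_def iso_class_def by auto
    have "snd (ys ! k) ! i \<in> Iso (cs ! rep_idx d) (cs ! rep_idx d)"
      using ys_nth(2,3)[OF k] i d(2) nth_mem by auto
    have "coords_map ys d = block_map (coords_perm ys) d (snd (ys ! k) ! i)"
      unfolding coords_map_def using d \<pi>d class_pos_enum[OF i] by simp
    then have "local_part (coords_perm ys) (coords_map ys) d =
        local_part (coords_perm ys) (\<lambda>_. block_map (coords_perm ys) d (snd (ys ! k) ! i)) d"
      by (rule local_part_cong)
    also have "\<dots> = snd (ys ! k) ! i"
      using local_part_block_map[of d "coords_perm ys", OF d(1) block_group_perm_in(1)[OF g d(1)]
          rep_idx_block_group_perm[OF g d(1)] \<open>snd (ys ! k) ! i \<in> _\<close>] .
    finally show ?thesis unfolding d_def .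
  qed
  ultimately show "wreath_coords (coords_perm ys, coords_map ys) ! k = ys ! k"
    unfolding wreath_coords_nth[OF k] using ys_nth(2)[OF k] by (simp add: list_eq_iff_nth_eq prod_eq_iff)
qed

end

theorem block_group_iso_dprod: "block_group \<cong> dprod (map (\<lambda>c. wreath (ncopies c) (H c)) cs)"
proof (rule is_isoI_pointwise[where h = wreath_coords])
  show "wreath_coords g \<in> carrier (dprod (map (\<lambda>c. wreath (ncopies c) (H c)) cs))"
    if "g \<in> carrier block_group" for g
    using wreath_coords_carrier that by (cases g) simp
  show "carrier (dprod (map (\<lambda>c. wreath (ncopies c) (H c)) cs)) \<subseteq> wreath_coords ` carrier block_group"
  proof
    fix ys assume ys: "ys \<in> carrier (dprod (map (\<lambda>c. wreath (ncopies c) (H c)) cs))"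
    show "ys \<in> wreath_coords ` carrier block_group"
      by (rule image_eqI[of ys wreath_coords "(coords_perm ys, coords_map ys)", OF wreath_coords_coords[OF ys, symmetric] coords_in_block_group[OF ys]])
  qed
qed (rule wreath_coords_mult, assumption+, rule wreath_coords_inj)

end

lemma transport_iso: "inj_on f (carrier G) \<Longrightarrow> G \<cong> transport f G"
  by (rule is_isoI_pointwise[where h = f]) (auto simp: transport_def inv_into_f_f)

lemma wreath_iso:
  assumes "P \<cong> Q"
  shows "wreath m P \<cong> wreath m Q"
proof -
  obtain h where h: "h \<in> hom P Q" "bij_betw h (carrier P) (carrier Q)"
    using assms unfolding is_iso_def iso_def by blast
  show ?thesis
  proof (rule is_isoI_pointwise[where h = "\<lambda>(s, xs). (s, map h xs)"])
    show "(\<lambda>(s, xs). (s, map h xs)) x \<in> carrier (wreath m Q)" if "x \<in> carrier (wreath m P)" for x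
      using that bij_betwE[OF h(2)] unfolding wreath_def by (fastforce simp: subset_iff)
    show "(\<lambda>(s, xs). (s, map h xs)) (x \<otimes>\<^bsub>wreath m P\<^esub> y) =
        (\<lambda>(s, xs). (s, map h xs)) x \<otimes>\<^bsub>wreath m Q\<^esub> (\<lambda>(s, xs). (s, map h xs)) y"
      if x: "x \<in> carrier (wreath m P)" and y: "y \<in> carrier (wreath m P)" for x y
    proof -
      obtain s xs t ys where xy: "x = (s, xs)" "y = (t, ys)" by fastforce
      have "s permutes {..<m}" "length xs = m" "set xs \<subseteq> carrier P" "length ys = m" "set ys \<subseteq> carrier P"
        using x y unfolding xy wreath_def by auto
      moreover have "inv_into UNIV s i < m" if "i < m" "s permutes {..<m}" for i
        using permutes_in_image[OF permutes_inv[OF that(2)]] that(1) by simp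
      ultimately show ?thesis
        unfolding xy wreath_def using hom_mult[OF h(1)] by (auto simp: subset_iff)
    qed
    show "inj_on (\<lambda>(s, xs). (s, map h xs)) (carrier (wreath m P))"
    proof (rule inj_onI)
      fix x y assume x: "x \<in> carrier (wreath m P)" and y: "y \<in> carrier (wreath m P)"
        and e: "(\<lambda>(s, xs). (s, map h xs)) x = (\<lambda>(s, xs). (s, map h xs)) y"
      obtain s xs t ys where xy: "x = (s, xs)" "y = (t, ys)" by fastforce
      have "set xs \<subseteq> carrier P" "set ys \<subseteq> carrier P" using x y unfolding xy wreath_def by auto
      then have "inj_on h (set xs \<union> set ys)"
        using inj_on_subset[OF bij_betw_imp_inj_on[OF h(2)]] by blast
      moreover have "s = t" "map h xs = map h ys" using e unfolding xy by auto
      ultimately show "x = y" unfolding xy using inj_on_map_eq_map by blast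
    qed
    show "carrier (wreath m Q) \<subseteq> (\<lambda>(s, xs). (s, map h xs)) ` carrier (wreath m P)"
    proof (clarify)
      fix s zs assume "(s, zs) \<in> carrier (wreath m Q)"
      then have z: "s permutes {..<m}" "length zs = m" "set zs \<subseteq> carrier Q" unfolding wreath_def by auto
      define xs where "xs = map (inv_into (carrier P) h) zs"
      have "set xs \<subseteq> carrier P" "map h xs = zs"
        unfolding xs_def using z(3) bij_betw_inv_into_right[OF h(2)] bij_betwE[OF bij_betw_inv_into[OF h(2)]]
        by (auto simp: subset_iff map_idI)
      then show "(s, zs) \<in> (\<lambda>(s, xs). (s, map h xs)) ` carrier (wreath m P)"
        using z unfolding wreath_def by (auto intro!: image_eqI[of _ _ "(s, xs)"] simp: xs_def)
    qed
  qed
qed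

lemma dprod_iso:
  assumes len: "length Gs = length Hs" and isos: "\<And>i. i < length Gs \<Longrightarrow> Gs ! i \<cong> Hs ! i"
  shows "dprod Gs \<cong> dprod Hs"
proof -
  define h where "h i = (SOME f. f \<in> iso (Gs ! i) (Hs ! i))" for i
  have "h i \<in> iso (Gs ! i) (Hs ! i)" if "i < length Gs" for i
    unfolding h_def using isos[OF that] unfolding is_iso_def by (simp add: some_in_eq)
  then have h: "\<And>i. i < length Gs \<Longrightarrow> h i \<in> hom (Gs ! i) (Hs ! i)"
    "\<And>i. i < length Gs \<Longrightarrow> bij_betw (h i) (carrier (Gs ! i)) (carrier (Hs ! i))"
    unfolding iso_def by auto
  define F where "F xs = map (\<lambda>i. h i (xs ! i)) [0..<length Gs]" for xs
  show ?thesis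
  proof (rule is_isoI_pointwise[where h = F])
    show "F x \<in> carrier (dprod Hs)" if x: "x \<in> carrier (dprod Gs)" for x
    proof -
      have "h i (x ! i) \<in> carrier (Hs ! i)" if i: "i < length Gs" for i
        using x i bij_betw_apply[OF h(2)[OF i]] unfolding dprod_def by auto
      then show ?thesis unfolding F_def dprod_def using len by simp
    qed
    show "F (x \<otimes>\<^bsub>dprod Gs\<^esub> y) = F x \<otimes>\<^bsub>dprod Hs\<^esub> F y"
      if x: "x \<in> carrier (dprod Gs)" and y: "y \<in> carrier (dprod Gs)" for x y
    proof -
      have "h i (x ! i \<otimes>\<^bsub>Gs ! i\<^esub> y ! i) = h i (x ! i) \<otimes>\<^bsub>Hs ! i\<^esub> h i (y ! i)"
        if i: "i < length Gs" for i
        using x y i hom_mult[OF h(1)[OF i]] unfolding dprod_def by simp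
      then show ?thesis unfolding F_def dprod_def using len by simp
    qed
    show "inj_on F (carrier (dprod Gs))"
    proof (rule inj_onI, rule nth_equalityI)
      fix x y assume x: "x \<in> carrier (dprod Gs)" and y: "y \<in> carrier (dprod Gs)" and e: "F x = F y"
      then show "length x = length y" unfolding dprod_def by simp
      fix i assume "i < length x"
      then have i: "i < length Gs" using x unfolding dprod_def by simp
      have "h i (x ! i) = h i (y ! i)" using arg_cong[OF e, of "\<lambda>zs. zs ! i"] i unfolding F_def by simp
      moreover have "x ! i \<in> carrier (Gs ! i)" "y ! i \<in> carrier (Gs ! i)"
        using x y i unfolding dprod_def by auto
      ultimately show "x ! i = y ! i" using inj_onD[OF bij_betw_imp_inj_on[OF h(2)[OF i]]] by blast
    qed
    show "carrier (dprod Hs) \<subseteq> F ` carrier (dprod Gs)"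
    proof
      fix z assume "z \<in> carrier (dprod Hs)"
      then have z: "length z = length Gs" "\<And>i. i < length Gs \<Longrightarrow> z ! i \<in> carrier (Hs ! i)"
        using len unfolding dprod_def by auto
      define x where "x = map (\<lambda>i. inv_into (carrier (Gs ! i)) (h i) (z ! i)) [0..<length Gs]"
      have x_nth: "x ! i = inv_into (carrier (Gs ! i)) (h i) (z ! i)" if "i < length Gs" for i
        using that unfolding x_def by simp
      have "x ! i \<in> carrier (Gs ! i)" if i: "i < length Gs" for i
        unfolding x_nth[OF i] using bij_betw_apply[OF bij_betw_inv_into[OF h(2)[OF i]] z(2)[OF i]] .
      moreover have "length x = length Gs" unfolding x_def by simp
      ultimately have "x \<in> carrier (dprod Gs)" unfolding dprod_def by simp
      moreover have "F x = z"
      proof (rule nth_equalityI)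
        show "length (F x) = length z" unfolding F_def using z(1) by simp
        fix i assume "i < length (F x)"
        then have i: "i < length Gs" unfolding F_def by simp
        show "F x ! i = z ! i"
          unfolding F_def using i x_nth[OF i] bij_betw_inv_into_right[OF h(2)[OF i] z(2)[OF i]] by simp
      qed
      ultimately show "z \<in> F ` carrier (dprod Gs)" by blast
    qed
  qed
qed

definition perm_group :: "'a set \<Rightarrow> ('a \<Rightarrow> 'a) monoid" where
  "perm_group A = \<lparr>carrier = {w. w permutes A}, mult = (\<circ>), one = id\<rparr>"

lemma perm_group_iso:
  assumes h: "bij_betw h A B"
  shows "perm_group A \<cong> perm_group B"
proof (rule is_isoI_pointwise[where h = "map_permutation A h"])
  show "map_permutation A h w \<in> carrier (perm_group B)" if "w \<in> carrier (perm_group A)" for w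
    using map_permutation_permutes[OF h] that unfolding perm_group_def by simp
  show "map_permutation A h (w \<otimes>\<^bsub>perm_group A\<^esub> v) =
      map_permutation A h w \<otimes>\<^bsub>perm_group B\<^esub> map_permutation A h v"
    if "w \<in> carrier (perm_group A)" "v \<in> carrier (perm_group A)" for w v
    using map_permutation_compose'[OF bij_betw_imp_inj_on[OF h]] that unfolding perm_group_def by simp
  have left_inv: "map_permutation B (inv_into A h) (map_permutation A h w) = w" if "w permutes A" for w
    using map_permutation_compose_inv[OF h that] bij_betw_inv_into_left[OF h] by blast
  show "inj_on (map_permutation A h) (carrier (perm_group A))"
    by (rule inj_on_inverseI[where g = "map_permutation B (inv_into A h)"]) (simp add: left_inv perm_group_def)
  show "carrier (perm_group B) \<subseteq> map_permutation A h ` carrier (perm_group A)"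
  proof
    fix s assume "s \<in> carrier (perm_group B)"
    then have s: "s permutes B" unfolding perm_group_def by simp
    have "map_permutation A h (map_permutation B (inv_into A h) s) = s"
      using map_permutation_compose_inv[OF bij_betw_inv_into[OF h] s] bij_betw_inv_into_right[OF h] by blast
    moreover have "map_permutation B (inv_into A h) s permutes A"
      by (rule map_permutation_permutes[OF bij_betw_inv_into[OF h] s])
    ultimately show "s \<in> map_permutation A h ` carrier (perm_group A)"
      unfolding perm_group_def by (metis (mono_tags) image_eqI mem_Collect_eq partial_object.select_convs(1))
  qed
qed

lemma perm_group_iso_symg:
  assumes "finite A"
  shows "perm_group A \<cong> symg (card A)"
proof -
  obtain h where "bij_betw h A {0..<card A}" using ex_bij_betw_finite_nat[OF assms] ..
  then show ?thesis using perm_group_iso unfolding symg_def perm_group_def[symmetric] lessThan_atLeast0 by blast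
qed

lemma symg_iso_gsym: "symg r \<cong> gsym r"
  unfolding gsym_def by (rule transport_iso) (simp add: inj_on_def)

lemma wreath_iso_gwreath: "wreath m P \<cong> gwreath m P"
  unfolding gwreath_def by (rule transport_iso) (auto simp: inj_on_def)

lemma dprod_iso_gprod: "dprod Gs \<cong> gprod Gs"
  unfolding gprod_def by (rule transport_iso) (simp add: inj_on_def)

lemma dprod_wreath_iso_gwreath:
  assumes "\<And>c. c \<in> set cs \<Longrightarrow> G c \<cong> H c"
  shows "dprod (map (\<lambda>c. wreath (k c) (G c)) cs) \<cong> dprod (map (\<lambda>c. gwreath (k c) (H c)) cs)"
proof (rule dprod_iso)
  fix i assume "i < length (map (\<lambda>c. wreath (k c) (G c)) cs)"
  then have i: "i < length cs" by simp
  have "wreath (k (cs ! i)) (G (cs ! i)) \<cong> wreath (k (cs ! i)) (H (cs ! i))"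
    by (rule wreath_iso[OF assms[OF nth_mem[OF i]]])
  also have "\<dots> \<cong> gwreath (k (cs ! i)) (H (cs ! i))" by (rule wreath_iso_gwreath)
  finally show "map (\<lambda>c. wreath (k c) (G c)) cs ! i \<cong> map (\<lambda>c. gwreath (k c) (H c)) cs ! i"
    using i by simp
qed simp

section \<open>Graded ranked trees\<close>

lemma rt_subtree_simps [simp]:
  "rt_root (rt_subtree T c) = c" "rt_par (rt_subtree T c) = rt_par T" "rt_rank (rt_subtree T c) = rt_rank T"
  unfolding rt_subtree_def by simp_all

lemma rt_nodes_subtree: "rt_nodes (rt_subtree T c) = {v \<in> rt_nodes T. \<exists>k. (rt_par T ^^ k) v = c}"
  unfolding rt_subtree_def by simp

lemma rt_child_node: "c \<in> rt_children T \<Longrightarrow> c \<in> rt_nodes T"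
  unfolding rt_children_def by blast

text \<open>Levels stored in the nodes turn ancestry into arithmetic; the fission tree has this form.\<close>

locale graded_tree =
  fixes T :: "(nat \<times> 'b) rtree"
  assumes finite_nodes: "finite (rt_nodes T)"
    and root_node: "rt_root T \<in> rt_nodes T"
    and level_par: "fst (rt_par T v) = Suc (fst v)"
    and reaches_root: "v \<in> rt_nodes T \<Longrightarrow> \<exists>k. (rt_par T ^^ k) v = rt_root T"
    and par_node: "v \<in> rt_nodes T \<Longrightarrow> v \<noteq> rt_root T \<Longrightarrow> rt_par T v \<in> rt_nodes T"
begin

lemma level_par_pow: "fst ((rt_par T ^^ k) v) = fst v + k"
  by (induction k) (simp_all add: level_par)

lemma ancestor_level:
  assumes "(rt_par T ^^ k) v = c"
  shows "fst v \<le> fst c" "k = fst c - fst v"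
  using level_par_pow[of k v] assms by auto

lemma root_level:
  assumes "v \<in> rt_nodes T"
  shows "fst v \<le> fst (rt_root T)" "(rt_par T ^^ (fst (rt_root T) - fst v)) v = rt_root T"
  using reaches_root[OF assms] ancestor_level by metis+

lemma ancestor_node: "v \<in> rt_nodes T \<Longrightarrow> fst v + j \<le> fst (rt_root T) \<Longrightarrow> (rt_par T ^^ j) v \<in> rt_nodes T"
proof (induction j)
  case (Suc j)
  have "fst ((rt_par T ^^ j) v) \<noteq> fst (rt_root T)" using level_par_pow Suc.prems(2) by simp
  then show ?case using par_node Suc by fastforce
qed simp

lemma subtree_node:
  assumes "v \<in> rt_nodes (rt_subtree T c)"
  shows "v \<in> rt_nodes T" "fst v \<le> fst c" "(rt_par T ^^ (fst c - fst v)) v = c"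
proof -
  obtain k where k: "(rt_par T ^^ k) v = c" "v \<in> rt_nodes T" using assms unfolding rt_nodes_subtree by blast
  then show "v \<in> rt_nodes T" "fst v \<le> fst c" "(rt_par T ^^ (fst c - fst v)) v = c"
    using ancestor_level[OF k(1)] by simp_all
qed

lemma subtree_root_node: "c \<in> rt_nodes T \<Longrightarrow> c \<in> rt_nodes (rt_subtree T c)"
  unfolding rt_nodes_subtree by (auto intro: exI[of _ 0])

lemma graded_subtree:
  assumes c: "c \<in> rt_nodes T"
  shows "graded_tree (rt_subtree T c)"
proof
  show "finite (rt_nodes (rt_subtree T c))" using finite_nodes unfolding rt_nodes_subtree by simp
  show "rt_root (rt_subtree T c) \<in> rt_nodes (rt_subtree T c)" using subtree_root_node[OF c] by simp
  show "fst (rt_par (rt_subtree T c) v) = Suc (fst v)" for v using level_par by simp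
  show "\<exists>k. (rt_par (rt_subtree T c) ^^ k) v = rt_root (rt_subtree T c)"
    if "v \<in> rt_nodes (rt_subtree T c)" for v
    using that unfolding rt_nodes_subtree by simp
  fix v assume v: "v \<in> rt_nodes (rt_subtree T c)" and vc: "v \<noteq> rt_root (rt_subtree T c)"
  note sv = subtree_node[OF v]
  have lt: "fst v < fst c" using sv(2,3) vc by (cases "fst v = fst c") auto
  then have "v \<noteq> rt_root T" using root_level(1)[OF c] by auto
  then have "rt_par T v \<in> rt_nodes T" using par_node sv(1) by blast
  moreover have "(rt_par T ^^ (fst c - fst v - 1)) (rt_par T v) = c"
    using sv(3) lt by (metis Suc_diff_Suc diff_Suc_1 funpow_Suc_right o_apply)
  ultimately show "rt_par (rt_subtree T c) v \<in> rt_nodes (rt_subtree T c)"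
    unfolding rt_nodes_subtree by auto
qed

lemma subtree_subtree:
  assumes "d \<in> rt_nodes (rt_subtree T c)"
  shows "rt_subtree (rt_subtree T c) d = rt_subtree T d"
proof -
  obtain j where j: "(rt_par T ^^ j) d = c" using assms unfolding rt_nodes_subtree by blast
  have "(rt_par T ^^ (j + i)) v = c" if "(rt_par T ^^ i) v = d" for i v
    using that j by (simp add: funpow_add)
  then have "rt_nodes (rt_subtree (rt_subtree T c) d) = rt_nodes (rt_subtree T d)"
    unfolding rt_nodes_subtree by auto
  then show ?thesis unfolding rt_subtree_def by simp
qed

lemma subtree_root: "rt_subtree T (rt_root T) = T"
proof -
  have "rt_nodes (rt_subtree T (rt_root T)) = rt_nodes T"
    unfolding rt_nodes_subtree using reaches_root by blast
  then show ?thesis unfolding rt_subtree_def by simp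
qed

lemma child_level: "c \<in> rt_children T \<Longrightarrow> Suc (fst c) = fst (rt_root T)"
  unfolding rt_children_def using level_par by (metis (mono_tags, lifting) mem_Collect_eq)

lemma root_notin_child_subtree: "c \<in> rt_children T \<Longrightarrow> rt_root T \<notin> rt_nodes (rt_subtree T c)"
  using subtree_node(2) child_level by fastforce

lemma child_subtrees_disjoint:
  assumes "c \<in> rt_children T" "d \<in> rt_children T"
    "v \<in> rt_nodes (rt_subtree T c)" "v \<in> rt_nodes (rt_subtree T d)"
  shows "c = d"
  using subtree_node(3)[OF assms(3)] subtree_node(3)[OF assms(4)] child_level[OF assms(1)]
    child_level[OF assms(2)] by (metis Suc_inject)

lemma child_subtrees_cover:
  assumes v: "v \<in> rt_nodes T" "v \<noteq> rt_root T"
  shows "\<exists>c\<in>rt_children T. v \<in> rt_nodes (rt_subtree T c)"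
proof -
  define k where "k = fst (rt_root T) - fst v"
  have k: "(rt_par T ^^ k) v = rt_root T" "k \<noteq> 0" using root_level[OF v(1)] v(2) unfolding k_def by auto
  define c where "c = (rt_par T ^^ (k - 1)) v"
  have "c \<in> rt_nodes T" unfolding c_def using ancestor_node[OF v(1)] root_level(1)[OF v(1)] k_def k(2) by simp
  moreover have "rt_par T c = rt_root T" unfolding c_def using k
    by (metis Suc_diff_1 funpow_Suc_right funpow_swap1 neq0_conv o_apply)
  moreover have "fst c = fst v + (k - 1)" unfolding c_def by (rule level_par_pow)
  then have "c \<noteq> rt_root T" using k(2) root_level(1)[OF v(1)] unfolding k_def by auto
  ultimately have "c \<in> rt_children T" unfolding rt_children_def by blast
  moreover have "v \<in> rt_nodes (rt_subtree T c)" unfolding rt_nodes_subtree c_def using v(1) by blast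
  ultimately show ?thesis by blast
qed

lemma Union_child_subtrees: "(\<Union>c\<in>rt_children T. rt_nodes (rt_subtree T c)) = rt_nodes T - {rt_root T}"
  using child_subtrees_cover root_notin_child_subtree subtree_node(1) by blast

end

lemma rt_isoI:
  assumes "bij_betw f (rt_nodes T1) (rt_nodes T2)" "f (rt_root T1) = rt_root T2"
    "\<And>v. v \<in> rt_nodes T1 \<Longrightarrow> v \<noteq> rt_root T1 \<Longrightarrow> f (rt_par T1 v) = rt_par T2 (f v)"
    "\<And>v. v \<in> rt_nodes T1 \<Longrightarrow> rt_rank T2 (f v) = rt_rank T1 v"
  shows "rt_iso T1 T2 f"
  using assms unfolding rt_iso_def by blast

lemma rt_isoD:
  assumes "rt_iso T1 T2 f"
  shows "bij_betw f (rt_nodes T1) (rt_nodes T2)" "f (rt_root T1) = rt_root T2"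
    "\<And>v. v \<in> rt_nodes T1 \<Longrightarrow> v \<noteq> rt_root T1 \<Longrightarrow> f (rt_par T1 v) = rt_par T2 (f v)"
    "\<And>v. v \<in> rt_nodes T1 \<Longrightarrow> rt_rank T2 (f v) = rt_rank T1 v"
  using assms unfolding rt_iso_def by blast+

lemma rt_iso_id: "rt_iso T T id"
  by (rule rt_isoI) simp_all

lemma rt_iso_cong:
  assumes T1: "graded_tree T1" and f: "rt_iso T1 T2 f" and fg: "\<And>x. x \<in> rt_nodes T1 \<Longrightarrow> f x = g x"
  shows "rt_iso T1 T2 g"
proof (rule rt_isoI)
  show "bij_betw g (rt_nodes T1) (rt_nodes T2)"
    using bij_betw_cong[of "rt_nodes T1" f g "rt_nodes T2"] fg rt_isoD(1)[OF f] by simp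
  show "g (rt_root T1) = rt_root T2"
    using fg[OF graded_tree.root_node[OF T1]] rt_isoD(2)[OF f] by simp
  show "g (rt_par T1 v) = rt_par T2 (g v)" if "v \<in> rt_nodes T1" "v \<noteq> rt_root T1" for v
    using rt_isoD(3)[OF f that] fg[OF graded_tree.par_node[OF T1 that]] fg[OF that(1)] by simp
  show "rt_rank T2 (g v) = rt_rank T1 v" if "v \<in> rt_nodes T1" for v
    using rt_isoD(4)[OF f that] fg[OF that] by simp
qed

lemma rt_iso_nonroot:
  assumes f: "rt_iso T1 T2 f" and "rt_root T1 \<in> rt_nodes T1" "v \<in> rt_nodes T1" "v \<noteq> rt_root T1"
  shows "f v \<in> rt_nodes T2" "f v \<noteq> rt_root T2"
proof -
  show "f v \<in> rt_nodes T2" using bij_betw_apply[OF rt_isoD(1)[OF f] assms(3)] .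
  show "f v \<noteq> rt_root T2"
  proof
    assume "f v = rt_root T2"
    then have "f v = f (rt_root T1)" using rt_isoD(2)[OF f] by simp
    then show False using inj_onD[OF bij_betw_imp_inj_on[OF rt_isoD(1)[OF f]]] assms(2-4) by blast
  qed
qed

lemma rt_iso_comp:
  assumes T1: "graded_tree T1" and f: "rt_iso T1 T2 f" and g: "rt_iso T2 T3 g"
  shows "rt_iso T1 T3 (g \<circ> f)"
proof (rule rt_isoI)
  show "bij_betw (g \<circ> f) (rt_nodes T1) (rt_nodes T3)"
    using bij_betw_trans[OF rt_isoD(1)[OF f] rt_isoD(1)[OF g]] .
  show "(g \<circ> f) (rt_root T1) = rt_root T3" using rt_isoD(2)[OF f] rt_isoD(2)[OF g] by simp
  show "(g \<circ> f) (rt_par T1 v) = rt_par T3 ((g \<circ> f) v)" if "v \<in> rt_nodes T1" "v \<noteq> rt_root T1" for v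
    using rt_isoD(3)[OF f that] rt_isoD(3)[OF g rt_iso_nonroot[OF f graded_tree.root_node[OF T1] that]]
    by simp
  show "rt_rank T3 ((g \<circ> f) v) = rt_rank T1 v" if "v \<in> rt_nodes T1" for v
    using rt_isoD(4)[OF f that] rt_isoD(4)[OF g bij_betw_apply[OF rt_isoD(1)[OF f] that]] by simp
qed

lemma rt_iso_inv:
  assumes T1: "graded_tree T1" and f: "rt_iso T1 T2 f"
  shows "rt_iso T2 T1 (inv_into (rt_nodes T1) f)"
proof -
  define g where "g = inv_into (rt_nodes T1) f"
  note b = rt_isoD(1)[OF f]
  have gb: "bij_betw g (rt_nodes T2) (rt_nodes T1)" unfolding g_def using bij_betw_inv_into[OF b] .
  have gf: "g (f x) = x" if "x \<in> rt_nodes T1" for x unfolding g_def using bij_betw_inv_into_left[OF b that] .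
  have fg: "f (g y) = y" if "y \<in> rt_nodes T2" for y unfolding g_def using bij_betw_inv_into_right[OF b that] .
  have "rt_iso T2 T1 g"
  proof (rule rt_isoI[OF gb])
    show gr: "g (rt_root T2) = rt_root T1"
      using gf[OF graded_tree.root_node[OF T1]] rt_isoD(2)[OF f] by simp
    show "g (rt_par T2 v) = rt_par T1 (g v)" if v: "v \<in> rt_nodes T2" "v \<noteq> rt_root T2" for v
    proof -
      have "g v \<noteq> rt_root T1"
      proof
        assume "g v = rt_root T1"
        then have "v = rt_root T2" using fg[OF v(1)] rt_isoD(2)[OF f] by simp
        then show False using v(2) by simp
      qed
      note u = bij_betw_apply[OF gb v(1)] this
      have "f (rt_par T1 (g v)) = rt_par T2 v" using rt_isoD(3)[OF f u] fg[OF v(1)] by simp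
      then show ?thesis using gf[OF graded_tree.par_node[OF T1 u]] by simp
    qed
    show "rt_rank T1 (g v) = rt_rank T2 v" if "v \<in> rt_nodes T2" for v
      using rt_isoD(4)[OF f bij_betw_apply[OF gb that]] fg[OF that] by simp
  qed
  then show ?thesis unfolding g_def .
qed

lemma rt_iso_par_pow:
  assumes T1: "graded_tree T1" and f: "rt_iso T1 T2 f" and v: "v \<in> rt_nodes T1"
  shows "fst v + k \<le> fst (rt_root T1) \<Longrightarrow> f ((rt_par T1 ^^ k) v) = (rt_par T2 ^^ k) (f v)"
proof (induction k)
  case (Suc k)
  have "(rt_par T1 ^^ k) v \<in> rt_nodes T1" using graded_tree.ancestor_node[OF T1 v] Suc.prems by simp
  moreover have "fst ((rt_par T1 ^^ k) v) < fst (rt_root T1)"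
    using graded_tree.level_par_pow[OF T1] Suc.prems by simp
  then have "(rt_par T1 ^^ k) v \<noteq> rt_root T1" by auto
  ultimately show ?case using rt_isoD(3)[OF f] Suc by simp
qed simp

lemma rt_iso_child:
  assumes T1: "graded_tree T1" and f: "rt_iso T1 T2 f" and c: "c \<in> rt_children T1"
  shows "f c \<in> rt_children T2"
proof -
  have c': "c \<in> rt_nodes T1" "c \<noteq> rt_root T1" "rt_par T1 c = rt_root T1"
    using c unfolding rt_children_def by auto
  have "rt_par T2 (f c) = rt_root T2" using rt_isoD(3)[OF f c'(1,2)] c'(3) rt_isoD(2)[OF f] by simp
  then show ?thesis using rt_iso_nonroot[OF f graded_tree.root_node[OF T1] c'(1,2)]
    unfolding rt_children_def by simp
qed

lemma rt_iso_subtree_image: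
  assumes T1: "graded_tree T1" and f: "rt_iso T1 T2 f" and c: "c \<in> rt_children T1"
  shows "f ` rt_nodes (rt_subtree T1 c) \<subseteq> rt_nodes (rt_subtree T2 (f c))"
proof
  fix w assume "w \<in> f ` rt_nodes (rt_subtree T1 c)"
  then obtain v where v: "v \<in> rt_nodes (rt_subtree T1 c)" "w = f v" by blast
  note sv = graded_tree.subtree_node[OF T1 v(1)]
  have "fst v + (fst c - fst v) \<le> fst (rt_root T1)"
    using sv(2) graded_tree.child_level[OF T1 c] by simp
  from rt_iso_par_pow[OF T1 f sv(1) this] sv(3)
  have "(rt_par T2 ^^ (fst c - fst v)) (f v) = f c" by simp
  moreover have "f v \<in> rt_nodes T2" using bij_betw_apply[OF rt_isoD(1)[OF f] sv(1)] .
  ultimately show "w \<in> rt_nodes (rt_subtree T2 (f c))" unfolding rt_nodes_subtree v(2) by blast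
qed

lemma rt_iso_subtree:
  assumes T1: "graded_tree T1" and T2: "graded_tree T2" and f: "rt_iso T1 T2 f" and c: "c \<in> rt_children T1"
  shows "f ` rt_nodes (rt_subtree T1 c) = rt_nodes (rt_subtree T2 (f c))"
    "rt_iso (rt_subtree T1 c) (rt_subtree T2 (f c)) f"
proof -
  define g where "g = inv_into (rt_nodes T1) f"
  note b = rt_isoD(1)[OF f]
  have gfc: "g (f c) = c" unfolding g_def by (rule bij_betw_inv_into_left[OF b rt_child_node[OF c]])
  have "g ` rt_nodes (rt_subtree T2 (f c)) \<subseteq> rt_nodes (rt_subtree T1 (g (f c)))"
    using rt_iso_subtree_image[OF T2 rt_iso_inv[OF T1 f] rt_iso_child[OF T1 f c]] unfolding g_def .
  then have g_sub: "g ` rt_nodes (rt_subtree T2 (f c)) \<subseteq> rt_nodes (rt_subtree T1 c)"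
    unfolding gfc .
  have "rt_nodes (rt_subtree T2 (f c)) \<subseteq> f ` rt_nodes (rt_subtree T1 c)"
  proof
    fix y assume y: "y \<in> rt_nodes (rt_subtree T2 (f c))"
    have "f (g y) = y"
      unfolding g_def by (rule bij_betw_inv_into_right[OF b graded_tree.subtree_node(1)[OF T2 y]])
    moreover have "g y \<in> rt_nodes (rt_subtree T1 c)" using g_sub y by blast
    ultimately show "y \<in> f ` rt_nodes (rt_subtree T1 c)" by (rule image_eqI[OF sym])
  qed
  with rt_iso_subtree_image[OF T1 f c]
  show img: "f ` rt_nodes (rt_subtree T1 c) = rt_nodes (rt_subtree T2 (f c))" by (rule subset_antisym)
  have sub: "rt_nodes (rt_subtree T1 c) \<subseteq> rt_nodes T1" using graded_tree.subtree_node(1)[OF T1] by blast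
  show "rt_iso (rt_subtree T1 c) (rt_subtree T2 (f c)) f"
  proof (rule rt_isoI)
    show "bij_betw f (rt_nodes (rt_subtree T1 c)) (rt_nodes (rt_subtree T2 (f c)))"
      using img inj_on_subset[OF bij_betw_imp_inj_on[OF b] sub] unfolding bij_betw_def by blast
    show "f (rt_root (rt_subtree T1 c)) = rt_root (rt_subtree T2 (f c))" by simp
    show "f (rt_par (rt_subtree T1 c) v) = rt_par (rt_subtree T2 (f c)) (f v)"
      if "v \<in> rt_nodes (rt_subtree T1 c)" "v \<noteq> rt_root (rt_subtree T1 c)" for v
    proof -
      have "v \<noteq> rt_root T1" using that(1) graded_tree.root_notin_child_subtree[OF T1 c] by blast
      then show ?thesis using rt_isoD(3)[OF f subsetD[OF sub that(1)]] by simp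
    qed
    show "rt_rank (rt_subtree T2 (f c)) (f v) = rt_rank (rt_subtree T1 c) v"
      if "v \<in> rt_nodes (rt_subtree T1 c)" for v
      using rt_isoD(4)[OF f subsetD[OF sub that]] by simp
  qed
qed

section \<open>Automorphism groups of ranked trees\<close>

lemma equiv_class_reps:
  assumes "finite X" "equiv X r"
  shows "\<exists>cs. set cs \<subseteq> X \<and> (\<forall>x\<in>X. \<exists>y\<in>set cs. (x, y) \<in> r) \<and>
    (\<forall>i<length cs. \<forall>j<length cs. i \<noteq> j \<longrightarrow> (cs ! i, cs ! j) \<notin> r)"
proof -
  have "r \<subseteq> X \<times> X" using assms(2) unfolding equiv_def refl_on_def by blast
  then have "finite (X // r)" by (rule finite_quotient[OF assms(1)])
  then obtain qs where qs: "set qs = X // r" "distinct qs" using finite_distinct_list by blast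
  define cs where "cs = map (\<lambda>q. SOME x. x \<in> q) qs"
  have len: "length cs = length qs" unfolding cs_def by simp
  have q: "qs ! i \<in> X // r" if "i < length qs" for i using that qs(1) nth_mem by blast
  have rep: "cs ! i \<in> qs ! i" if "i < length qs" for i
    using that in_quotient_imp_non_empty[OF assms(2) q[OF that]] unfolding cs_def by (simp add: some_in_eq)
  have "set cs \<subseteq> X"
  proof
    fix y assume "y \<in> set cs"
    then obtain i where i: "i < length qs" "y = cs ! i" using len by (metis in_set_conv_nth)
    then show "y \<in> X" using rep[OF i(1)] in_quotient_imp_subset[OF assms(2) q[OF i(1)]] by blast
  qed
  moreover have "\<exists>y\<in>set cs. (x, y) \<in> r" if x: "x \<in> X" for x
  proof -
    have "r `` {x} \<in> set qs" using quotientI[OF x] qs(1) by simp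
    then obtain i where i: "i < length qs" "qs ! i = r `` {x}" by (metis in_set_conv_nth)
    then have "(x, cs ! i) \<in> r" using rep[OF i(1)] by simp
    moreover have "cs ! i \<in> set cs" using i(1) len by simp
    ultimately show ?thesis by blast
  qed
  moreover have "(cs ! i, cs ! j) \<notin> r" if ij: "i < length cs" "j < length cs" "i \<noteq> j" for i j
  proof
    assume "(cs ! i, cs ! j) \<in> r"
    then have "qs ! i = qs ! j"
      using quotient_eq_iff[OF assms(2) q q rep rep] ij len by simp
    then show False using nth_eq_iff_index_eq[OF qs(2)] ij len by simp
  qed
  ultimately show ?thesis by blast
qed

lemma (in block_system) block_system_reps_of_rt_reps:
  assumes reps: "rt_reps T cs" and C: "C = rt_children T"
    and iso_iff: "\<And>c d. c \<in> C \<Longrightarrow> d \<in> C \<Longrightarrow> Iso c d \<noteq> {} \<longleftrightarrow> rt_isomorphic (rt_subtree T c) (rt_subtree T d)"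
    and carrier_eq: "\<And>c. c \<in> set cs \<Longrightarrow> carrier (H c) = Iso c c"
    and mult_eq: "\<And>c x y. c \<in> set cs \<Longrightarrow> x \<in> Iso c c \<Longrightarrow> y \<in> Iso c c \<Longrightarrow>
      x \<otimes>\<^bsub>H c\<^esub> y = restrict_id (x \<circ> y) (S c)"
  shows "block_system_reps C S Iso cs (rt_mult T) H"
proof (intro block_system_reps.intro block_system_axioms block_system_reps_axioms.intro)
  have cs: "set cs \<subseteq> C" using reps unfolding rt_reps_def C by blast
  then show "set cs \<subseteq> C" .
  show "\<exists>d\<in>set cs. Iso c d \<noteq> {}" if c: "c \<in> C" for c
  proof -
    obtain d where "d \<in> set cs" "rt_isomorphic (rt_subtree T c) (rt_subtree T d)"
      using reps c unfolding rt_reps_def C by blast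
    then show ?thesis using iso_iff[OF c subsetD[OF cs]] by blast
  qed
  show "Iso (cs ! i) (cs ! j) = {}" if ij: "i < length cs" "j < length cs" "i \<noteq> j" for i j
    using reps ij iso_iff[OF subsetD[OF cs nth_mem[OF ij(1)]] subsetD[OF cs nth_mem[OF ij(2)]]]
    unfolding rt_reps_def by blast
  show "rt_mult T c = card {d \<in> C. Iso d c \<noteq> {}}" if c: "c \<in> set cs" for c
  proof -
    have "{d \<in> C. Iso d c \<noteq> {}} = {d \<in> rt_children T. rt_isomorphic (rt_subtree T d) (rt_subtree T c)}"
      using iso_iff subsetD[OF cs c] unfolding C by blast
    then show ?thesis unfolding rt_mult_def by simp
  qed
  show "carrier (H c) = Iso c c" if "c \<in> set cs" for c using carrier_eq[OF that] .
  show "x \<otimes>\<^bsub>H c\<^esub> y = restrict_id (x \<circ> y) (S c)" if "c \<in> set cs" "x \<in> Iso c c" "y \<in> Iso c c"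
    for c x y using mult_eq[OF that] .
qed

lemma carrier_rt_aut: "carrier (rt_aut T) = {f. rt_iso T T f \<and> (\<forall>x. x \<notin> rt_nodes T \<longrightarrow> f x = x)}"
  unfolding rt_aut_def by simp

context graded_tree
begin

definition child_iso :: "nat \<times> 'b \<Rightarrow> nat \<times> 'b \<Rightarrow> (nat \<times> 'b \<Rightarrow> nat \<times> 'b) set" where
  "child_iso c d = {f. rt_iso (rt_subtree T c) (rt_subtree T d) f \<and>
     (\<forall>x. x \<notin> rt_nodes (rt_subtree T c) \<longrightarrow> f x = x)}"

lemma graded_child_subtree: "c \<in> rt_children T \<Longrightarrow> graded_tree (rt_subtree T c)"
  by (rule graded_subtree[OF rt_child_node])

lemma restrict_id_child_iso:
  assumes "c \<in> rt_children T" "rt_iso (rt_subtree T c) (rt_subtree T d) f"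
  shows "restrict_id f (rt_nodes (rt_subtree T c)) \<in> child_iso c d"
  using rt_iso_cong[OF graded_child_subtree[OF assms(1)] assms(2)] unfolding child_iso_def by simp

lemma child_iso_nonempty_iff:
  assumes "c \<in> rt_children T"
  shows "child_iso c d \<noteq> {} \<longleftrightarrow> rt_isomorphic (rt_subtree T c) (rt_subtree T d)"
proof
  assume "child_iso c d \<noteq> {}"
  then show "rt_isomorphic (rt_subtree T c) (rt_subtree T d)" unfolding child_iso_def rt_isomorphic_def by blast
next
  assume "rt_isomorphic (rt_subtree T c) (rt_subtree T d)"
  then obtain f where "rt_iso (rt_subtree T c) (rt_subtree T d) f" unfolding rt_isomorphic_def by blast
  from restrict_id_child_iso[OF assms this] show "child_iso c d \<noteq> {}" by blast
qed

lemma children_block_system: "block_system (rt_children T) (\<lambda>c. rt_nodes (rt_subtree T c)) child_iso"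
proof
  have "rt_children T \<subseteq> rt_nodes T" unfolding rt_children_def by blast
  then show "finite (rt_children T)" by (rule finite_subset[OF _ finite_nodes])
  show "rt_nodes (rt_subtree T c) \<noteq> {}" if "c \<in> rt_children T" for c
    using subtree_root_node[OF rt_child_node[OF that]] by blast
  show "rt_nodes (rt_subtree T c) \<inter> rt_nodes (rt_subtree T d) = {}"
    if "c \<in> rt_children T" "d \<in> rt_children T" "c \<noteq> d" for c d
    using child_subtrees_disjoint[OF that(1,2)] that(3) by blast
  show "f \<in> ext_bij (rt_nodes (rt_subtree T c)) (rt_nodes (rt_subtree T d))" if "f \<in> child_iso c d" for c d f
    using that unfolding child_iso_def ext_bij_def rt_iso_def by blast
  show "id \<in> child_iso c c" for c
    unfolding child_iso_def using rt_iso_id by simp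
  show "restrict_id (g \<circ> f) (rt_nodes (rt_subtree T c)) \<in> child_iso c e"
    if "c \<in> rt_children T" "f \<in> child_iso c d" "g \<in> child_iso d e" for c d e f g
  proof -
    have "rt_iso (rt_subtree T c) (rt_subtree T d) f" "rt_iso (rt_subtree T d) (rt_subtree T e) g"
      using that(2,3) unfolding child_iso_def by blast+
    from restrict_id_child_iso[OF that(1) rt_iso_comp[OF graded_child_subtree[OF that(1)] this]]
    show ?thesis .
  qed
  show "restrict_id (inv_into (rt_nodes (rt_subtree T c)) f) (rt_nodes (rt_subtree T d)) \<in> child_iso d c"
    if "c \<in> rt_children T" "d \<in> rt_children T" "f \<in> child_iso c d" for c d f
  proof -
    have "rt_iso (rt_subtree T c) (rt_subtree T d) f" using that(3) unfolding child_iso_def by blast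
    from restrict_id_child_iso[OF that(2) rt_iso_inv[OF graded_child_subtree[OF that(1)] this]]
    show ?thesis .
  qed
qed

end

sublocale graded_tree \<subseteq> children: block_system "rt_children T" "\<lambda>c. rt_nodes (rt_subtree T c)" child_iso
  by (rule children_block_system)

context graded_tree
begin

lemma rt_reps_some_reps: "rt_reps T (rt_some_reps T)"
proof -
  define r where "r = {(c, d). c \<in> rt_children T \<and> d \<in> rt_children T \<and> child_iso c d \<noteq> {}}"
  have "refl_on (rt_children T) r" unfolding r_def refl_on_def using children.id_Iso by blast
  moreover have "sym r" unfolding r_def sym_def using children.Iso_nonempty_sym by blast
  moreover have "trans r" unfolding r_def trans_def using children.Iso_nonempty_trans by blast
  moreover have "r \<subseteq> rt_children T \<times> rt_children T" unfolding r_def by blast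
  ultimately have "equiv (rt_children T) r" unfolding equiv_def by blast
  then obtain cs where cs: "set cs \<subseteq> rt_children T" "\<forall>c\<in>rt_children T. \<exists>d\<in>set cs. (c, d) \<in> r"
    "\<forall>i<length cs. \<forall>j<length cs. i \<noteq> j \<longrightarrow> (cs ! i, cs ! j) \<notin> r"
    using equiv_class_reps[OF children.finite_blocks] by blast
  have r_iff: "(c, d) \<in> r \<longleftrightarrow> rt_isomorphic (rt_subtree T c) (rt_subtree T d)"
    if "c \<in> rt_children T" "d \<in> rt_children T" for c d
    using that child_iso_nonempty_iff unfolding r_def by simp
  have "rt_reps T cs"
    unfolding rt_reps_def
  proof (intro conjI ballI allI impI)
    show "set cs \<subseteq> rt_children T" by (rule cs(1))
    show "\<exists>d\<in>set cs. rt_isomorphic (rt_subtree T c) (rt_subtree T d)" if "c \<in> rt_children T" for c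
      using cs(1,2) r_iff that by blast
    show "\<not> rt_isomorphic (rt_subtree T (cs ! i)) (rt_subtree T (cs ! j))"
      if "i < length cs" "j < length cs" "i \<noteq> j" for i j
      using cs(1,3) r_iff[OF subsetD[OF cs(1) nth_mem] subsetD[OF cs(1) nth_mem]] that by blast
  qed
  then show ?thesis unfolding rt_some_reps_def by (rule someI)
qed

lemma child_isoD:
  assumes "f \<in> child_iso c d"
  shows "rt_iso (rt_subtree T c) (rt_subtree T d) f" "\<And>x. x \<notin> rt_nodes (rt_subtree T c) \<Longrightarrow> f x = x"
  using assms unfolding child_iso_def by blast+

lemma rt_aut_lifts:
  assumes "f \<in> carrier (rt_aut T)"
  shows "children.lifts f (restrict_id f (rt_children T))"
proof -
  have f: "rt_iso T T f" using assms unfolding carrier_rt_aut by blast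
  have T: "graded_tree T" by (rule graded_tree_axioms)
  have "rt_children T \<subseteq> rt_nodes T" unfolding rt_children_def by blast
  then have "inj_on f (rt_children T)" using inj_on_subset[OF bij_betw_imp_inj_on[OF rt_isoD(1)[OF f]]] by blast
  moreover have "f ` rt_children T \<subseteq> rt_children T" using rt_iso_child[OF T f] by blast
  ultimately have "bij_betw f (rt_children T) (rt_children T)"
    using endo_inj_surj[OF children.finite_blocks] unfolding bij_betw_def by blast
  then have perm: "restrict_id f (rt_children T) permutes rt_children T" by (rule permutes_restrict_id)
  have "restrict_id f (rt_nodes (rt_subtree T c)) \<in> child_iso c (restrict_id f (rt_children T) c)"
    if c: "c \<in> rt_children T" for c
    using restrict_id_child_iso[OF c rt_iso_subtree(2)[OF T T f c]] c by simp
  then show ?thesis unfolding children.lifts_def using perm by blast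
qed

lemma rt_aut_subset_block_perms: "carrier (rt_aut T) \<subseteq> children.block_perms"
proof
  fix f assume f: "f \<in> carrier (rt_aut T)"
  have "f x = x" if x: "x \<notin> (\<Union>c\<in>rt_children T. rt_nodes (rt_subtree T c))" for x
  proof (cases "x = rt_root T")
    case True
    then show ?thesis using f unfolding rt_aut_def rt_iso_def by simp
  next
    case False
    then have "x \<notin> rt_nodes T" using x unfolding Union_child_subtrees by blast
    then show ?thesis using f unfolding carrier_rt_aut by blast
  qed
  then show "f \<in> children.block_perms" unfolding children.block_perms_def using rt_aut_lifts[OF f] by blast
qed

lemma lifts_subtree_iso:
  assumes "children.lifts w \<pi>" "c \<in> rt_children T"
  shows "rt_iso (rt_subtree T c) (rt_subtree T (\<pi> c)) (restrict_id w (rt_nodes (rt_subtree T c)))"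
  using assms unfolding children.lifts_def child_iso_def by blast

lemma lifts_commutes_par:
  assumes l: "children.lifts w \<pi>" and wr: "w (rt_root T) = rt_root T"
    and v: "v \<in> rt_nodes T" "v \<noteq> rt_root T"
  shows "w (rt_par T v) = rt_par T (w v)"
proof -
  obtain c where c: "c \<in> rt_children T" "v \<in> rt_nodes (rt_subtree T c)"
    using child_subtrees_cover[OF v] by blast
  note iso = lifts_subtree_iso[OF l c(1)]
  show ?thesis
  proof (cases "v = c")
    case True
    have "w c = \<pi> c" using rt_isoD(2)[OF iso] c(2) True by simp
    moreover have "rt_par T c = rt_root T" "rt_par T (\<pi> c) = rt_root T"
      using c(1) children.lifts_ext_bij(1)[OF l c(1)] unfolding rt_children_def by auto
    ultimately show ?thesis using True wr by simp
  next
    case False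
    have "rt_par T v \<in> rt_nodes (rt_subtree T c)"
      using graded_tree.par_node[OF graded_child_subtree[OF c(1)] c(2)] False by simp
    then show ?thesis using rt_isoD(3)[OF iso c(2)] False c(2) by simp
  qed
qed

lemma block_perms_subset_rt_aut: "children.block_perms \<subseteq> carrier (rt_aut T)"
proof
  fix w assume w: "w \<in> children.block_perms"
  obtain \<pi> where l: "children.lifts w \<pi>" using w unfolding children.block_perms_def by blast
  have "w permutes rt_nodes T - {rt_root T}"
    using children.block_perms_permutes[OF w] unfolding Union_child_subtrees .
  then have wp: "w permutes rt_nodes T" and wr: "w (rt_root T) = rt_root T"
    using permutes_subset[of w "rt_nodes T - {rt_root T}" "rt_nodes T"] permutes_not_in[of w _ "rt_root T"]
    by auto
  have "rt_iso T T w"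
  proof (rule rt_isoI)
    show "bij_betw w (rt_nodes T) (rt_nodes T)" using permutes_imp_bij[OF wp] .
    show "w (rt_root T) = rt_root T" by (rule wr)
    show "w (rt_par T v) = rt_par T (w v)" if "v \<in> rt_nodes T" "v \<noteq> rt_root T" for v
      using lifts_commutes_par[OF l wr that] .
    show "rt_rank T (w v) = rt_rank T v" if v: "v \<in> rt_nodes T" for v
    proof (cases "v = rt_root T")
      case True
      then show ?thesis using wr by simp
    next
      case False
      then obtain c where c: "c \<in> rt_children T" "v \<in> rt_nodes (rt_subtree T c)"
        using child_subtrees_cover[OF v] by blast
      then show ?thesis using rt_isoD(4)[OF lifts_subtree_iso[OF l c(1)] c(2)] by simp
    qed
  qed
  moreover have "w x = x" if "x \<notin> rt_nodes T" for x using permutes_not_in[OF wp that] .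
  ultimately show "w \<in> carrier (rt_aut T)" unfolding carrier_rt_aut by blast
qed

lemma rt_aut_eq_block_perm_group: "rt_aut T = children.block_perm_group"
proof -
  have "carrier (rt_aut T) = children.block_perms"
    using rt_aut_subset_block_perms block_perms_subset_rt_aut by (rule subset_antisym)
  then show ?thesis unfolding rt_aut_def children.block_perm_group_def by simp
qed

theorem rt_aut_iso_dprod:
  "rt_aut T \<cong> dprod (map (\<lambda>c. wreath (rt_mult T c) (rt_aut (rt_subtree T c))) (rt_some_reps T))"
proof -
  interpret reps: block_system_reps "rt_children T" "\<lambda>c. rt_nodes (rt_subtree T c)" child_iso
    "rt_some_reps T" "rt_mult T" "\<lambda>c. rt_aut (rt_subtree T c)"
  proof (rule children.block_system_reps_of_rt_reps[OF rt_reps_some_reps refl])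
    show "child_iso c d \<noteq> {} \<longleftrightarrow> rt_isomorphic (rt_subtree T c) (rt_subtree T d)"
      if "c \<in> rt_children T" "d \<in> rt_children T" for c d
      using child_iso_nonempty_iff[OF that(1)] .
    show "carrier (rt_aut (rt_subtree T c)) = child_iso c c" for c
      unfolding carrier_rt_aut child_iso_def by simp
    show "x \<otimes>\<^bsub>rt_aut (rt_subtree T c)\<^esub> y = restrict_id (x \<circ> y) (rt_nodes (rt_subtree T c))"
      if "x \<in> child_iso c c" "y \<in> child_iso c c" for c x y
    proof
      fix z show "(x \<otimes>\<^bsub>rt_aut (rt_subtree T c)\<^esub> y) z = restrict_id (x \<circ> y) (rt_nodes (rt_subtree T c)) z"
        using child_isoD(2)[OF that(1)] child_isoD(2)[OF that(2)] unfolding rt_aut_def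
        by (cases "z \<in> rt_nodes (rt_subtree T c)") simp_all
    qed
  qed
  have "rt_aut T \<cong> children.block_group"
    unfolding rt_aut_eq_block_perm_group by (rule children.block_perm_group_iso)
  also have "children.block_group \<cong> dprod (map (\<lambda>c. wreath (rt_mult T c) (rt_aut (rt_subtree T c))) (rt_some_reps T))"
    by (rule reps.block_group_iso_dprod)
  finally show ?thesis .
qed

end

lemma rt_aut_single_node:
  assumes "rt_nodes T = {rt_root T}"
  shows "carrier (rt_aut T) = {\<one>\<^bsub>rt_aut T\<^esub>}"
proof -
  have "f = id" if f: "f \<in> carrier (rt_aut T)" for f
  proof
    fix x show "f x = id x"
      using f assms unfolding rt_aut_def rt_iso_def by (cases "x = rt_root T") auto
  qed
  moreover have "id \<in> carrier (rt_aut T)" unfolding rt_aut_def using rt_iso_id by simp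
  ultimately show ?thesis unfolding rt_aut_def by auto
qed

section \<open>Partitions and the stabiliser of the kernel flag\<close>

lemma same_part_refl: "same_part p A l a a"
  unfolding same_part_def by simp

lemma same_part_sym: "same_part p A l a b \<Longrightarrow> same_part p A l b a"
  unfolding same_part_def by simp

lemma same_part_trans: "same_part p A l a b \<Longrightarrow> same_part p A l b c \<Longrightarrow> same_part p A l a c"
  unfolding same_part_def by simp

lemma same_part_mono: "same_part p A l a b \<Longrightarrow> l \<le> l' \<Longrightarrow> same_part p A l' a b"
  unfolding same_part_def by simp

lemma same_part_above: "p < l \<Longrightarrow> same_part p A l a b"
  unfolding same_part_def by auto

text \<open>Level \<open>0\<close> is excluded: \<open>same_part p A 0\<close> would also compare the meaningless row \<open>A 0\<close>.\<close>

definition preserves_parts :: "nat \<Rightarrow> (nat \<Rightarrow> nat \<Rightarrow> complex) \<Rightarrow> (nat \<Rightarrow> nat) \<Rightarrow> nat set \<Rightarrow> bool" where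
  "preserves_parts p A w M \<longleftrightarrow>
     (\<forall>l\<ge>1. \<forall>a\<in>M. \<forall>b\<in>M. same_part p A l a b \<longleftrightarrow> same_part p A l (w a) (w b))"

definition part_stab :: "nat \<Rightarrow> (nat \<Rightarrow> nat \<Rightarrow> complex) \<Rightarrow> nat set \<Rightarrow> (nat \<Rightarrow> nat) monoid" where
  "part_stab p A M = \<lparr>carrier = {w. w permutes M \<and> preserves_parts p A w M}, mult = (\<circ>), one = id\<rparr>"

text \<open>A finite relation cannot be mapped injectively onto a proper subset of itself.\<close>

lemma permutes_reflects_rel:
  assumes g: "g permutes X" and fin: "finite X"
    and fw: "\<And>a b. a \<in> X \<Longrightarrow> b \<in> X \<Longrightarrow> R a b \<Longrightarrow> R (g a) (g b)"
    and a: "a \<in> X" and b: "b \<in> X" and r: "R (g a) (g b)"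
  shows "R a b"
proof -
  define P where "P = {(x, y). x \<in> X \<and> y \<in> X \<and> R x y}"
  define h where "h = (\<lambda>(x, y). (g x, g y))"
  have "P \<subseteq> X \<times> X" unfolding P_def by auto
  then have fP: "finite P" using finite_subset fin by blast
  have sub: "h ` P \<subseteq> P" unfolding P_def h_def using fw permutes_in_image[OF g] by auto
  have ginj: "inj g" using permutes_inj[OF g] .
  have inj: "inj_on h P" unfolding h_def inj_on_def using ginj by (auto dest: injD)
  have "(g a, g b) \<in> h ` P"
    using endo_inj_surj[OF fP sub inj] r a b permutes_in_image[OF g] unfolding P_def by auto
  then obtain x y where xy: "(x, y) \<in> P" "(g a, g b) = (g x, g y)" unfolding h_def by auto
  then have "a = x" "b = y" using ginj by (auto dest: injD)
  then show ?thesis using xy(1) unfolding P_def by simp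
qed

locale fission =
  fixes n p :: nat and A :: "nat \<Rightarrow> nat \<Rightarrow> complex"
  assumes n_pos: "1 \<le> n"
begin

definition part :: "nat \<Rightarrow> nat \<Rightarrow> nat set" where
  "part l a = {b \<in> {1..n}. same_part p A l a b}"

lemma mem_part: "b \<in> part l a \<longleftrightarrow> b \<in> {1..n} \<and> same_part p A l a b"
  unfolding part_def by simp

lemma part_range: "part l a \<subseteq> {1..n}"
  unfolding part_def by blast

lemma finite_part: "finite (part l a)"
  using finite_subset[OF part_range] by simp

lemma part_self: "a \<in> {1..n} \<Longrightarrow> a \<in> part l a"
  unfolding mem_part using same_part_refl by simp

lemma part_eq: "b \<in> part l a \<Longrightarrow> part l b = part l a"
  unfolding part_def using same_part_sym same_part_trans by blast

lemma part_eq_iff: "a \<in> {1..n} \<Longrightarrow> b \<in> {1..n} \<Longrightarrow> part l a = part l b \<longleftrightarrow> same_part p A l a b"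
  using part_eq part_self mem_part by metis

lemma part_mono: "l \<le> l' \<Longrightarrow> part l a \<subseteq> part l' a"
  unfolding part_def using same_part_mono by blast

lemma part_subset: "a \<in> part m a0 \<Longrightarrow> l \<le> m \<Longrightarrow> part l a \<subseteq> part m a0"
  using part_mono part_eq by blast

lemma part_above: "p < l \<Longrightarrow> part l a = {1..n}"
  unfolding part_def using same_part_above by blast

lemma same_part_in_part: "a \<in> part m a0 \<Longrightarrow> b \<in> part m a0 \<Longrightarrow> m \<le> l \<Longrightarrow> same_part p A l a b"
  unfolding mem_part using same_part_sym same_part_trans same_part_mono by blast

lemma Ukf_separates:
  assumes a: "a \<in> {1..n}" and b: "b \<in> {1..n}" and ns: "\<not> same_part p A l a b"
  shows "\<exists>x\<in>Ukf n p A l. x a \<noteq> x b"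
proof -
  define P where "P = part l a"
  define Q where "Q = part l b"
  \<comment> \<open>\<open>|Q|\<close> on \<open>P\<close> and \<open>-|P|\<close> on \<open>Q\<close>: constant on parts, with coordinate sum zero\<close>
  define x :: "nat \<Rightarrow> complex"
    where "x c = (if c \<in> P then of_nat (card Q) else if c \<in> Q then - of_nat (card P) else 0)" for c
  have PQ: "P \<inter> Q = {}" unfolding P_def Q_def part_def using ns same_part_sym same_part_trans by blast
  have sub: "P \<subseteq> {1..n}" "Q \<subseteq> {1..n}" unfolding P_def Q_def using part_range by auto
  have aP: "a \<in> P" and bQ: "b \<in> Q" unfolding P_def Q_def using part_self a b by auto
  have fin: "finite P" "finite Q" using finite_subset[OF sub(1)] finite_subset[OF sub(2)] by simp_all
  have "card P \<noteq> 0" using aP fin(1) by auto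
  have "(\<Sum>c=1..n. x c) = (\<Sum>c\<in>P \<union> Q. x c)"
    by (rule sum.mono_neutral_right) (use sub in \<open>auto simp: x_def\<close>)
  also have "\<dots> = (\<Sum>c\<in>P. x c) + (\<Sum>c\<in>Q. x c)" by (rule sum.union_disjoint[OF fin PQ])
  also have "(\<Sum>c\<in>P. x c) = (\<Sum>c\<in>P. of_nat (card Q))" unfolding x_def by simp
  also have "(\<Sum>c\<in>Q. x c) = (\<Sum>c\<in>Q. - of_nat (card P))"
    unfolding x_def using PQ by (intro sum.cong) auto
  finally have "(\<Sum>c=1..n. x c) = 0" by simp
  moreover have "x c = 0" if "c \<notin> {1..n}" for c using that sub unfolding x_def by auto
  moreover have "x c = x d" if "c \<in> {1..n}" "d \<in> {1..n}" "same_part p A l c d" for c d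
  proof -
    have "c \<in> P \<longleftrightarrow> d \<in> P" "c \<in> Q \<longleftrightarrow> d \<in> Q"
      unfolding P_def Q_def mem_part using that same_part_sym same_part_trans by blast+
    then show ?thesis unfolding x_def by simp
  qed
  ultimately have "x \<in> Ukf n p A l" unfolding Ukf_def cartan_t_def by blast
  moreover have "x a \<noteq> x b"
  proof
    assume "x a = x b"
    moreover have "b \<notin> P" using bQ PQ by blast
    ultimately have "of_nat (card Q) = - (of_nat (card P) :: complex)" using aP bQ unfolding x_def by simp
    then have "of_nat (card Q + card P) = (0 :: complex)" by simp
    then have "card Q + card P = 0" by (simp only: of_nat_eq_0_iff)
    then show False using \<open>card P \<noteq> 0\<close> by simp
  qed
  ultimately show ?thesis by blast
qed

lemma preserves_if_Ukf_invariant: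
  assumes w: "w permutes {1..n}" and inv: "perm_act w ` Ukf n p A l \<subseteq> Ukf n p A l"
    and a: "a \<in> {1..n}" and b: "b \<in> {1..n}"
  shows "same_part p A l a b \<longleftrightarrow> same_part p A l (w a) (w b)"
proof -
  define iw where "iw = inv_into UNIV w"
  have iw: "iw permutes {1..n}" unfolding iw_def using permutes_inv[OF w] .
  have iww: "iw (w c) = c" for c unfolding iw_def using permutes_inverses(2)[OF w] by simp
  have fw: "same_part p A l (iw c) (iw d)"
    if c: "c \<in> {1..n}" and d: "d \<in> {1..n}" and s: "same_part p A l c d" for c d
  proof (rule ccontr)
    assume "\<not> same_part p A l (iw c) (iw d)"
    then obtain x where x: "x \<in> Ukf n p A l" "x (iw c) \<noteq> x (iw d)"
      using Ukf_separates permutes_in_image[OF iw] c d by blast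
    have "perm_act w x \<in> Ukf n p A l" using inv x(1) by blast
    then have "perm_act w x c = perm_act w x d" using c d s unfolding Ukf_def by blast
    then show False using x(2) unfolding perm_act_def iw_def by simp
  qed
  have bw: "same_part p A l c d"
    if "c \<in> {1..n}" "d \<in> {1..n}" "same_part p A l (iw c) (iw d)" for c d
    using permutes_reflects_rel[of iw "{1..n}" "same_part p A l", OF iw finite_atLeastAtMost fw that] .
  have "w a \<in> {1..n}" "w b \<in> {1..n}" using permutes_in_image[OF w] a b by auto
  then show ?thesis using fw[of "w a" "w b"] bw[of "w a" "w b"] iww by auto
qed

lemma Ukf_invariant_if_preserves:
  assumes w: "w permutes {1..n}"
    and pr: "\<And>a b. a \<in> {1..n} \<Longrightarrow> b \<in> {1..n} \<Longrightarrow> same_part p A l a b \<longleftrightarrow> same_part p A l (w a) (w b)"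
  shows "perm_act w ` Ukf n p A l \<subseteq> Ukf n p A l"
proof
  fix y assume "y \<in> perm_act w ` Ukf n p A l"
  then obtain x where x: "x \<in> Ukf n p A l" "y = perm_act w x" by blast
  define iw where "iw = inv_into UNIV w"
  have iw: "iw permutes {1..n}" unfolding iw_def using permutes_inv[OF w] .
  have wiw: "w (iw c) = c" for c unfolding iw_def using permutes_inverses(1)[OF w] by simp
  have y: "y c = x (iw c)" for c unfolding x(2) perm_act_def iw_def by simp
  have x0: "x c = 0" if "c \<notin> {1..n}" for c using x(1) that unfolding Ukf_def cartan_t_def by blast
  have "y c = 0" if "c \<notin> {1..n}" for c using x0[OF that] permutes_not_in[OF iw that] unfolding y by simp
  moreover have "(\<Sum>c=1..n. y c) = 0"
    using sum.permute[OF iw, of x] x(1) unfolding y Ukf_def cartan_t_def by (simp add: comp_def)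
  moreover have "y c = y d" if "c \<in> {1..n}" "d \<in> {1..n}" "same_part p A l c d" for c d
  proof -
    have "iw c \<in> {1..n}" "iw d \<in> {1..n}" using permutes_in_image[OF iw] that(1,2) by auto
    moreover have "same_part p A l (iw c) (iw d)" using pr[OF calculation] that(3) wiw by simp
    ultimately show ?thesis using x(1) unfolding y Ukf_def by blast
  qed
  ultimately show "y \<in> Ukf n p A l" unfolding Ukf_def cartan_t_def by blast
qed

theorem stab_group_eq_part_stab: "stab_group n p A = part_stab p A {1..n}"
proof -
  have "(\<forall>l\<in>{1..p}. perm_act w ` Ukf n p A l \<subseteq> Ukf n p A l) \<longleftrightarrow> preserves_parts p A w {1..n}"
    if w: "w permutes {1..n}" for w
  proof
    assume "\<forall>l\<in>{1..p}. perm_act w ` Ukf n p A l \<subseteq> Ukf n p A l"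
    then show "preserves_parts p A w {1..n}"
      unfolding preserves_parts_def using preserves_if_Ukf_invariant[OF w] same_part_above
      by (metis atLeastAtMost_iff not_le)
  next
    assume "preserves_parts p A w {1..n}"
    then show "\<forall>l\<in>{1..p}. perm_act w ` Ukf n p A l \<subseteq> Ukf n p A l"
      unfolding preserves_parts_def using Ukf_invariant_if_preserves[OF w] by simp
  qed
  then show ?thesis unfolding stab_group_def part_stab_def by auto
qed

end

section \<open>The fission tree\<close>

context fission
begin

abbreviation "FT \<equiv> fission_tree n p A"

abbreviation part_subtree :: "nat \<Rightarrow> nat \<Rightarrow> (nat \<times> nat set) rtree" where
  "part_subtree m a \<equiv> rt_subtree FT (m, part m a)"

lemma parts_eq: "parts n p A l = part l ` {1..n}"
  unfolding parts_def part_def ..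

lemma fission_node_iff: "v \<in> rt_nodes FT \<longleftrightarrow> (\<exists>l a. v = (l, part l a) \<and> l \<in> {1..p+1} \<and> a \<in> {1..n})"
  unfolding fission_tree_def parts_eq by auto

lemma fission_root: "rt_root FT = (p + 1, part (p + 1) 1)"
  using part_above[of "p + 1"] unfolding fission_tree_def by simp

lemma fission_rank: "rt_rank FT (l, L) = card L"
  unfolding fission_tree_def by simp

lemma fission_par:
  assumes a: "a \<in> {1..n}"
  shows "rt_par FT (l, part l a) = (Suc l, part (Suc l) a)"
proof -
  have "(THE L'. L' \<in> parts n p A (l + 1) \<and> part l a \<subseteq> L') = part (Suc l) a"
  proof (rule the_equality)
    show "part (Suc l) a \<in> parts n p A (l + 1) \<and> part l a \<subseteq> part (Suc l) a"
      unfolding parts_eq using a part_mono[of l "Suc l" a] by auto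
    fix L' assume L': "L' \<in> parts n p A (l + 1) \<and> part l a \<subseteq> L'"
    then obtain b where "L' = part (Suc l) b" unfolding parts_eq by auto
    moreover have "a \<in> L'" using L' part_self[OF a] by blast
    ultimately show "L' = part (Suc l) a" using part_eq by blast
  qed
  then show ?thesis unfolding fission_tree_def by simp
qed

lemma fission_par_pow: "a \<in> {1..n} \<Longrightarrow> (rt_par FT ^^ k) (l, part l a) = (l + k, part (l + k) a)"
  by (induction k) (simp_all add: fission_par)

lemma graded_fission_tree: "graded_tree FT"
proof
  have "rt_nodes FT \<subseteq> {1..p+1} \<times> Pow {1..n}"
  proof
    fix v assume "v \<in> rt_nodes FT"
    then obtain l a where "v = (l, part l a)" "l \<in> {1..p+1}" unfolding fission_node_iff by blast
    then show "v \<in> {1..p+1} \<times> Pow {1..n}" using part_range by simp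
  qed
  then show "finite (rt_nodes FT)" by (rule finite_subset) simp
  show "rt_root FT \<in> rt_nodes FT" unfolding fission_root fission_node_iff using n_pos by auto
  show "fst (rt_par FT v) = Suc (fst v)" for v unfolding fission_tree_def by (simp add: case_prod_beta)
  fix v assume "v \<in> rt_nodes FT"
  then obtain l a where v: "v = (l, part l a)" "l \<in> {1..p+1}" "a \<in> {1..n}" unfolding fission_node_iff by blast
  have "(rt_par FT ^^ (p + 1 - l)) v = rt_root FT"
    unfolding fission_root v(1) fission_par_pow[OF v(3)] using v(2) part_above[of "p + 1"] by simp
  then show "\<exists>k. (rt_par FT ^^ k) v = rt_root FT" by blast
  assume "v \<noteq> rt_root FT"
  then have "l \<noteq> p + 1" unfolding fission_root v(1) using part_above[of "p + 1"] by auto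
  then show "rt_par FT v \<in> rt_nodes FT" unfolding v(1) fission_par[OF v(3)] fission_node_iff using v by auto
qed

sublocale fission_tree: graded_tree FT
  by (rule graded_fission_tree)

lemma fission_node: "1 \<le> m \<Longrightarrow> m \<le> p + 1 \<Longrightarrow> a \<in> {1..n} \<Longrightarrow> (m, part m a) \<in> rt_nodes FT"
  unfolding fission_node_iff by auto

lemma part_subtree_nodes:
  assumes m: "1 \<le> m" "m \<le> p + 1" and a0: "a0 \<in> {1..n}"
  shows "rt_nodes (part_subtree m a0) = {(l, part l a) | l a. 1 \<le> l \<and> l \<le> m \<and> a \<in> part m a0}"
proof (intro equalityI subsetI)
  fix v assume "v \<in> rt_nodes (part_subtree m a0)"
  then obtain k where k: "(rt_par FT ^^ k) v = (m, part m a0)" "v \<in> rt_nodes FT"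
    unfolding rt_nodes_subtree by blast
  then obtain l a where v: "v = (l, part l a)" "l \<in> {1..p+1}" "a \<in> {1..n}" unfolding fission_node_iff by blast
  have e: "(l + k, part (l + k) a) = (m, part m a0)" using k(1) unfolding v(1) fission_par_pow[OF v(3)] .
  then have lk: "l + k = m" by simp
  with e have "part m a = part m a0" by simp
  then have "a \<in> part m a0" using part_self[OF v(3)] by blast
  moreover have "1 \<le> l" "l \<le> m" using v(2) lk by auto
  ultimately show "v \<in> {(l, part l a) | l a. 1 \<le> l \<and> l \<le> m \<and> a \<in> part m a0}"
    using v(1) by blast
next
  fix v assume "v \<in> {(l, part l a) | l a. 1 \<le> l \<and> l \<le> m \<and> a \<in> part m a0}"
  then obtain l a where v: "v = (l, part l a)" "1 \<le> l" "l \<le> m" "a \<in> part m a0" by blast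
  have a: "a \<in> {1..n}" using v(4) part_range by blast
  have "(rt_par FT ^^ (m - l)) v = (m, part m a0)"
    unfolding v(1) fission_par_pow[OF a] using v(3) part_eq[OF v(4)] by simp
  moreover have "v \<in> rt_nodes FT" unfolding v(1) using fission_node v(2,3) m(2) a by simp
  ultimately show "v \<in> rt_nodes (part_subtree m a0)" unfolding rt_nodes_subtree by blast
qed

lemma graded_part_subtree: "1 \<le> m \<Longrightarrow> m \<le> p + 1 \<Longrightarrow> a \<in> {1..n} \<Longrightarrow> graded_tree (part_subtree m a)"
  using fission_tree.graded_subtree fission_node by blast

lemma part_subtree_children:
  assumes m: "2 \<le> m" "m \<le> p + 1" and a0: "a0 \<in> {1..n}"
  shows "rt_children (part_subtree m a0) = {(m - 1, part (m - 1) a) | a. a \<in> part m a0}"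
proof (intro equalityI subsetI)
  have nodes: "rt_nodes (part_subtree m a0) = {(l, part l a) | l a. 1 \<le> l \<and> l \<le> m \<and> a \<in> part m a0}"
    using part_subtree_nodes[of m a0] m a0 by simp
  have g: "graded_tree (part_subtree m a0)" using graded_part_subtree m a0 by simp
  {
    fix c assume c: "c \<in> rt_children (part_subtree m a0)"
    have "Suc (fst c) = m" using graded_tree.child_level[OF g c] by simp
    moreover have "c \<in> rt_nodes (part_subtree m a0)" by (rule rt_child_node[OF c])
    then obtain l a where "c = (l, part l a)" "a \<in> part m a0" unfolding nodes by blast
    ultimately show "c \<in> {(m - 1, part (m - 1) a) | a. a \<in> part m a0}" by auto
  next
    fix c assume "c \<in> {(m - 1, part (m - 1) a) | a. a \<in> part m a0}"
    then obtain a where c: "c = (m - 1, part (m - 1) a)" "a \<in> part m a0" by blast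
    have a: "a \<in> {1..n}" using c(2) part_range by blast
    have "1 \<le> m - 1" "m - 1 \<le> m" using m by auto
    then have "c \<in> rt_nodes (part_subtree m a0)" unfolding nodes using c by blast
    moreover have "Suc (m - 1) = m" using m by simp
    then have "rt_par FT c = (m, part m a0)" unfolding c(1) fission_par[OF a] using part_eq[OF c(2)] by simp
    moreover have "c \<noteq> (m, part m a0)" using c m by auto
    ultimately show "c \<in> rt_children (part_subtree m a0)" unfolding rt_children_def by simp
  }
qed

lemma part_subtree_child_subtree:
  assumes m: "2 \<le> m" "m \<le> p + 1" and a0: "a0 \<in> {1..n}" and a: "a \<in> part m a0"
  shows "rt_subtree (part_subtree m a0) (m - 1, part (m - 1) a) = part_subtree (m - 1) a"
proof -
  have "(m - 1, part (m - 1) a) \<in> rt_children (part_subtree m a0)"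
    unfolding part_subtree_children[OF m a0] using a by blast
  then have "(m - 1, part (m - 1) a) \<in> rt_nodes (part_subtree m a0)" by (rule rt_child_node)
  then show ?thesis by (rule fission_tree.subtree_subtree)
qed

lemma part_subtree_leaf:
  assumes a0: "a0 \<in> {1..n}"
  shows "rt_nodes (part_subtree 1 a0) = {(1, part 1 a0)}"
proof -
  have "rt_nodes (part_subtree 1 a0) = {(l, part l a) | l a. 1 \<le> l \<and> l \<le> 1 \<and> a \<in> part 1 a0}"
    using part_subtree_nodes[of 1 a0] a0 by simp
  also have "\<dots> = {(1, part 1 a0)}"
  proof (intro equalityI subsetI)
    fix v assume "v \<in> {(l, part l a) | l a. 1 \<le> l \<and> l \<le> 1 \<and> a \<in> part 1 a0}"
    then obtain l a where "v = (l, part l a)" "l = 1" "a \<in> part 1 a0" by auto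
    then show "v \<in> {(1, part 1 a0)}" using part_eq[of a 1 a0] by simp
  next
    fix v :: "nat \<times> nat set" assume "v \<in> {(1, part 1 a0)}"
    then show "v \<in> {(l, part l a) | l a. 1 \<le> l \<and> l \<le> 1 \<and> a \<in> part 1 a0}"
      using part_self[OF a0] by blast
  qed
  finally show ?thesis .
qed

end

section \<open>Isomorphic subtrees and part-preserving bijections\<close>

definition part_iso :: "nat \<Rightarrow> (nat \<Rightarrow> nat \<Rightarrow> complex) \<Rightarrow> nat \<times> nat set \<Rightarrow> nat \<times> nat set \<Rightarrow> (nat \<Rightarrow> nat) set" where
  "part_iso p A c d = {w \<in> ext_bij (snd c) (snd d). preserves_parts p A w (snd c)}"

lemma preserves_parts_id: "preserves_parts p A id M"
  unfolding preserves_parts_def by simp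

lemma preserves_parts_comp:
  assumes "w \<in> ext_bij X Y" "preserves_parts p A w X" "preserves_parts p A v Y"
  shows "preserves_parts p A (restrict_id (v \<circ> w) X) X"
  unfolding preserves_parts_def
proof (intro allI impI ballI)
  fix l :: nat and a b assume "1 \<le> l" "a \<in> X" "b \<in> X"
  moreover have "w a \<in> Y" "w b \<in> Y" using ext_bijD(4)[OF assms(1)] calculation(2,3) by auto
  ultimately show "same_part p A l a b \<longleftrightarrow> same_part p A l (restrict_id (v \<circ> w) X a) (restrict_id (v \<circ> w) X b)"
    using assms(2,3) unfolding preserves_parts_def by simp
qed

lemma preserves_parts_inv:
  assumes "w \<in> ext_bij X Y" "preserves_parts p A w X"
  shows "preserves_parts p A (restrict_id (inv_into X w) Y) Y"
  unfolding preserves_parts_def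
proof (intro allI impI ballI)
  fix l :: nat and a b assume l: "1 \<le> l" and ab: "a \<in> Y" "b \<in> Y"
  note b = ext_bijD(1)[OF assms(1)]
  have "inv_into X w a \<in> X" "inv_into X w b \<in> X" using bij_betw_apply[OF bij_betw_inv_into[OF b]] ab by auto
  then show "same_part p A l a b \<longleftrightarrow>
      same_part p A l (restrict_id (inv_into X w) Y a) (restrict_id (inv_into X w) Y b)"
    using assms(2) l ab bij_betw_inv_into_right[OF b] unfolding preserves_parts_def by simp
qed

lemma id_part_iso: "id \<in> part_iso p A c c"
  unfolding part_iso_def using id_ext_bij preserves_parts_id by blast

lemma part_iso_comp:
  assumes "f \<in> part_iso p A c d" "g \<in> part_iso p A d e"
  shows "restrict_id (g \<circ> f) (snd c) \<in> part_iso p A c e"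
proof -
  have f: "f \<in> ext_bij (snd c) (snd d)" "preserves_parts p A f (snd c)"
    and g: "g \<in> ext_bij (snd d) (snd e)" "preserves_parts p A g (snd d)"
    using assms unfolding part_iso_def by auto
  show ?thesis unfolding part_iso_def using ext_bij_comp[OF f(1) g(1)] preserves_parts_comp[OF f g(2)] by blast
qed

lemma part_iso_inv:
  assumes "f \<in> part_iso p A c d"
  shows "restrict_id (inv_into (snd c) f) (snd d) \<in> part_iso p A d c"
proof -
  have f: "f \<in> ext_bij (snd c) (snd d)" "preserves_parts p A f (snd c)" using assms unfolding part_iso_def by auto
  show ?thesis unfolding part_iso_def using ext_bij_inv[OF f(1)] preserves_parts_inv[OF f] by blast
qed

context fission
begin

lemma preserves_parts_image:
  assumes w: "w \<in> ext_bij (part m a0) (part m b0)" and pw: "preserves_parts p A w (part m a0)"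
    and l: "1 \<le> l" "l \<le> m" and a: "a \<in> part m a0"
  shows "w ` part l a = part l (w a)"
proof (intro equalityI subsetI)
  fix y assume "y \<in> w ` part l a"
  then obtain x where x: "x \<in> part l a" "y = w x" by blast
  have xM: "x \<in> part m a0" using part_subset[OF a l(2)] x(1) by blast
  have "same_part p A l a x" using x(1) unfolding mem_part by blast
  then have "same_part p A l (w a) (w x)" using pw l(1) a xM unfolding preserves_parts_def by blast
  moreover have "w x \<in> {1..n}" using ext_bijD(4)[OF w xM] part_range by blast
  ultimately show "y \<in> part l (w a)" unfolding mem_part x(2) by blast
next
  fix y assume y: "y \<in> part l (w a)"
  have "y \<in> part m b0" using part_subset[OF ext_bijD(4)[OF w a] l(2)] y by blast
  then obtain x where x: "x \<in> part m a0" "y = w x" using ext_bijD(3)[OF w] by blast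
  have "same_part p A l (w a) (w x)" using y x(2) unfolding mem_part by blast
  then have "same_part p A l a x" using pw x(1) a l(1) unfolding preserves_parts_def by blast
  then have "x \<in> part l a" unfolding mem_part using x(1) part_range by blast
  then show "y \<in> w ` part l a" using x(2) by blast
qed

lemma part_image_map_bij:
  assumes m: "1 \<le> m" "m \<le> p + 1" and a0: "a0 \<in> {1..n}" and b0: "b0 \<in> {1..n}"
    and w: "w \<in> ext_bij (part m a0) (part m b0)" and pw: "preserves_parts p A w (part m a0)"
  shows "bij_betw (\<lambda>(l, L). (l, w ` L)) (rt_nodes (part_subtree m a0)) (rt_nodes (part_subtree m b0))"
proof -
  define g where "g = (\<lambda>(l :: nat, L). (l, w ` L))"
  note N1 = part_subtree_nodes[OF m a0] and N2 = part_subtree_nodes[OF m b0]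
  have gv: "g (l, part l a) = (l, part l (w a))" if "1 \<le> l" "l \<le> m" "a \<in> part m a0" for l a
    unfolding g_def using preserves_parts_image[OF w pw that] by simp
  have wn: "w a \<in> {1..n}" if "a \<in> part m a0" for a using ext_bijD(4)[OF w that] part_range by blast
  have "inj_on g (rt_nodes (part_subtree m a0))"
  proof (rule inj_onI)
    fix x y assume "x \<in> rt_nodes (part_subtree m a0)" "y \<in> rt_nodes (part_subtree m a0)" and e: "g x = g y"
    then obtain l a l' b where x: "x = (l, part l a)" "1 \<le> l" "l \<le> m" "a \<in> part m a0"
      and y: "y = (l', part l' b)" "1 \<le> l'" "l' \<le> m" "b \<in> part m a0" unfolding N1 by blast
    have gx: "g x = (l, part l (w a))" using gv[OF x(2-4)] x(1) by simp
    have gy: "g y = (l', part l' (w b))" using gv[OF y(2-4)] y(1) by simp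
    from e have e': "(l, part l (w a)) = (l', part l' (w b))" unfolding gx gy .
    have ll: "l = l'" using e' by simp
    have "part l (w a) = part l (w b)" using e' unfolding ll by simp
    then have "same_part p A l (w a) (w b)" using part_eq_iff wn x(4) y(4) by blast
    then have "same_part p A l a b" using pw x(2,4) y(4) unfolding preserves_parts_def by blast
    then have "part l a = part l b" using part_eq_iff part_range x(4) y(4) by blast
    then show "x = y" using x(1) y(1) \<open>l = l'\<close> by simp
  qed
  moreover have "g ` rt_nodes (part_subtree m a0) = rt_nodes (part_subtree m b0)"
  proof (intro equalityI subsetI)
    fix y assume "y \<in> g ` rt_nodes (part_subtree m a0)"
    then obtain l a where "y = g (l, part l a)" "1 \<le> l" "l \<le> m" "a \<in> part m a0" unfolding N1 by blast
    then show "y \<in> rt_nodes (part_subtree m b0)" unfolding N2 using gv ext_bijD(4)[OF w] by blast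
  next
    fix y assume "y \<in> rt_nodes (part_subtree m b0)"
    then obtain l b where y: "y = (l, part l b)" "1 \<le> l" "l \<le> m" "b \<in> part m b0" unfolding N2 by blast
    then obtain a where a: "a \<in> part m a0" "b = w a" using ext_bijD(3)[OF w] by blast
    then have "g (l, part l a) = y" using gv[OF y(2,3) a(1)] y(1) by simp
    moreover have "(l, part l a) \<in> rt_nodes (part_subtree m a0)" unfolding N1 using y(2,3) a(1) by blast
    ultimately show "y \<in> g ` rt_nodes (part_subtree m a0)" by blast
  qed
  ultimately show ?thesis unfolding bij_betw_def g_def by blast
qed

lemma rt_iso_of_part_iso:
  assumes m: "1 \<le> m" "m \<le> p + 1" and a0: "a0 \<in> {1..n}" and b0: "b0 \<in> {1..n}"
    and w: "w \<in> part_iso p A (m, part m a0) (m, part m b0)"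
  shows "rt_iso (part_subtree m a0) (part_subtree m b0) (\<lambda>(l, L). (l, w ` L))"
proof -
  have wb: "w \<in> ext_bij (part m a0) (part m b0)" and pw: "preserves_parts p A w (part m a0)"
    using w unfolding part_iso_def by auto
  note N1 = part_subtree_nodes[OF m a0]
  have gv: "(\<lambda>(l, L). (l, w ` L)) (l, part l a) = (l, part l (w a))" if "1 \<le> l" "l \<le> m" "a \<in> part m a0" for l a
    using preserves_parts_image[OF wb pw that] by simp
  show ?thesis
  proof (rule rt_isoI[OF part_image_map_bij[OF m a0 b0 wb pw]])
    show "(\<lambda>(l, L). (l, w ` L)) (rt_root (part_subtree m a0)) = rt_root (part_subtree m b0)"
      using ext_bijD(3)[OF wb] by simp
    show "(\<lambda>(l, L). (l, w ` L)) (rt_par (part_subtree m a0) v) = rt_par (part_subtree m b0) ((\<lambda>(l, L). (l, w ` L)) v)"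
      if v: "v \<in> rt_nodes (part_subtree m a0)" "v \<noteq> rt_root (part_subtree m a0)" for v
    proof -
      obtain l a where la: "v = (l, part l a)" "1 \<le> l" "l \<le> m" "a \<in> part m a0" using v(1) unfolding N1 by blast
      have "l \<noteq> m" using v(2) la(1) part_eq[OF la(4)] by auto
      then have lm: "Suc l \<le> m" using la(3) by simp
      have a: "a \<in> {1..n}" and wa: "w a \<in> {1..n}"
        using subsetD[OF part_range la(4)] subsetD[OF part_range ext_bijD(4)[OF wb la(4)]] .
      have sl: "1 \<le> Suc l" by simp
      show ?thesis unfolding la(1) fission_par[OF a] rt_subtree_simps gv[OF la(2-4)] gv[OF sl lm la(4)]
        using fission_par[OF wa] by simp
    qed
    show "rt_rank (part_subtree m b0) ((\<lambda>(l, L). (l, w ` L)) v) = rt_rank (part_subtree m a0) v"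
      if v: "v \<in> rt_nodes (part_subtree m a0)" for v
    proof -
      obtain l a where la: "v = (l, part l a)" "1 \<le> l" "l \<le> m" "a \<in> part m a0" using v unfolding N1 by blast
      have "inj_on w (part l a)" using inj_on_subset[OF ext_bijD(2)[OF wb] part_subset[OF la(4) la(3)]] .
      then show ?thesis unfolding la(1) by (simp add: fission_rank card_image)
    qed
  qed
qed

lemma preserves_parts_glue:
  assumes maps: "\<And>a. a \<in> part (Suc m) a0 \<Longrightarrow> w a \<in> part (Suc m) b0"
    and cell: "\<And>a b. a \<in> part (Suc m) a0 \<Longrightarrow> b \<in> part (Suc m) a0 \<Longrightarrow>
      same_part p A m a b \<longleftrightarrow> same_part p A m (w a) (w b)"
    and inside: "\<And>a b l. a \<in> part (Suc m) a0 \<Longrightarrow> b \<in> part (Suc m) a0 \<Longrightarrow> same_part p A m a b \<Longrightarrow>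
      1 \<le> l \<Longrightarrow> same_part p A l a b \<longleftrightarrow> same_part p A l (w a) (w b)"
  shows "preserves_parts p A w (part (Suc m) a0)"
  unfolding preserves_parts_def
proof (intro allI impI ballI)
  fix l :: nat and a b assume l: "1 \<le> l" and a: "a \<in> part (Suc m) a0" and b: "b \<in> part (Suc m) a0"
  show "same_part p A l a b \<longleftrightarrow> same_part p A l (w a) (w b)"
  proof (cases "same_part p A m a b")
    case True
    then show ?thesis using inside[OF a b _ l] by blast
  next
    case False
    show ?thesis
    proof (cases "Suc m \<le> l")
      case True
      then show ?thesis using same_part_in_part a b maps[OF a] maps[OF b] by blast
    next
      case False
      then have "l \<le> m" by simp
      then show ?thesis
        using \<open>\<not> same_part p A m a b\<close> cell[OF a b] same_part_mono by blast
    qed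
  qed
qed

definition glue_map :: "nat \<Rightarrow> nat \<Rightarrow> (nat set \<Rightarrow> nat \<Rightarrow> nat) \<Rightarrow> nat \<Rightarrow> nat" where
  "glue_map m a0 ws = restrict_id (\<lambda>x. ws (part m x) x) (part (Suc m) a0)"

context
  fixes m a0 b0 \<tau> ws
  assumes \<tau>: "bij_betw \<tau> (part m ` part (Suc m) a0) (part m ` part (Suc m) b0)"
    and ws: "\<And>a. a \<in> part (Suc m) a0 \<Longrightarrow> ws (part m a) \<in> part_iso p A (m, part m a) (m, \<tau> (part m a))"
begin

private lemma ws_bij: "a \<in> part (Suc m) a0 \<Longrightarrow> ws (part m a) \<in> ext_bij (part m a) (\<tau> (part m a))"
  using ws unfolding part_iso_def by simp

private lemma self_in_part: "a \<in> part (Suc m) c \<Longrightarrow> a \<in> part m a"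
  by (rule part_self[OF subsetD[OF part_range]])

private lemma \<tau>_part:
  assumes "a \<in> part (Suc m) a0"
  shows "\<exists>b\<in>part (Suc m) b0. \<tau> (part m a) = part m b"
proof -
  have "part m a \<in> part m ` part (Suc m) a0" using assms by simp
  then have "\<tau> (part m a) \<in> part m ` part (Suc m) b0" by (rule bij_betw_apply[OF \<tau>])
  then show ?thesis by (auto simp: image_iff)
qed

lemma glue_map_apply: "a \<in> part (Suc m) a0 \<Longrightarrow> glue_map m a0 ws a = ws (part m a) a"
  unfolding glue_map_def by simp

lemma part_glue_map:
  assumes a: "a \<in> part (Suc m) a0"
  shows "part m (glue_map m a0 ws a) = \<tau> (part m a)"
proof -
  obtain b where b: "\<tau> (part m a) = part m b" using \<tau>_part[OF a] by blast
  have "glue_map m a0 ws a \<in> part m b"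
    using ext_bijD(4)[OF ws_bij[OF a] self_in_part[OF a]] glue_map_apply[OF a] b by simp
  then show ?thesis using part_eq[of "glue_map m a0 ws a" m b] b by simp
qed

lemma part_glue_map_eq_iff:
  assumes a: "a \<in> part (Suc m) a0" and b: "b \<in> part (Suc m) a0"
  shows "part m (glue_map m a0 ws a) = part m (glue_map m a0 ws b) \<longleftrightarrow> part m a = part m b"
proof -
  have "part m a \<in> part m ` part (Suc m) a0" using a by (rule imageI)
  moreover have "part m b \<in> part m ` part (Suc m) a0" using b by (rule imageI)
  ultimately have "\<tau> (part m a) = \<tau> (part m b) \<longleftrightarrow> part m a = part m b"
    by (rule inj_on_eq_iff[OF bij_betw_imp_inj_on[OF \<tau>]])
  then
  show ?thesis unfolding part_glue_map[OF a] part_glue_map[OF b] .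
qed

lemma glue_map_into:
  assumes a: "a \<in> part (Suc m) a0"
  shows "glue_map m a0 ws a \<in> part (Suc m) b0"
proof -
  obtain b where b: "b \<in> part (Suc m) b0" "\<tau> (part m a) = part m b" using \<tau>_part[OF a] by blast
  have "glue_map m a0 ws a \<in> part m b" using ext_bijD(4)[OF ws_bij[OF a] self_in_part[OF a]] glue_map_apply[OF a] b(2) by simp
  then show ?thesis using part_subset[of b "Suc m" b0 m] b(1) by auto
qed

lemma glue_map_bij: "bij_betw (glue_map m a0 ws) (part (Suc m) a0) (part (Suc m) b0)"
  unfolding bij_betw_def
proof (intro conjI)
  show "inj_on (glue_map m a0 ws) (part (Suc m) a0)"
  proof (rule inj_onI)
    fix x y assume x: "x \<in> part (Suc m) a0" and y: "y \<in> part (Suc m) a0"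
      and e: "glue_map m a0 ws x = glue_map m a0 ws y"
    have P: "part m x = part m y" using part_glue_map_eq_iff[OF x y] e by simp
    have "ws (part m x) x = ws (part m x) y" using e glue_map_apply[OF x] glue_map_apply[OF y] P by simp
    moreover have "y \<in> part m x" using P self_in_part[OF y] by simp
    ultimately show "x = y" using inj_onD[OF ext_bijD(2)[OF ws_bij[OF x]] _ self_in_part[OF x]] by blast
  qed
  show "glue_map m a0 ws ` part (Suc m) a0 = part (Suc m) b0"
  proof (intro equalityI subsetI)
    fix y assume "y \<in> glue_map m a0 ws ` part (Suc m) a0"
    then show "y \<in> part (Suc m) b0" using glue_map_into by blast
  next
    fix y assume y: "y \<in> part (Suc m) b0"
    then have "part m y \<in> \<tau> ` part m ` part (Suc m) a0" using bij_betw_imp_surj_on[OF \<tau>] by blast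
    then obtain x0 where x0: "x0 \<in> part (Suc m) a0" "part m y = \<tau> (part m x0)" by blast
    then obtain x where x: "x \<in> part m x0" "y = ws (part m x0) x"
      using ext_bijD(3)[OF ws_bij[OF x0(1)]] self_in_part[OF y] by auto
    have xM: "x \<in> part (Suc m) a0" using part_subset[of x0 "Suc m" a0 m] x0(1) x(1) by auto
    then have "glue_map m a0 ws x = y" using glue_map_apply part_eq[OF x(1)] x(2) by simp
    then show "y \<in> glue_map m a0 ws ` part (Suc m) a0" using xM by blast
  qed
qed

lemma glue_map_part_iso: "glue_map m a0 ws \<in> part_iso p A (Suc m, part (Suc m) a0) (Suc m, part (Suc m) b0)"
proof -
  have "preserves_parts p A (glue_map m a0 ws) (part (Suc m) a0)"
  proof (rule preserves_parts_glue)
    show "glue_map m a0 ws a \<in> part (Suc m) b0" if "a \<in> part (Suc m) a0" for a using glue_map_into that .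
    fix a b assume a: "a \<in> part (Suc m) a0" and b: "b \<in> part (Suc m) a0"
    have ab: "a \<in> {1..n}" "b \<in> {1..n}" "glue_map m a0 ws a \<in> {1..n}" "glue_map m a0 ws b \<in> {1..n}"
      using a b glue_map_into subsetD[OF part_range] by blast+
    from part_glue_map_eq_iff[OF a b] show "same_part p A m a b \<longleftrightarrow> same_part p A m (glue_map m a0 ws a) (glue_map m a0 ws b)"
      using part_eq_iff ab by simp
    fix l :: nat assume s: "same_part p A m a b" and l: "1 \<le> l"
    have "b \<in> part m a" using s ab unfolding mem_part by simp
    moreover have "preserves_parts p A (ws (part m a)) (part m a)" using ws[OF a] unfolding part_iso_def by simp
    moreover have "glue_map m a0 ws b = ws (part m a) b" using glue_map_apply[OF b] part_eq[OF \<open>b \<in> part m a\<close>] by simp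
    ultimately show "same_part p A l a b \<longleftrightarrow> same_part p A l (glue_map m a0 ws a) (glue_map m a0 ws b)"
      using self_in_part[OF a] glue_map_apply[OF a] l unfolding preserves_parts_def by simp
  qed
  moreover have "glue_map m a0 ws \<in> ext_bij (part (Suc m) a0) (part (Suc m) b0)"
    using glue_map_bij unfolding ext_bij_def glue_map_def by simp
  ultimately show ?thesis unfolding part_iso_def by simp
qed

end

lemma part_iso_of_rt_iso_leaf:
  assumes a0: "a0 \<in> {1..n}" and b0: "b0 \<in> {1..n}" and f: "rt_iso (part_subtree 1 a0) (part_subtree 1 b0) f"
  shows "part_iso p A (1, part 1 a0) (1, part 1 b0) \<noteq> {}"
proof -
  have "(1, part 1 a0) \<in> rt_nodes (part_subtree 1 a0)" using part_subtree_leaf[OF a0] by simp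
  from rt_isoD(4)[OF f this] rt_isoD(2)[OF f]
  have "card (part 1 b0) = card (part 1 a0)" by (simp add: fission_rank)
  then obtain h where "bij_betw h (part 1 a0) (part 1 b0)"
    using finite_same_card_bij[OF finite_part finite_part] by metis
  then have h: "restrict_id h (part 1 a0) \<in> ext_bij (part 1 a0) (part 1 b0)" by (rule restrict_id_ext_bij)
  have "preserves_parts p A (restrict_id h (part 1 a0)) (part 1 a0)"
    unfolding preserves_parts_def
  proof (intro allI impI ballI)
    fix l :: nat and a b assume l: "1 \<le> l" and a: "a \<in> part 1 a0" and b: "b \<in> part 1 a0"
    have "same_part p A l a b" by (rule same_part_in_part[OF a b l])
    moreover have "same_part p A l (restrict_id h (part 1 a0) a) (restrict_id h (part 1 a0) b)"
      by (rule same_part_in_part[OF ext_bijD(4)[OF h a] ext_bijD(4)[OF h b] l])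
    ultimately show "same_part p A l a b \<longleftrightarrow> same_part p A l (restrict_id h (part 1 a0) a) (restrict_id h (part 1 a0) b)"
      by simp
  qed
  then show ?thesis using h unfolding part_iso_def by auto
qed

context
  fixes m a0 b0 f
  assumes m: "1 \<le> m" "Suc m \<le> p + 1" and a0: "a0 \<in> {1..n}" and b0: "b0 \<in> {1..n}"
    and f: "rt_iso (part_subtree (Suc m) a0) (part_subtree (Suc m) b0) f"
begin

private lemma graded: "graded_tree (part_subtree (Suc m) a0)" "graded_tree (part_subtree (Suc m) b0)"
  using graded_part_subtree m(2) a0 b0 by simp_all

private lemma children: "rt_children (part_subtree (Suc m) c) = {(m, part m a) | a. a \<in> part (Suc m) c}"
  if "c \<in> {1..n}" for c
  using part_subtree_children[of "Suc m" c] m that by simp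

lemma rt_iso_part_subtree_child:
  assumes a: "a \<in> part (Suc m) a0"
  shows "\<exists>b\<in>part (Suc m) b0. f (m, part m a) = (m, part m b) \<and> rt_iso (part_subtree m a) (part_subtree m b) f"
proof -
  have c: "(m, part m a) \<in> rt_children (part_subtree (Suc m) a0)" unfolding children[OF a0] using a by blast
  from rt_iso_child[OF graded(1) f c] obtain b where b: "b \<in> part (Suc m) b0" "f (m, part m a) = (m, part m b)"
    unfolding children[OF b0] by blast
  have "rt_subtree (part_subtree (Suc m) a0) (m, part m a) = part_subtree m a"
    using part_subtree_child_subtree[of "Suc m" a0 a] m a0 a by simp
  moreover have "rt_subtree (part_subtree (Suc m) b0) (m, part m b) = part_subtree m b"
    using part_subtree_child_subtree[of "Suc m" b0 b] m b0 b(1) by simp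
  ultimately have "rt_iso (part_subtree m a) (part_subtree m b) f"
    using rt_iso_subtree(2)[OF graded f c] unfolding b(2) by simp
  then show ?thesis using b by blast
qed

lemma rt_iso_part_subtree_children_bij:
  "bij_betw (\<lambda>L. snd (f (m, L))) (part m ` part (Suc m) a0) (part m ` part (Suc m) b0)"
  unfolding bij_betw_def
proof (intro conjI)
  have image: "\<exists>b\<in>part (Suc m) b0. f (m, L) = (m, part m b)" if L: "L \<in> part m ` part (Suc m) a0" for L
  proof -
    obtain a where a: "a \<in> part (Suc m) a0" "L = part m a" using L by blast
    show ?thesis using rt_iso_part_subtree_child[OF a(1)] unfolding a(2) by blast
  qed
  show "inj_on (\<lambda>L. snd (f (m, L))) (part m ` part (Suc m) a0)"
  proof (rule inj_onI)
    fix L1 L2 assume L: "L1 \<in> part m ` part (Suc m) a0" "L2 \<in> part m ` part (Suc m) a0"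
      and e: "snd (f (m, L1)) = snd (f (m, L2))"
    have "f (m, L1) = f (m, L2)" using image[OF L(1)] image[OF L(2)] e by auto
    moreover have "(m, L) \<in> rt_nodes (part_subtree (Suc m) a0)" if "L \<in> part m ` part (Suc m) a0" for L
      by (rule rt_child_node) (use that children[OF a0] in blast)
    ultimately have "(m, L1) = (m, L2)"
      using inj_onD[OF bij_betw_imp_inj_on[OF rt_isoD(1)[OF f]]] L by blast
    then show "L1 = L2" by simp
  qed
  show "(\<lambda>L. snd (f (m, L))) ` part m ` part (Suc m) a0 = part m ` part (Suc m) b0"
  proof (intro equalityI subsetI)
    fix L assume "L \<in> (\<lambda>L. snd (f (m, L))) ` part m ` part (Suc m) a0"
    then obtain L0 where L0: "L0 \<in> part m ` part (Suc m) a0" "L = snd (f (m, L0))" by blast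
    obtain b where "b \<in> part (Suc m) b0" "f (m, L0) = (m, part m b)" using image[OF L0(1)] by blast
    then show "L \<in> part m ` part (Suc m) b0" using L0(2) by simp
  next
    fix L assume "L \<in> part m ` part (Suc m) b0"
    then have L: "(m, L) \<in> rt_children (part_subtree (Suc m) b0)" unfolding children[OF b0] by blast
    from rt_iso_child[OF graded(2) rt_iso_inv[OF graded(1) f] L] obtain a where a: "a \<in> part (Suc m) a0"
      "inv_into (rt_nodes (part_subtree (Suc m) a0)) f (m, L) = (m, part m a)" unfolding children[OF a0] by blast
    have "f (m, part m a) = (m, L)"
      using a(2) bij_betw_inv_into_right[OF rt_isoD(1)[OF f] rt_child_node[OF L]] by simp
    then have "L = snd (f (m, part m a))" by simp
    then show "L \<in> (\<lambda>L. snd (f (m, L))) ` part m ` part (Suc m) a0" using a(1) by blast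
  qed
qed

end

lemma part_iso_of_rt_iso_step:
  assumes m: "1 \<le> m" "Suc m \<le> p + 1" and a0: "a0 \<in> {1..n}" and b0: "b0 \<in> {1..n}"
    and IH: "\<And>a b f. a \<in> {1..n} \<Longrightarrow> b \<in> {1..n} \<Longrightarrow> rt_iso (part_subtree m a) (part_subtree m b) f \<Longrightarrow>
      part_iso p A (m, part m a) (m, part m b) \<noteq> {}"
    and f: "rt_iso (part_subtree (Suc m) a0) (part_subtree (Suc m) b0) f"
  shows "part_iso p A (Suc m, part (Suc m) a0) (Suc m, part (Suc m) b0) \<noteq> {}"
proof -
  define \<tau> where "\<tau> L = snd (f (m, L))" for L
  have "part_iso p A (m, part m a) (m, \<tau> (part m a)) \<noteq> {}" if a: "a \<in> part (Suc m) a0" for a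
  proof -
    obtain b where b: "b \<in> part (Suc m) b0" "f (m, part m a) = (m, part m b)"
      "rt_iso (part_subtree m a) (part_subtree m b) f"
      using rt_iso_part_subtree_child[OF m a0 b0 f a] by blast
    then show ?thesis using IH subsetD[OF part_range] a unfolding \<tau>_def by simp
  qed
  then have "(SOME w. w \<in> part_iso p A (m, part m a) (m, \<tau> (part m a))) \<in> part_iso p A (m, part m a) (m, \<tau> (part m a))"
    if "a \<in> part (Suc m) a0" for a using that by (simp add: some_in_eq)
  from glue_map_part_iso[OF rt_iso_part_subtree_children_bij[OF m a0 b0 f, folded \<tau>_def] this]
  show ?thesis by blast
qed

lemma part_iso_of_rt_iso:
  "1 \<le> m \<Longrightarrow> m \<le> p + 1 \<Longrightarrow> a0 \<in> {1..n} \<Longrightarrow> b0 \<in> {1..n} \<Longrightarrow>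
   rt_iso (part_subtree m a0) (part_subtree m b0) f \<Longrightarrow> part_iso p A (m, part m a0) (m, part m b0) \<noteq> {}"
proof (induction m arbitrary: a0 b0 f)
  case (Suc m)
  show ?case
  proof (cases "m = 0")
    case True
    then show ?thesis using part_iso_of_rt_iso_leaf Suc.prems by simp
  next
    case False
    then have m: "1 \<le> m" by simp
    have IH: "part_iso p A (m, part m a) (m, part m b) \<noteq> {}"
      if "a \<in> {1..n}" "b \<in> {1..n}" "rt_iso (part_subtree m a) (part_subtree m b) g" for a b g
      using Suc.IH[OF m _ that] Suc.prems(2) by simp
    show ?thesis by (rule part_iso_of_rt_iso_step[OF m Suc.prems(2-4) IH Suc.prems(5)])
  qed
qed simp

theorem part_iso_nonempty_iff:
  assumes "1 \<le> m" "m \<le> p + 1" "a \<in> {1..n}" "b \<in> {1..n}"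
  shows "part_iso p A (m, part m a) (m, part m b) \<noteq> {} \<longleftrightarrow> rt_isomorphic (part_subtree m a) (part_subtree m b)"
  using rt_iso_of_part_iso[OF assms] part_iso_of_rt_iso[OF assms] unfolding rt_isomorphic_def by blast

end

section \<open>The stabiliser of a part as an iterated wreath product\<close>

lemma preserves_parts_restrict:
  assumes "preserves_parts p A w M" "N \<subseteq> M"
  shows "preserves_parts p A (restrict_id w N) N"
  using assms unfolding preserves_parts_def by (simp add: subset_iff)

context fission
begin

lemma part_block_system:
  assumes m: "2 \<le> m" "m \<le> p + 1" and a0: "a0 \<in> {1..n}"
  shows "block_system (rt_children (part_subtree m a0)) snd (part_iso p A)"
proof
  note C = part_subtree_children[OF m a0]
  have "1 \<le> m" using m by simp
  have "finite (rt_nodes (part_subtree m a0))"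
    using graded_tree.finite_nodes[OF graded_part_subtree[OF \<open>1 \<le> m\<close> m(2) a0]] .
  moreover have "rt_children (part_subtree m a0) \<subseteq> rt_nodes (part_subtree m a0)"
    unfolding rt_children_def by blast
  ultimately show "finite (rt_children (part_subtree m a0))" by (rule finite_subset[rotated])
  show "snd c \<noteq> {}" if c: "c \<in> rt_children (part_subtree m a0)" for c
  proof -
    obtain a where ca: "c = (m - 1, part (m - 1) a)" "a \<in> part m a0" using c unfolding C by blast
    have "a \<in> part (m - 1) a" by (rule part_self[OF subsetD[OF part_range ca(2)]])
    then show ?thesis using ca(1) by auto
  qed
  show "snd c \<inter> snd d = {}"
    if cd: "c \<in> rt_children (part_subtree m a0)" "d \<in> rt_children (part_subtree m a0)" "c \<noteq> d" for c d
  proof -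
    obtain a b where ab: "c = (m - 1, part (m - 1) a)" "d = (m - 1, part (m - 1) b)"
      using cd(1,2) unfolding C by blast
    show ?thesis
    proof (rule ccontr)
      assume "snd c \<inter> snd d \<noteq> {}"
      then obtain x where "x \<in> part (m - 1) a" "x \<in> part (m - 1) b" using ab by auto
      then have "part (m - 1) a = part (m - 1) b" using part_eq by metis
      then show False using cd(3) ab by simp
    qed
  qed
  show "f \<in> ext_bij (snd c) (snd d)" if "f \<in> part_iso p A c d" for c d f
    using that unfolding part_iso_def by blast
  show "id \<in> part_iso p A c c" for c by (rule id_part_iso)
  show "restrict_id (g \<circ> f) (snd c) \<in> part_iso p A c e"
    if "f \<in> part_iso p A c d" "g \<in> part_iso p A d e" for c d e f g
    using part_iso_comp that .
  show "restrict_id (inv_into (snd c) f) (snd d) \<in> part_iso p A d c"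
    if "f \<in> part_iso p A c d" for c d f
    using part_iso_inv that .
qed

context
  fixes m a0
  assumes m: "2 \<le> m" "m \<le> p + 1" and a0: "a0 \<in> {1..n}"
begin

interpretation blocks: block_system "rt_children (part_subtree m a0)" snd "part_iso p A"
  by (rule part_block_system[OF m a0])

private lemma children_eq: "rt_children (part_subtree m a0) = {(m - 1, part (m - 1) a) | a. a \<in> part m a0}"
  by (rule part_subtree_children[OF m a0])

private lemma Union_children: "\<Union>(snd ` rt_children (part_subtree m a0)) = part m a0"
proof (intro equalityI subsetI)
  fix x assume "x \<in> \<Union>(snd ` rt_children (part_subtree m a0))"
  then obtain a where "a \<in> part m a0" "x \<in> part (m - 1) a" unfolding children_eq by auto
  then show "x \<in> part m a0" using part_subset[of a m a0 "m - 1"] by auto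
next
  fix x assume "x \<in> part m a0"
  moreover have "x \<in> part (m - 1) x" using part_self subsetD[OF part_range] calculation by blast
  ultimately show "x \<in> \<Union>(snd ` rt_children (part_subtree m a0))" unfolding children_eq by force
qed

private lemma child_of: "a \<in> part m a0 \<Longrightarrow> (m - 1, part (m - 1) a) \<in> rt_children (part_subtree m a0)"
  unfolding children_eq by blast

private lemma self_in_child: "a \<in> part m a0 \<Longrightarrow> a \<in> part (m - 1) a"
  using part_self subsetD[OF part_range] by blast

lemma part_stab_subset_block_perms: "carrier (part_stab p A (part m a0)) \<subseteq> blocks.block_perms"
proof
  fix w assume "w \<in> carrier (part_stab p A (part m a0))"
  then have wp: "w permutes part m a0" and pw: "preserves_parts p A w (part m a0)"
    unfolding part_stab_def by auto
  have wb: "w \<in> ext_bij (part m a0) (part m a0)" using wp unfolding ext_bij_self by simp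
  have img: "w ` part (m - 1) a = part (m - 1) (w a)" if "a \<in> part m a0" for a
    using preserves_parts_image[OF wb pw _ _ that] m by simp
  define C where "C = rt_children (part_subtree m a0)"
  define \<sigma> where "\<sigma> c = (fst c, w ` snd c)" for c :: "nat \<times> nat set"
  have \<sigma>C: "\<sigma> c \<in> C" if c: "c \<in> C" for c
  proof -
    obtain a where a: "c = (m - 1, part (m - 1) a)" "a \<in> part m a0" using c unfolding C_def children_eq by blast
    have "\<sigma> c = (m - 1, part (m - 1) (w a))" unfolding \<sigma>_def a(1) using img[OF a(2)] by simp
    then show ?thesis using child_of permutes_in_image[OF wp] a(2) unfolding C_def by simp
  qed
  have "inj_on \<sigma> C"
  proof (rule inj_onI)
    fix c d assume c: "c \<in> C" and d: "d \<in> C" and e: "\<sigma> c = \<sigma> d"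
    have "snd c \<subseteq> part m a0" "snd d \<subseteq> part m a0" using c d Union_children unfolding C_def by blast+
    moreover have "w ` snd c = w ` snd d" using e unfolding \<sigma>_def by simp
    ultimately have "snd c = snd d" using inj_on_image_eq_iff[OF ext_bijD(2)[OF wb]] by blast
    moreover have "fst c = fst d" using e unfolding \<sigma>_def by simp
    ultimately show "c = d" by (simp add: prod_eq_iff)
  qed
  then have "bij_betw \<sigma> C C"
    using endo_inj_surj[OF blocks.finite_blocks[folded C_def]] \<sigma>C unfolding bij_betw_def by blast
  then have perm: "restrict_id \<sigma> C permutes C" by (rule permutes_restrict_id)
  have "restrict_id w (snd c) \<in> part_iso p A c (restrict_id \<sigma> C c)" if c: "c \<in> C" for c
  proof -
    have sub: "snd c \<subseteq> part m a0" using c Union_children unfolding C_def by blast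
    have "bij_betw w (snd c) (w ` snd c)" using inj_on_subset[OF ext_bijD(2)[OF wb] sub] unfolding bij_betw_def by blast
    then have "restrict_id w (snd c) \<in> ext_bij (snd c) (snd (restrict_id \<sigma> C c))"
      using restrict_id_ext_bij c unfolding \<sigma>_def by simp
    then show ?thesis unfolding part_iso_def using preserves_parts_restrict[OF pw sub] by blast
  qed
  then have "blocks.lifts w (restrict_id \<sigma> C)" unfolding blocks.lifts_def using perm unfolding C_def by blast
  moreover have "w x = x" if "x \<notin> \<Union>(snd ` rt_children (part_subtree m a0))" for x
    using permutes_not_in[OF wp] that unfolding Union_children by simp
  ultimately show "w \<in> blocks.block_perms" unfolding blocks.block_perms_def by blast
qed

lemma block_perms_subset_part_stab: "blocks.block_perms \<subseteq> carrier (part_stab p A (part m a0))"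
proof
  fix w assume w: "w \<in> blocks.block_perms"
  obtain \<pi> where l: "blocks.lifts w \<pi>" using w unfolding blocks.block_perms_def by blast
  have perm: "\<pi> permutes rt_children (part_subtree m a0)" using l unfolding blocks.lifts_def by blast
  have wp: "w permutes part m a0" using blocks.block_perms_permutes[OF w] unfolding Union_children .
  define ch where "ch a = (m - 1, part (m - 1) a)" for a
  have chC: "ch a \<in> rt_children (part_subtree m a0)" "a \<in> snd (ch a)" if "a \<in> part m a0" for a
    using child_of[OF that] self_in_child[OF that] unfolding ch_def by simp_all
  have piece: "restrict_id w (part (m - 1) a) \<in> part_iso p A (ch a) (\<pi> (ch a))" if "a \<in> part m a0" for a
    using l chC(1)[OF that] unfolding blocks.lifts_def ch_def by auto
  have \<pi>ch: "\<exists>x. \<pi> (ch a) = (m - 1, part (m - 1) x)" if a: "a \<in> part m a0" for a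
    using blocks.lifts_ext_bij(1)[OF l chC(1)[OF a]] unfolding children_eq by blast
  have part_w: "part (m - 1) (w a) = snd (\<pi> (ch a))" if a: "a \<in> part m a0" for a
  proof -
    obtain x where x: "\<pi> (ch a) = (m - 1, part (m - 1) x)" using \<pi>ch[OF a] by blast
    have "w a \<in> snd (\<pi> (ch a))" by (rule blocks.lifts_maps_block[OF l chC[OF a]])
    then show ?thesis using x part_eq[of "w a" "m - 1" x] by simp
  qed
  have msuc: "Suc (m - 1) = m" using m by simp
  note glue = preserves_parts_glue[of "m - 1" a0 w a0, unfolded msuc]
  have "preserves_parts p A w (part m a0)"
  proof (rule glue)
    show "w a \<in> part m a0" if "a \<in> part m a0" for a using permutes_in_image[OF wp] that by simp
    fix a b assume a: "a \<in> part m a0" and b: "b \<in> part m a0"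
    have ab: "a \<in> {1..n}" "b \<in> {1..n}" "w a \<in> {1..n}" "w b \<in> {1..n}"
      using a b permutes_in_image[OF wp] subsetD[OF part_range] by auto
    have "same_part p A (m - 1) a b \<longleftrightarrow> ch a = ch b" unfolding ch_def using part_eq_iff ab by simp
    also have "\<dots> \<longleftrightarrow> \<pi> (ch a) = \<pi> (ch b)" using permutes_inj[OF perm] by (metis injD)
    also have "\<dots> \<longleftrightarrow> snd (\<pi> (ch a)) = snd (\<pi> (ch b))" using \<pi>ch[OF a] \<pi>ch[OF b] by auto
    also have "\<dots> \<longleftrightarrow> same_part p A (m - 1) (w a) (w b)"
      unfolding part_w[OF a, symmetric] part_w[OF b, symmetric] using part_eq_iff[OF ab(3,4)] .
    finally show "same_part p A (m - 1) a b \<longleftrightarrow> same_part p A (m - 1) (w a) (w b)" .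
    fix l :: nat assume s: "same_part p A (m - 1) a b" and l: "1 \<le> l"
    have "b \<in> part (m - 1) a" using s ab unfolding mem_part by simp
    moreover have "preserves_parts p A (restrict_id w (part (m - 1) a)) (part (m - 1) a)"
      using piece[OF a] unfolding part_iso_def ch_def by simp
    ultimately show "same_part p A l a b \<longleftrightarrow> same_part p A l (w a) (w b)"
      using self_in_child[OF a] l unfolding preserves_parts_def by fastforce
  qed
  then show "w \<in> carrier (part_stab p A (part m a0))" unfolding part_stab_def using wp by simp
qed

lemma part_stab_eq_block_perm_group: "part_stab p A (part m a0) = blocks.block_perm_group"
proof -
  have "carrier (part_stab p A (part m a0)) = blocks.block_perms"
    using part_stab_subset_block_perms block_perms_subset_part_stab by (rule subset_antisym)
  then show ?thesis unfolding part_stab_def blocks.block_perm_group_def by simp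
qed

theorem part_stab_iso_dprod:
  "part_stab p A (part m a0) \<cong> dprod (map (\<lambda>c. wreath (rt_mult (part_subtree m a0) c) (part_stab p A (snd c)))
     (rt_some_reps (part_subtree m a0)))"
proof -
  have m1: "1 \<le> m - 1" "m - 1 \<le> p + 1" "1 \<le> m" using m by auto
  interpret reps: block_system_reps "rt_children (part_subtree m a0)" snd "part_iso p A"
    "rt_some_reps (part_subtree m a0)" "rt_mult (part_subtree m a0)" "\<lambda>c. part_stab p A (snd c)"
  proof (rule blocks.block_system_reps_of_rt_reps[OF
        graded_tree.rt_reps_some_reps[OF graded_part_subtree[OF m1(3) m(2) a0]] refl])
    fix c d assume "c \<in> rt_children (part_subtree m a0)" "d \<in> rt_children (part_subtree m a0)"
    then obtain a b where ab: "c = (m - 1, part (m - 1) a)" "a \<in> part m a0"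
      "d = (m - 1, part (m - 1) b)" "b \<in> part m a0" unfolding children_eq by blast
    have "a \<in> {1..n}" "b \<in> {1..n}" using subsetD[OF part_range] ab(2,4) by auto
    show "part_iso p A c d \<noteq> {} \<longleftrightarrow>
        rt_isomorphic (rt_subtree (part_subtree m a0) c) (rt_subtree (part_subtree m a0) d)"
      unfolding ab(1,3) part_subtree_child_subtree[OF m a0 ab(2)] part_subtree_child_subtree[OF m a0 ab(4)]
      by (rule part_iso_nonempty_iff[OF m1(1,2) \<open>a \<in> {1..n}\<close> \<open>b \<in> {1..n}\<close>])
  next
    show "carrier (part_stab p A (snd c)) = part_iso p A c c" for c
      unfolding part_stab_def part_iso_def ext_bij_self by simp
    show "x \<otimes>\<^bsub>part_stab p A (snd c)\<^esub> y = restrict_id (x \<circ> y) (snd c)"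
      if "x \<in> part_iso p A c c" "y \<in> part_iso p A c c" for c x y
    proof
      fix z
      have "x \<in> ext_bij (snd c) (snd c)" "y \<in> ext_bij (snd c) (snd c)" using that unfolding part_iso_def by simp_all
      then have "x z = z" "y z = z" if "z \<notin> snd c" using ext_bijD(5) that by metis+
      then show "(x \<otimes>\<^bsub>part_stab p A (snd c)\<^esub> y) z = restrict_id (x \<circ> y) (snd c) z"
        unfolding part_stab_def by (cases "z \<in> snd c") simp_all
    qed
  qed
  have "part_stab p A (part m a0) \<cong> blocks.block_group"
    unfolding part_stab_eq_block_perm_group by (rule blocks.block_perm_group_iso)
  also have "blocks.block_group \<cong> dprod (map (\<lambda>c. wreath (rt_mult (part_subtree m a0) c) (part_stab p A (snd c)))
     (rt_some_reps (part_subtree m a0)))"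
    by (rule reps.block_group_iso_dprod)
  finally show ?thesis .
qed

end

end

context fission
begin

lemma part_stab_leaf:
  assumes a0: "a0 \<in> {1..n}"
  shows "part_stab p A (part 1 a0) = perm_group (part 1 a0)"
proof -
  have "preserves_parts p A w (part 1 a0)" if w: "w permutes part 1 a0" for w
    unfolding preserves_parts_def
  proof (intro allI impI ballI)
    fix l :: nat and a b assume l: "1 \<le> l" and a: "a \<in> part 1 a0" and b: "b \<in> part 1 a0"
    have "w a \<in> part 1 a0" "w b \<in> part 1 a0" using permutes_in_image[OF w] a b by simp_all
    then show "same_part p A l a b \<longleftrightarrow> same_part p A l (w a) (w b)"
      using same_part_in_part[OF a b l] same_part_in_part[OF _ _ l] by simp
  qed
  then show ?thesis unfolding part_stab_def perm_group_def by auto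
qed

lemma atilde_aux_leaf:
  assumes a0: "a0 \<in> {1..n}"
  shows "atilde_aux k (part_subtree 1 a0) = gsym (card (part 1 a0))"
proof (cases k)
  case 0
  then show ?thesis by (simp add: fission_rank)
next
  case (Suc k')
  have "rt_nodes (part_subtree 1 a0) = {rt_root (part_subtree 1 a0)}" using part_subtree_leaf[OF a0] by simp
  then show ?thesis unfolding Suc by (simp add: fission_rank)
qed

lemma atilde_aux_part_subtree:
  assumes m: "2 \<le> m" "m \<le> p + 1" and a0: "a0 \<in> {1..n}"
  shows "atilde_aux (Suc k) (part_subtree m a0) =
    gprod (map (\<lambda>c. gwreath (rt_mult (part_subtree m a0) c) (atilde_aux k (rt_subtree (part_subtree m a0) c)))
      (rt_some_reps (part_subtree m a0)))"
proof -
  have "(m - 1, part (m - 1) a0) \<in> rt_children (part_subtree m a0)"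
    unfolding part_subtree_children[OF m a0] using part_self[OF a0] by blast
  then have "rt_nodes (part_subtree m a0) \<noteq> {rt_root (part_subtree m a0)}"
    using rt_child_node unfolding rt_children_def by fastforce
  then show ?thesis by simp
qed

text \<open>The fuel \<open>k\<close> of \<open>atilde_aux\<close> must suffice to reach the leaves, which lie \<open>m - 1\<close> levels
  below a part at level \<open>m\<close>.\<close>

theorem part_stab_iso_atilde:
  "1 \<le> m \<Longrightarrow> m \<le> p + 1 \<Longrightarrow> a0 \<in> {1..n} \<Longrightarrow> m - 1 \<le> k \<Longrightarrow>
   part_stab p A (part m a0) \<cong> atilde_aux k (part_subtree m a0)"
proof (induction m arbitrary: a0 k)
  case (Suc m)
  have a0: "a0 \<in> {1..n}" and mp: "Suc m \<le> p + 1" using Suc.prems by simp_all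
  show ?case
  proof (cases "m = 0")
    case True
    have "part_stab p A (part 1 a0) \<cong> symg (card (part 1 a0))"
      unfolding part_stab_leaf[OF a0] by (rule perm_group_iso_symg[OF finite_part])
    also have "\<dots> \<cong> gsym (card (part 1 a0))" by (rule symg_iso_gsym)
    finally show ?thesis using True atilde_aux_leaf[OF a0] by simp
  next
    case False
    define T where "T = part_subtree (Suc m) a0"
    have m2: "2 \<le> Suc m" and m1: "1 \<le> m" using False by simp_all
    obtain k' where k: "k = Suc k'" "m - 1 \<le> k'" using Suc.prems(4) False by (cases k) auto
    have IH: "part_stab p A (snd c) \<cong> atilde_aux k' (rt_subtree T c)" if c: "c \<in> set (rt_some_reps T)" for c
    proof -
      have "c \<in> rt_children T"
        using graded_tree.rt_reps_some_reps[OF graded_part_subtree[OF _ mp a0]] c unfolding T_def rt_reps_def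
        by auto
      then obtain a where a: "c = (m, part m a)" "a \<in> part (Suc m) a0"
        unfolding T_def part_subtree_children[OF m2 mp a0] by auto
      have "rt_subtree T c = part_subtree m a"
        using part_subtree_child_subtree[OF m2 mp a0 a(2)] a(1) unfolding T_def by simp
      then show ?thesis using Suc.IH[OF m1 _ _ k(2)] mp subsetD[OF part_range a(2)] a(1) by simp
    qed
    have "part_stab p A (part (Suc m) a0) \<cong>
        dprod (map (\<lambda>c. wreath (rt_mult T c) (part_stab p A (snd c))) (rt_some_reps T))"
      using part_stab_iso_dprod[OF m2 mp a0] unfolding T_def .
    also have "\<dots> \<cong> dprod (map (\<lambda>c. gwreath (rt_mult T c) (atilde_aux k' (rt_subtree T c))) (rt_some_reps T))"
      by (rule dprod_wreath_iso_gwreath[OF IH])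
    also have "\<dots> \<cong> gprod (map (\<lambda>c. gwreath (rt_mult T c) (atilde_aux k' (rt_subtree T c))) (rt_some_reps T))"
      by (rule dprod_iso_gprod)
    also have "\<dots> = atilde_aux k T" unfolding k(1) T_def by (rule atilde_aux_part_subtree[OF m2 mp a0, symmetric])
    finally show ?thesis unfolding T_def .
  qed
qed simp

theorem stab_group_iso_atilde: "stab_group n p A \<cong> atilde FT"
proof -
  have one: "1 \<in> {1..n}" using n_pos by simp
  have FT: "FT = part_subtree (p + 1) 1" using fission_tree.subtree_root fission_root by simp
  have "(\<lambda>l. (l, part l 1)) ` {1..p+1} \<subseteq> rt_nodes FT" using fission_node one by auto
  moreover have "card ((\<lambda>l. (l, part l 1)) ` {1..p+1}) = p + 1" by (subst card_image) (auto simp: inj_on_def)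
  ultimately have "p + 1 \<le> card (rt_nodes FT)" using card_mono[OF fission_tree.finite_nodes] by metis
  then have "part_stab p A (part (p + 1) 1) \<cong> atilde FT"
    unfolding atilde_def using part_stab_iso_atilde[of "p + 1" 1] one FT by simp
  moreover have "part (p + 1) 1 = {1..n}" by (rule part_above) simp
  ultimately show ?thesis unfolding stab_group_eq_part_stab by simp
qed

end

theorem theorem4p13:
  fixes n p :: nat and A :: "nat \<Rightarrow> nat \<Rightarrow> complex"
  assumes "n \<ge> 2" and "p \<ge> 1"
    and "\<forall>j\<in>{1..p}. (\<Sum>a=1..n. A j a) = 0"
  shows "stab_group n p A \<cong> atilde (fission_tree n p A)
    \<and> rt_aut (fission_tree n p A) \<cong>
        dprod (map (\<lambda>c. wreath (rt_mult (fission_tree n p A) c)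
                               (rt_aut (rt_subtree (fission_tree n p A) c)))
                   (rt_some_reps (fission_tree n p A)))
    \<and> (\<forall>T' :: 'v rtree. rt_nodes T' = {rt_root T'} \<longrightarrow>
         carrier (rt_aut T') = {one (rt_aut T')})"
proof -
  interpret fission n p A using assms(1) by unfold_locales simp
  show ?thesis
    using stab_group_iso_atilde fission_tree.rt_aut_iso_dprod rt_aut_single_node by blast
qed

end
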